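(* Let $G$ be a plane graph with a weak labeling, and let $T_0,T_1$ be the sets of oriented edges of colors $0$ and $1$ as induced by the labeling. Then there is no directed cycle in $T_0\cup T_1^{-1}$, nor in $T_1\cup T_0^{-1}$.
   Context: An angle of a plane graph is an incidence of a vertex with a face (a corner of a face at a vertex). A weak labeling of a plane graph $G$ is a map from the angles of $G$ to $\{0,1\}$ such that: (G0) there are two special vertices $s_0,s_1$ on the outer face with all angles at $s_i$ labeled $i$; (G1) for each vertex $v\notin\{s_0,s_1\}$ the labels around $v$ form one non-empty cyclic interval of $1$s and one non-empty cyclic interval of $0$s; (G2) for each edge, the two labels on the two sides of the edge coincide at one endpoint and differ at the other; (G3) for each face (including the outer face), its labels, read cyclically, form one non-empty interval of $1$s and one non-empty interval of $0$s. A weak labeling induces a coloring and orientation of the edges: each edge is colored with the common label at the endpoint where its two labels coincide, and is oriented towards that endpoint. $T_i$ denotes the set of edges of color $i$ with this orientation, and $T_i^{-1}$ the same edges with reversed orientation. *)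

theory Defs
  imports Main
begin

text \<open>Plane graphs are represented combinatorially as connected planar maps
(rotation systems): a finite set of darts D (half-edges), a fixed-point-free
involution alpha pairing the two darts of an edge, and a permutation sigma
giving the cyclic (rotation) order of darts around their tail vertex.
Planarity is Euler's formula V - E + F = 2 for the connected map.

Angles are identified with darts: dart d stands for the corner at the tail
vertex of d between sigma^-1 d and d.  This corner lies in the face
(the (sigma o alpha)-orbit) containing d; around a vertex the angles are
cyclically ordered by sigma, around a face by sigma o alpha.\<close>

definition orb :: "('d \<Rightarrow> 'd) \<Rightarrow> 'd \<Rightarrow> 'd set" where
  "orb p d = {(p ^^ n) d | n. True}"

definition map_vertices :: "'d set \<Rightarrow> ('d \<Rightarrow> 'd) \<Rightarrow> 'd set set" where
  "map_vertices D sigma = orb sigma ` D"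

definition map_edges :: "'d set \<Rightarrow> ('d \<Rightarrow> 'd) \<Rightarrow> 'd set set" where
  "map_edges D alpha = orb alpha ` D"

definition map_faces :: "'d set \<Rightarrow> ('d \<Rightarrow> 'd) \<Rightarrow> ('d \<Rightarrow> 'd) \<Rightarrow> 'd set set" where
  "map_faces D alpha sigma = orb (sigma \<circ> alpha) ` D"

definition plane_map :: "'d set \<Rightarrow> ('d \<Rightarrow> 'd) \<Rightarrow> ('d \<Rightarrow> 'd) \<Rightarrow> bool" where
  "plane_map D alpha sigma \<longleftrightarrow>
     finite D \<and>
     (\<forall>d\<in>D. alpha d \<in> D \<and> alpha d \<noteq> d \<and> alpha (alpha d) = d) \<and>
     bij_betw sigma D D \<and>
     (\<forall>d\<in>D. \<forall>e\<in>D. (d, e) \<in> ({(x, alpha x) | x. x \<in> D} \<union> {(x, sigma x) | x. x \<in> D})\<^sup>*) \<and>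
     int (card (map_vertices D sigma)) - int (card (map_edges D alpha))
       + int (card (map_faces D alpha sigma)) = 2"

definition two_intervals :: "('d \<Rightarrow> 'd) \<Rightarrow> 'd set \<Rightarrow> ('d \<Rightarrow> nat) \<Rightarrow> bool" where
  "two_intervals p C lab \<longleftrightarrow>
     (\<exists>d\<in>C. \<exists>k. 0 < k \<and> k < card C \<and>
        (\<forall>i < card C. lab ((p ^^ i) d) = (if i < k then 1 else 0)))"

definition weak_labeling ::
  "'d set \<Rightarrow> ('d \<Rightarrow> 'd) \<Rightarrow> ('d \<Rightarrow> 'd) \<Rightarrow> 'd set \<Rightarrow> 'd set \<Rightarrow> 'd set \<Rightarrow> ('d \<Rightarrow> nat) \<Rightarrow> bool" where
  "weak_labeling D alpha sigma fo s0 s1 lab \<longleftrightarrow>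
     fo \<in> map_faces D alpha sigma \<and>
     (\<forall>d\<in>D. lab d \<in> {0, 1}) \<and>
     \<comment> \<open>(G0)\<close>
     s0 \<in> map_vertices D sigma \<and> s1 \<in> map_vertices D sigma \<and> s0 \<noteq> s1 \<and>
     s0 \<inter> fo \<noteq> {} \<and> s1 \<inter> fo \<noteq> {} \<and>
     (\<forall>d\<in>s0. lab d = 0) \<and> (\<forall>d\<in>s1. lab d = 1) \<and>
     \<comment> \<open>(G1)\<close>
     (\<forall>v \<in> map_vertices D sigma - {s0, s1}. two_intervals sigma v lab) \<and>
     \<comment> \<open>(G2): at the tail of d the two sides of edge d are the angles d and sigma d\<close>
     (\<forall>d\<in>D. (lab d = lab (sigma d)) \<noteq> (lab (alpha d) = lab (sigma (alpha d)))) \<and>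
     \<comment> \<open>(G3), all faces including the outer one\<close>
     (\<forall>f \<in> map_faces D alpha sigma. two_intervals (sigma \<circ> alpha) f lab)"

text \<open>T i: edges of color i, oriented towards the endpoint where the two labels
coincide.  The edge {d, alpha d} whose labels coincide at the tail of d is the arc
from the vertex of alpha d to the vertex of d.\<close>
definition colored_arcs ::
  "'d set \<Rightarrow> ('d \<Rightarrow> 'd) \<Rightarrow> ('d \<Rightarrow> 'd) \<Rightarrow> ('d \<Rightarrow> nat) \<Rightarrow> nat \<Rightarrow> ('d set \<times> 'd set) set" where
  "colored_arcs D alpha sigma lab i =
     {(orb sigma (alpha d), orb sigma d) | d. d \<in> D \<and> lab d = lab (sigma d) \<and> lab d = i}"

end

theory Submission
  imports Defs "HOL-Combinatorics.Transposition"
begin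

text \<open>
  Suppose that the arcs of T_c together with the reversed arcs of T_(1-c) contain a directed
  cycle, and pick for each of its arcs the dart at the tail.  Cutting the map open along the cycle doubles its \<open>k\<close> edges and splits each of its
  \<open>k\<close> vertices into two, while every face survives and the two sides of the cycle become two
  new faces; so the cut map has Euler characteristic at least 4.  A connected map has
  characteristic at most 2 (Euler's inequality, proved by inserting the edges one at a time),
  hence the cut map consists of exactly two components, the two sides of the cycle.

  On a side without a pole, every vertex and every old face carries exactly two label changes
  (G1, G3), every edge accounts for exactly two of them (G2), and along the cycle the
  orientation of the arcs makes the changes telescope.  This bounds the characteristic of that
  side by 1, which together with Euler's inequality for the other side contradicts the bound 4.
  So both sides contain a pole.  But the two poles lie on the outer face, which is not cut, so
  they are in the same component and the two sides coincide.
\<close>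

section \<open>Orbits of permutations of finite sets\<close>

definition perm_on :: "('a \<Rightarrow> 'a) \<Rightarrow> 'a set \<Rightarrow> bool" where
  "perm_on p S \<longleftrightarrow> finite S \<and> bij_betw p S S"

definition orbit_count :: "('a \<Rightarrow> 'a) \<Rightarrow> 'a set \<Rightarrow> nat" where
  "orbit_count p S = card (orb p ` S)"

lemma orb_self: "x \<in> orb p x"
  unfolding orb_def by (auto intro: exI[of _ 0])

lemma orb_iter: "(p ^^ n) x \<in> orb p x"
  unfolding orb_def by auto

lemma orb_closed: "y \<in> orb p x \<Longrightarrow> p y \<in> orb p x"
  unfolding orb_def by (auto intro: exI[of _ "Suc _"])

lemma orb_least:
  assumes "\<And>z. z \<in> T \<Longrightarrow> p z \<in> T" "x \<in> T"
  shows "orb p x \<subseteq> T"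
proof -
  have "(p ^^ n) x \<in> T" for n by (induct n) (use assms in auto)
  thus ?thesis unfolding orb_def by auto
qed

lemma orb_subset: "y \<in> orb p x \<Longrightarrow> orb p y \<subseteq> orb p x"
  by (rule orb_least) (auto intro: orb_closed)

lemma orb_cong:
  assumes "\<And>z. z \<in> T \<Longrightarrow> p z \<in> T" "\<And>z. z \<in> T \<Longrightarrow> q z = p z" "x \<in> T"
  shows "orb q x = orb p x"
proof -
  have "(q ^^ n) x = (p ^^ n) x \<and> (p ^^ n) x \<in> T" for n
    by (induct n) (use assms in auto)
  thus ?thesis unfolding orb_def by auto
qed

lemma orb_image_conj:
  assumes "\<And>x. x \<in> A \<Longrightarrow> p x \<in> A" "\<And>x. x \<in> A \<Longrightarrow> q (f x) = f (p x)" "x \<in> A"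
  shows "orb q (f x) = f ` orb p x"
proof -
  have "(q ^^ n) (f x) = f ((p ^^ n) x) \<and> (p ^^ n) x \<in> A" for n
    by (induct n) (use assms in auto)
  thus ?thesis unfolding orb_def by auto
qed

lemma orb_cyclic:
  assumes "0 < n" "(p ^^ n) x = x" and y: "y \<in> orb p x"
  shows "x \<in> orb p y"
proof -
  obtain k where k: "y = (p ^^ k) x" using y unfolding orb_def by blast
  have "(p ^^ (n * k - k)) y = (p ^^ (n * k - k + k)) x"
    unfolding k by (simp only: funpow_add o_apply)
  also have "n * k - k + k = n * k" using assms(1) by simp
  also have "(p ^^ (n * k)) x = x" using funpow_mod_eq[OF assms(2), of "n * k"] by simp
  finally show ?thesis unfolding orb_def by auto
qed

lemma perm_on_mem: "perm_on p S \<Longrightarrow> x \<in> S \<Longrightarrow> p x \<in> S"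
  unfolding perm_on_def bij_betw_def by auto

lemma perm_on_funpow_mem: "perm_on p S \<Longrightarrow> x \<in> S \<Longrightarrow> (p ^^ n) x \<in> S"
  by (induct n) (auto intro: perm_on_mem)

lemma orb_subset_carrier: "perm_on p S \<Longrightarrow> x \<in> S \<Longrightarrow> orb p x \<subseteq> S"
  by (rule orb_least) (auto intro: perm_on_mem)

lemma perm_on_comp: "perm_on p S \<Longrightarrow> perm_on q S \<Longrightarrow> perm_on (p \<circ> q) S"
  unfolding perm_on_def by (auto intro: bij_betw_trans)

lemma perm_on_involution:
  assumes "finite S" "\<And>x. x \<in> S \<Longrightarrow> p x \<in> S \<and> p (p x) = x"
  shows "perm_on p S"
proof -
  have "bij_betw p S S"
    by (rule bij_betw_byWitness[where f'=p]) (use assms(2) in auto)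
  thus ?thesis using assms(1) unfolding perm_on_def by blast
qed

lemma perm_on_periodic:
  assumes perm: "perm_on p S" and x: "x \<in> S"
  obtains n where "0 < n" "(p ^^ n) x = x"
proof -
  have fin: "finite S" and bij: "bij_betw p S S" using perm unfolding perm_on_def by auto
  have sub: "(\<lambda>n. (p ^^ n) x) ` {0..card S} \<subseteq> S"
    using perm_on_funpow_mem[OF perm x] by auto
  have "\<not> inj_on (\<lambda>n. (p ^^ n) x) {0..card S}"
  proof
    assume "inj_on (\<lambda>n. (p ^^ n) x) {0..card S}"
    hence "card ((\<lambda>n. (p ^^ n) x) ` {0..card S}) = Suc (card S)" by (simp add: card_image)
    thus False using card_mono[OF fin sub] by simp
  qed
  then obtain i j where "i \<noteq> j" "(p ^^ i) x = (p ^^ j) x" unfolding inj_on_def by blast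
  then obtain i j where ij: "i < j" "(p ^^ i) x = (p ^^ j) x" by (metis linorder_neqE_nat)
  have "(p ^^ i) ((p ^^ (j - i)) x) = (p ^^ (i + (j - i))) x" by (simp add: funpow_add)
  hence "(p ^^ i) ((p ^^ (j - i)) x) = (p ^^ i) x" using ij by simp
  moreover have "inj_on (p ^^ i) S" using bij_betw_funpow[OF bij] bij_betw_def by blast
  ultimately have "(p ^^ (j - i)) x = x"
    using x perm_on_funpow_mem[OF perm x] unfolding inj_on_def by blast
  thus thesis using that[of "j - i"] ij(1) by simp
qed

lemma orb_sym:
  assumes "perm_on p S" "x \<in> S" "y \<in> orb p x"
  shows "x \<in> orb p y"
  using perm_on_periodic[OF assms(1,2)] orb_cyclic assms(3) by metis

lemma orb_eq:
  assumes "perm_on p S" "x \<in> S" "y \<in> orb p x"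
  shows "orb p y = orb p x"
  using orb_subset[OF assms(3)] orb_subset[OF orb_sym[OF assms]] by auto

lemma orb_step_eq: "perm_on p S \<Longrightarrow> x \<in> S \<Longrightarrow> orb p (p x) = orb p x"
  by (rule orb_eq) (auto intro: orb_closed orb_self)

lemma orb_eq_if_meet:
  assumes "perm_on p S" "x \<in> S" "y \<in> S" "z \<in> orb p x" "z \<in> orb p y"
  shows "orb p x = orb p y"
  using orb_eq[OF assms(1,2,4)] orb_eq[OF assms(1,3,5)] by simp

lemma perm_on_restrict:
  assumes "perm_on p S" "K \<subseteq> S" "\<And>z. z \<in> K \<Longrightarrow> p z \<in> K"
  shows "perm_on p K" "\<And>z. z \<in> S - K \<Longrightarrow> p z \<in> S - K" "perm_on p (S - K)"
proof -
  have fin: "finite S" and inj: "inj_on p S" and pS: "p ` S = S"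
    using assms(1) unfolding perm_on_def bij_betw_def by auto
  have injK: "inj_on p K" using inj assms(2) by (rule inj_on_subset)
  have pK: "p ` K = K"
    by (rule endo_inj_surj[OF finite_subset[OF assms(2) fin] _ injK]) (use assms(3) in blast)
  show "perm_on p K"
    unfolding perm_on_def bij_betw_def using finite_subset[OF assms(2) fin] pK injK by blast
  have pSK: "p ` (S - K) = S - K"
    using inj_on_image_set_diff[OF inj Diff_subset assms(2)] pS pK by simp
  thus "\<And>z. z \<in> S - K \<Longrightarrow> p z \<in> S - K" by blast
  show "perm_on p (S - K)"
    unfolding perm_on_def bij_betw_def using fin pSK inj_on_subset[OF inj Diff_subset] by blast
qed

lemma orbit_count_split:
  assumes "perm_on p S" "K \<subseteq> S" "\<And>z. z \<in> K \<Longrightarrow> p z \<in> K"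
  shows "orbit_count p S = orbit_count p K + orbit_count p (S - K)"
proof -
  have fin: "finite S" using assms(1) unfolding perm_on_def by blast
  have "orb p ` K \<inter> orb p ` (S - K) = {}"
  proof (intro equals0I)
    fix B assume "B \<in> orb p ` K \<inter> orb p ` (S - K)"
    then obtain x y where "x \<in> K" "y \<in> S - K" "orb p x = orb p y" by blast
    thus False using orb_least[where T=K and p=p, OF assms(3) \<open>x \<in> K\<close>] orb_self[of y p]
      by auto
  qed
  moreover have "orb p ` S = orb p ` K \<union> orb p ` (S - K)" using assms(2) by blast
  ultimately show ?thesis
    unfolding orbit_count_def using fin finite_subset[OF assms(2) fin]
    by (simp add: card_Un_disjoint)
qed

lemma orbit_count_conj:
  assumes inj: "inj_on f A" and cl: "\<And>x. x \<in> A \<Longrightarrow> p x \<in> A"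
    and cm: "\<And>x. x \<in> A \<Longrightarrow> q (f x) = f (p x)"
  shows "orbit_count q (f ` A) = orbit_count p A"
proof -
  have "orb q ` f ` A = (\<lambda>x. f ` orb p x) ` A"
    unfolding image_image using orb_image_conj[of A p q f, OF cl cm] by (rule image_cong[OF refl])
  hence "orb q ` f ` A = (\<lambda>B. f ` B) ` (orb p ` A)" by (simp add: image_image)
  moreover have "inj_on (\<lambda>B. f ` B) (orb p ` A)"
  proof (rule inj_onI)
    fix B1 B2 assume "B1 \<in> orb p ` A" "B2 \<in> orb p ` A" "f ` B1 = f ` B2"
    moreover have "B1 \<subseteq> A" "B2 \<subseteq> A"
      using \<open>B1 \<in> orb p ` A\<close> \<open>B2 \<in> orb p ` A\<close> orb_least[of A p, OF cl]
        by blast+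
    ultimately show "B1 = B2" using inj inj_on_image_eq_iff by metis
  qed
  ultimately show ?thesis unfolding orbit_count_def by (simp add: card_image)
qed

lemma sum_over_orbits:
  assumes "perm_on p S"
  shows "sum f S = (\<Sum>B\<in>orb p ` S. sum f B)"
proof -
  have fin: "finite S" using assms unfolding perm_on_def by blast
  have "\<Union>(orb p ` S) = S"
  proof
    show "\<Union>(orb p ` S) \<subseteq> S" using orb_subset_carrier[OF assms] by blast
    show "S \<subseteq> \<Union>(orb p ` S)" using orb_self[of _ p] by blast
  qed
  moreover have "\<forall>A\<in>orb p ` S. finite A"
    using orb_subset_carrier[OF assms] fin finite_subset by blast
  moreover have "\<forall>A\<in>orb p ` S. \<forall>B\<in>orb p ` S. A \<noteq> B \<longrightarrow> A \<inter> B = {}"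
  proof (intro ballI impI)
    fix A B assume "A \<in> orb p ` S" "B \<in> orb p ` S" "A \<noteq> B"
    then obtain x y where "x \<in> S" "y \<in> S" "A = orb p x" "B = orb p y" by blast
    thus "A \<inter> B = {}" using orb_eq_if_meet[OF assms, of x y] \<open>A \<noteq> B\<close>
      by blast
  qed
  ultimately show ?thesis using sum.Union_disjoint[of "orb p ` S" f] by simp
qed

lemma orb_period:
  assumes perm: "perm_on p S" and d: "d \<in> S"
  defines "q \<equiv> LEAST n. 0 < n \<and> (p ^^ n) d = d"
  shows "(p ^^ q) d = d" "inj_on (\<lambda>i. (p ^^ i) d) {..<q}"
    "orb p d = (\<lambda>i. (p ^^ i) d) ` {..<q}" "card (orb p d) = q"
proof -
  obtain n where "0 < n" "(p ^^ n) d = d" using perm_on_periodic[OF perm d] .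
  hence q: "0 < q \<and> (p ^^ q) d = d" unfolding q_def by (metis (mono_tags) LeastI)
  thus "(p ^^ q) d = d" by simp
  have min: "(p ^^ m) d \<noteq> d" if "0 < m" "m < q" for m
    using that not_less_Least[where P="\<lambda>n. 0 < n \<and> (p ^^ n) d = d"] unfolding q_def
      by blast
  have "inj_on (\<lambda>i. (p ^^ i) d) {0..<q}" by (rule inj_on_funpow_least) (use q min in auto)
  thus inj: "inj_on (\<lambda>i. (p ^^ i) d) {..<q}" by (simp add: atLeast0LessThan)
  show orbq: "orb p d = (\<lambda>i. (p ^^ i) d) ` {..<q}"
  proof
    show "orb p d \<subseteq> (\<lambda>i. (p ^^ i) d) ` {..<q}"
    proof
      fix y assume "y \<in> orb p d"
      then obtain m where "y = (p ^^ m) d" unfolding orb_def by blast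
      hence "y = (p ^^ (m mod q)) d" using funpow_mod_eq[OF conjunct2[OF q], of m] by simp
      moreover have "m mod q < q" using q by simp
      ultimately show "y \<in> (\<lambda>i. (p ^^ i) d) ` {..<q}" by blast
    qed
  qed (auto simp: orb_def)
  show "card (orb p d) = q" unfolding orbq using card_image[OF inj] by simp
qed

lemma card_le_2_orbit_count:
  assumes perm: "perm_on p S" and inv: "\<And>x. x \<in> S \<Longrightarrow> p (p x) = x"
  shows "card S \<le> 2 * orbit_count p S"
proof -
  have "card S = (\<Sum>x\<in>S. 1::nat)" by simp
  also have "\<dots> = (\<Sum>B\<in>orb p ` S. \<Sum>x\<in>B. 1::nat)"
    by (rule sum_over_orbits[OF perm])
  also have "\<dots> \<le> (\<Sum>B\<in>orb p ` S. 2)"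
  proof (rule sum_mono)
    fix B assume "B \<in> orb p ` S"
    then obtain x where x: "x \<in> S" "B = orb p x" by blast
    have "orb p x \<subseteq> {x, p x}"
    proof (rule orb_least)
      show "x \<in> {x, p x}" by simp
      fix z assume "z \<in> {x, p x}" thus "p z \<in> {x, p x}" using inv[OF x(1)] by auto
    qed
    hence "card B \<le> card {x, p x}" using x by (simp add: card_mono)
    also have "\<dots> \<le> 2" by (simp add: card_insert_if)
    finally show "(\<Sum>x\<in>B. 1::nat) \<le> 2" by simp
  qed
  also have "\<dots> = 2 * orbit_count p S" unfolding orbit_count_def by simp
  finally show ?thesis .
qed

lemma two_intervals_changes:
  assumes perm: "perm_on p S" and d0: "d0 \<in> S" and ti: "two_intervals p (orb p d0) lab"
  shows "(\<Sum>e\<in>orb p d0. (if lab e = lab (p e) then 0 else 1::nat)) = 2"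
proof -
  obtain d k where d: "d \<in> orb p d0" and k: "0 < k" "k < card (orb p d0)"
    and lk: "\<And>i. i < card (orb p d0) \<Longrightarrow> lab ((p ^^ i) d) = (if i < k then 1 else 0)"
    using ti unfolding two_intervals_def by blast
  have od: "orb p d = orb p d0" by (rule orb_eq[OF perm d0 d])
  have dS: "d \<in> S" using orb_subset_carrier[OF perm d0] d by blast
  define N where "N = card (orb p d0)"
  have NN: "N = (LEAST n. n > 0 \<and> (p ^^ n) d = d)" using orb_period(4)[OF perm dS] od
    unfolding N_def by simp
  have pN: "(p ^^ N) d = d" using orb_period(1)[OF perm dS] NN by simp
  have inj: "inj_on (\<lambda>i. (p ^^ i) d) {..<N}" using orb_period(2)[OF perm dS] NN by simp
  have oe: "orb p d0 = (\<lambda>i. (p ^^ i) d) ` {..<N}" using orb_period(3)[OF perm dS] NN od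
    by simp
  have "(\<Sum>e\<in>orb p d0. (if lab e = lab (p e) then 0 else 1::nat)) =
        (\<Sum>i<N. (if lab ((p ^^ i) d) = lab (p ((p ^^ i) d)) then 0 else 1))"
    unfolding oe using sum.reindex[OF inj, of "\<lambda>e. (if lab e = lab (p e) then 0 else 1::nat)"]
    by (simp add: comp_def)
  also have "\<dots> = (\<Sum>i<N. (if i = k - 1 \<or> i = N - 1 then 1 else 0))"
  proof (rule sum.cong[OF refl])
    fix i assume i: "i \<in> {..<N}"
    have li: "lab ((p ^^ i) d) = (if i < k then 1 else 0)" using lk i unfolding N_def by simp
    have "p ((p ^^ i) d) = (p ^^ Suc i) d" by simp
    moreover have "lab ((p ^^ Suc i) d) = (if Suc i < N then (if Suc i < k then 1 else 0) else 1)"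
    proof (cases "Suc i < N")
      case True thus ?thesis using lk[of "Suc i"] unfolding N_def by (simp del: funpow.simps)
    next
      case False hence "Suc i = N" using i by simp
      hence "lab ((p ^^ Suc i) d) = lab d" using pN by simp
      also have "\<dots> = 1" using lk[of 0] k unfolding N_def by simp
      finally show ?thesis using False by simp
    qed
    ultimately show "(if lab ((p ^^ i) d) = lab (p ((p ^^ i) d)) then 0 else 1) =
                     (if i = k - 1 \<or> i = N - 1 then 1 else (0::nat))"
      using li i k unfolding N_def by auto
  qed
  also have "\<dots> = 2"
  proof -
    have "k - 1 \<noteq> N - 1" "k - 1 < N" "N - 1 < N" using k unfolding N_def by auto
    hence "{i\<in>{..<N}. i = k - 1 \<or> i = N - 1} = {k - 1, N - 1}" by auto
    moreover have "(\<Sum>i<N. (if i = k - 1 \<or> i = N - 1 then 1 else 0::nat)) = card {i\<in>{..<N}. i = k -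
        1 \<or> i = N - 1}"
      by (simp add: sum.If_cases Int_def)
    ultimately show ?thesis using \<open>k - 1 \<noteq> N - 1\<close> by simp
  qed
  finally show ?thesis .
qed

lemma path_changes_ge:
  fixes f :: "nat \<Rightarrow> nat"
  assumes "1 \<le> m"
  shows "(\<Sum>n<m. (if f n = f (Suc n) then 0 else 1::nat)) \<ge>
         (if f 0 = f 1 then 0 else 1) + (if f 1 = f m then 0 else 1)"
  using assms
proof (induct m)
  case 0 thus ?case by simp
next
  case (Suc m)
  show ?case
  proof (cases "m = 0")
    case True thus ?thesis by simp
  next
    case False
    hence IH: "(\<Sum>n<m. (if f n = f (Suc n) then 0 else 1::nat)) \<ge>
         (if f 0 = f 1 then 0 else 1) + (if f 1 = f m then 0 else 1)" using Suc by simp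
    have "(\<Sum>n<Suc m. (if f n = f (Suc n) then 0 else 1::nat)) =
          (\<Sum>n<m. (if f n = f (Suc n) then 0 else 1::nat)) + (if f m = f (Suc m) then 0 else 1)" by simp
    moreover have "(if f 1 = f m then 0 else 1::nat) + (if f m =
        f (Suc m) then 0 else 1) \<ge> (if f 1 = f (Suc m) then 0 else 1)"
      by auto
    ultimately show ?thesis using IH by linarith
  qed
qed

lemma cycle_of_not_acyclic:
  assumes "\<not> acyclic R" and fin: "finite (Domain R)"
  shows "\<exists>C f. C \<noteq> {} \<and> (\<forall>v\<in>C. (v, f v) \<in> R \<and> f v \<in> C) \<and> (\<forall>v\<in>C. \<forall>w\<in>C. w \<in> orb f v)"
proof -
  define W where "W = {v. (v, v) \<in> R\<^sup>+}"
  obtain v0 where v0: "v0 \<in> W" using assms(1) unfolding acyclic_def W_def by blast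
  have "\<forall>v\<in>W. \<exists>w. (v, w) \<in> R \<and> w \<in> W"
  proof
    fix v assume vW: "v \<in> W"
    have "(v, v) \<in> R\<^sup>+" using vW unfolding W_def by simp
    then obtain w where w: "(v, w) \<in> R" "(w, v) \<in> R\<^sup>*" by (blast dest: tranclD)
    have "(w, w) \<in> R\<^sup>+" using w by (meson rtrancl_into_trancl1)
    thus "\<exists>w. (v, w) \<in> R \<and> w \<in> W" using w unfolding W_def by blast
  qed
  hence "\<exists>f. \<forall>v\<in>W. (v, f v) \<in> R \<and> f v \<in> W" by (rule bchoice)
  then obtain f where f: "\<And>v. v \<in> W \<Longrightarrow> (v, f v) \<in> R \<and> f v \<in> W"
    by blast
  have "W \<subseteq> Domain R" using f by blast
  hence finW: "finite W" using fin finite_subset by blast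
  have itW: "(f ^^ n) v0 \<in> W" for n by (induct n) (use v0 f in auto)
  have "\<not> inj_on (\<lambda>n. (f ^^ n) v0) {0..card W}"
  proof
    assume "inj_on (\<lambda>n. (f ^^ n) v0) {0..card W}"
    hence "card ((\<lambda>n. (f ^^ n) v0) ` {0..card W}) = Suc (card W)" by (simp add: card_image)
    moreover have "(\<lambda>n. (f ^^ n) v0) ` {0..card W} \<subseteq> W" using itW by blast
    hence "card ((\<lambda>n. (f ^^ n) v0) ` {0..card W}) \<le> card W" by (rule card_mono[OF finW])
    ultimately show False by simp
  qed
  then obtain i j where "i \<noteq> j" "(f ^^ i) v0 = (f ^^ j) v0" unfolding inj_on_def by blast
  then obtain i j where ij: "i < j" "(f ^^ i) v0 = (f ^^ j) v0" by (metis linorder_neqE_nat)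
  define u where "u = (f ^^ i) v0"
  have "(f ^^ (j - i)) u = (f ^^ (j - i + i)) v0" unfolding u_def by (simp add: funpow_add)
  hence period: "(f ^^ (j - i)) u = u" using ij unfolding u_def by simp
  have uW: "u \<in> W" unfolding u_def by (rule itW)
  have "orb f u \<noteq> {}" using orb_self[of u f] by blast
  moreover have "orb f u \<subseteq> W" by (rule orb_least) (use f uW in auto)
  hence "\<forall>v\<in>orb f u. (v, f v) \<in> R \<and> f v \<in> orb f u"
    using f orb_closed[of _ f u] by blast
  moreover have "w \<in> orb f v" if v: "v \<in> orb f u" and w: "w \<in> orb f u" for v w
  proof -
    have "u \<in> orb f v" by (rule orb_cyclic[OF _ period v]) (use ij in simp)
    thus ?thesis using orb_subset w by (metis subsetD)
  qed
  ultimately show ?thesis by blast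
qed

section \<open>Transpositions merge or split orbits\<close>

lemma card_image_merge_classes:
  assumes fin: "finite S" and ab: "a \<in> S" "b \<in> S" "f a \<noteq> f b"
    and self: "\<And>x. x \<in> S \<Longrightarrow> x \<in> f x"
    and cls: "\<And>x y. x \<in> S \<Longrightarrow> y \<in> f x \<Longrightarrow> f y = f x"
    and g: "\<And>x. x \<in> S \<Longrightarrow> g x = (if x \<in> f a \<union> f b then f a \<union> f b else f x)"
  shows "card (f ` S) = card (g ` S) + 1"
proof -
  define U where "U = f a \<union> f b"
  define R where "R = S - U"
  have gS: "g ` S = insert U (f ` R)"
  proof
    show "g ` S \<subseteq> insert U (f ` R)" using g unfolding U_def R_def by auto
    show "insert U (f ` R) \<subseteq> g ` S"
    proof -
      have "g a = U" using g ab self unfolding U_def by auto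
      hence "U \<in> g ` S" using ab by (metis imageI)
      moreover have "f ` R \<subseteq> g ` S"
      proof
        fix X assume "X \<in> f ` R"
        then obtain x where "x \<in> R" "X = f x" by blast
        hence "g x = X" "x \<in> S" using g unfolding R_def U_def by auto
        thus "X \<in> g ` S" by (metis imageI)
      qed
      ultimately show ?thesis by blast
    qed
  qed
  have fS: "f ` S = insert (f a) (insert (f b) (f ` R))"
  proof
    show "f ` S \<subseteq> insert (f a) (insert (f b) (f ` R))"
    proof
      fix X assume "X \<in> f ` S"
      then obtain x where x: "x \<in> S" "X = f x" by blast
      show "X \<in> insert (f a) (insert (f b) (f ` R))"
      proof (cases "x \<in> U")
        case True
        hence "f x = f a \<or> f x = f b" using cls ab unfolding U_def by blast
        thus ?thesis using x by blast
      next
        case False thus ?thesis using x unfolding R_def by blast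
      qed
    qed
    show "insert (f a) (insert (f b) (f ` R)) \<subseteq> f ` S" using ab unfolding R_def by blast
  qed
  have nR: "f x \<noteq> f a" "f x \<noteq> f b" "f x \<noteq> U" if "x \<in> R" for x
  proof -
    have xS: "x \<in> S" "x \<notin> U" using that unfolding R_def by auto
    show "f x \<noteq> f a" using self[OF xS(1)] xS(2) unfolding U_def by blast
    show "f x \<noteq> f b" using self[OF xS(1)] xS(2) unfolding U_def by blast
    show "f x \<noteq> U" using self[OF xS(1)] xS(2) by blast
  qed
  have finR: "finite (f ` R)" using fin unfolding R_def by blast
  have "card (g ` S) = card (f ` R) + 1" unfolding gS using finR nR(3)
    by (auto simp: card_insert_if)
  moreover have "card (f ` S) = card (f ` R) + 2" unfolding fS using finR nR(1,2) ab(3)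
    by (auto simp: card_insert_if)
  ultimately show ?thesis by simp
qed

lemma card_image_split_class:
  assumes fin: "finite S" and a: "a \<in> S"
    and self: "\<And>x. x \<in> S \<Longrightarrow> x \<in> f x"
    and cls: "\<And>x y. x \<in> S \<Longrightarrow> y \<in> f x \<Longrightarrow> f y = f x"
    and g1: "\<And>x. x \<in> S \<Longrightarrow> x \<notin> f a \<Longrightarrow> g x = f x"
    and g2: "\<And>x. x \<in> S \<Longrightarrow> x \<in> f a \<Longrightarrow> g x = A \<or> g x = B"
  shows "card (g ` S) \<le> card (f ` S) + 1"
proof -
  define R where "R = S - f a"
  have "g ` S \<subseteq> insert A (insert B (f ` R))"
  proof
    fix X assume "X \<in> g ` S"
    then obtain x where x: "x \<in> S" "X = g x" by blast
    show "X \<in> insert A (insert B (f ` R))"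
    proof (cases "x \<in> f a")
      case True
      hence "g x = A \<or> g x = B" using g2 x(1) by blast
      thus ?thesis using x(2) by blast
    next
      case False
      hence "g x = f x" using g1 x(1) by blast
      moreover have "x \<in> R" using False x(1) unfolding R_def by blast
      ultimately show ?thesis using x(2) by blast
    qed
  qed
  moreover have "finite (insert A (insert B (f ` R)))" using fin unfolding R_def by blast
  ultimately have "card (g ` S) \<le> card (insert A (insert B (f ` R)))"
    by (rule card_mono[rotated])
  also have "\<dots> \<le> card (f ` R) + 2"
  proof -
    have fR: "finite (f ` R)" using fin unfolding R_def by blast
    have "card (insert B (f ` R)) \<le> card (f ` R) + 1" using fR by (simp add: card_insert_if)
    moreover have "card (insert A (insert B (f ` R))) \<le> card (insert B (f ` R)) + 1"
      using fR by (simp add: card_insert_if)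
    ultimately show ?thesis by linarith
  qed
  also have "card (f ` S) = card (f ` R) + 1"
  proof -
    have "f ` S = insert (f a) (f ` R)"
    proof
      show "f ` S \<subseteq> insert (f a) (f ` R)"
      proof
        fix X assume "X \<in> f ` S"
        then obtain x where x: "x \<in> S" "X = f x" by blast
        show "X \<in> insert (f a) (f ` R)"
        proof (cases "x \<in> f a")
          case True thus ?thesis using cls[OF a True] x(2) by blast
        next
          case False thus ?thesis using x unfolding R_def by blast
        qed
      qed
      show "insert (f a) (f ` R) \<subseteq> f ` S" using a unfolding R_def by blast
    qed
    moreover have "f a \<notin> f ` R"
    proof
      assume "f a \<in> f ` R"
      then obtain x where "x \<in> R" "f a = f x" by blast
      thus False using self[of x] unfolding R_def by auto
    qed
    ultimately show ?thesis using fin unfolding R_def by simp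
  qed
  ultimately show ?thesis by linarith
qed

lemma perm_on_transpose:
  assumes "perm_on p S" "a \<in> S" "b \<in> S"
  shows "perm_on (p \<circ> transpose a b) S"
  using assms bij_betw_trans[of "transpose a b" S S p] unfolding perm_on_def by simp

lemma orb_transpose_avoid:
  assumes perm: "perm_on p S" and x: "x \<in> S" and av: "a \<notin> orb p x" "b \<notin> orb p x"
  shows "orb (p \<circ> transpose a b) x = orb p x"
proof (rule orb_cong[where T="orb p x"])
  show "\<And>z. z \<in> orb p x \<Longrightarrow> p z \<in> orb p x" by (rule orb_closed)
  show "\<And>z. z \<in> orb p x \<Longrightarrow> (p \<circ> transpose a b) z = p z"
  proof -
    fix z assume "z \<in> orb p x"
    hence "z \<noteq> a" "z \<noteq> b" using av by auto
    thus "(p \<circ> transpose a b) z = p z" by simp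
  qed
  show "x \<in> orb p x" by (rule orb_self)
qed

lemma orb_transpose_outside:
  assumes perm: "perm_on p S" and x: "x \<in> S" and "x \<notin> orb p a" "x \<notin> orb p b"
  shows "orb (p \<circ> transpose a b) x = orb p x"
proof (rule orb_transpose_avoid[OF perm x])
  show "a \<notin> orb p x" using assms(3) orb_eq[OF perm x, of a] orb_self[of x p] by auto
  show "b \<notin> orb p x" using assms(4) orb_eq[OF perm x, of b] orb_self[of x p] by auto
qed

lemma orb_transpose_merge:
  assumes perm: "perm_on p S" and ab: "a \<in> S" "b \<in> S" and nb: "b \<notin> orb p a"
  shows "orb (p \<circ> transpose a b) a = orb p a \<union> orb p b"
proof -
  define q where "q = p \<circ> transpose a b"
  have qa: "q a = p b" and qb: "q b = p a" and qz: "\<And>z. z \<noteq> a \<Longrightarrow> z \<noteq> b \<Longrightarrow> q z = p z"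
    unfolding q_def by auto
  have na: "a \<notin> orb p b"
  proof
    assume "a \<in> orb p b"
    hence "b \<in> orb p a" by (rule orb_sym[OF perm ab(2)])
    thus False using nb by simp
  qed
  define U where "U = orb p a \<union> orb p b"
  have Ucl: "q z \<in> U" if "z \<in> U" for z
  proof (cases "z = a")
    case True thus ?thesis using qa orb_closed[OF orb_self[of b p]] unfolding U_def by auto
  next
    case False
    show ?thesis
    proof (cases "z = b")
      case True thus ?thesis using qb orb_closed[OF orb_self[of a p]] unfolding U_def by auto
    next
      case False2: False
      hence "q z = p z" using qz False by blast
      thus ?thesis using that orb_closed[of z p a] orb_closed[of z p b] unfolding U_def by auto
    qed
  qed
  have b_in: "b \<in> orb q a"
  proof (rule ccontr)
    assume nbq: "b \<notin> orb q a"
    define T where "T = orb q a \<inter> orb p b"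
    have Tcl: "p z \<in> T" if "z \<in> T" for z
    proof -
      have "z \<noteq> a" using that na unfolding T_def by blast
      moreover have "z \<noteq> b" using that nbq unfolding T_def by blast
      ultimately have "p z = q z" using qz by simp
      thus ?thesis using that orb_closed[of z q a] orb_closed[of z p b] unfolding T_def by auto
    qed
    have pbT: "p b \<in> T" unfolding T_def using qa orb_closed[OF orb_self[of a q]]
        orb_closed[OF orb_self[of b p]] by auto
    have "orb p (p b) \<subseteq> T" using orb_least[of T p "p b"] Tcl pbT by blast
    moreover have "orb p (p b) = orb p b" by (rule orb_step_eq[OF perm ab(2)])
    ultimately have "b \<in> T" using orb_self[of b p] by blast
    thus False using nbq unfolding T_def by blast
  qed
  have U_sub: "U \<subseteq> orb q a"
  proof -
    define T where "T = orb q a \<inter> U"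
    have Tcl: "p z \<in> T" if "z \<in> T" for z
    proof (cases "z = a")
      case True
      have "q b \<in> orb q a" by (rule orb_closed[OF b_in])
      thus ?thesis using True qb orb_closed[OF orb_self[of a p]] unfolding T_def U_def by auto
    next
      case False
      show ?thesis
      proof (cases "z = b")
        case True
        have "q a \<in> orb q a" by (rule orb_closed[OF orb_self])
        thus ?thesis using True qa orb_closed[OF orb_self[of b p]] unfolding T_def U_def by auto
      next
        case False2: False
        hence "p z = q z" using qz False by simp
        thus ?thesis using that orb_closed[of z q a] orb_closed[of z p a] orb_closed[of z p b]
          unfolding T_def U_def by auto
      qed
    qed
    have aT: "a \<in> T" unfolding T_def U_def using orb_self[of a q] orb_self[of a p] by auto
    have bT: "b \<in> T" unfolding T_def U_def using b_in orb_self[of b p] by auto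
    have "orb p a \<subseteq> T" by (rule orb_least[OF Tcl aT])
    moreover have "orb p b \<subseteq> T" by (rule orb_least[OF Tcl bT])
    ultimately show ?thesis unfolding T_def U_def by blast
  qed
  have "a \<in> U" unfolding U_def using orb_self[of a p] by blast
  hence "orb q a \<subseteq> U" using orb_least[of U q a] Ucl by blast
  thus ?thesis using U_sub unfolding q_def U_def by blast
qed

lemma orbit_count_transpose_merge:
  assumes perm: "perm_on p S" and ab: "a \<in> S" "b \<in> S" and nb: "b \<notin> orb p a"
  shows "orbit_count p S = orbit_count (p \<circ> transpose a b) S + 1"
proof -
  define q where "q = p \<circ> transpose a b"
  have permq: "perm_on q S" unfolding q_def by (rule perm_on_transpose[OF perm ab])
  define U where "U = orb p a \<union> orb p b"
  have qaU: "orb q a = U" unfolding q_def U_def by (rule orb_transpose_merge[OF perm ab nb])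
  have g: "orb q x = (if x \<in> orb p a \<union> orb p b then orb p a \<union> orb p b else orb p x)" if x: "x \<in> S"
    for x
  proof (cases "x \<in> U")
    case True
    hence "orb q x = orb q a" using orb_eq[OF permq ab(1)] qaU by blast
    thus ?thesis using True qaU unfolding U_def by simp
  next
    case False
    hence "orb q x = orb p x" unfolding q_def U_def by (intro orb_transpose_outside[OF perm x]) auto
    thus ?thesis using False unfolding U_def by simp
  qed
  have "card (orb p ` S) = card (orb q ` S) + 1"
  proof (rule card_image_merge_classes[where a=a and b=b])
    show "finite S" using perm unfolding perm_on_def by blast
    show "a \<in> S" "b \<in> S" by (rule ab)+
    show "orb p a \<noteq> orb p b" using nb orb_self[of b p] by blast
    show "\<And>x. x \<in> S \<Longrightarrow> x \<in> orb p x" by (rule orb_self)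
    show "\<And>x y. x \<in> S \<Longrightarrow> y \<in> orb p x \<Longrightarrow> orb p y = orb p x"
      by (rule orb_eq[OF perm])
    show "\<And>x. x \<in> S \<Longrightarrow> orb q x = (if x \<in> orb p a \<union> orb p b then orb p a \<union> orb p b else orb p x)"
      by (rule g)
  qed
  thus ?thesis unfolding orbit_count_def q_def by simp
qed

lemma orb_transpose_split:
  assumes "b \<in> orb p a" and x: "x \<in> orb p a"
  shows "x \<in> orb (p \<circ> transpose a b) a \<union> orb (p \<circ> transpose a b) b"
proof -
  define q where "q = p \<circ> transpose a b"
  have qa: "q a = p b" and qb: "q b = p a" and qz: "\<And>z. z \<noteq> a \<Longrightarrow> z \<noteq> b \<Longrightarrow> q z = p z"
    unfolding q_def by auto
  define T where "T = (orb q a \<union> orb q b) \<inter> orb p a"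
  have Tcl: "p z \<in> T" if "z \<in> T" for z
  proof (cases "z = a")
    case True
    thus ?thesis using qb orb_closed[OF orb_self[of b q]] orb_closed[OF orb_self[of a p]]
      unfolding T_def by auto
  next
    case False
    show ?thesis
    proof (cases "z = b")
      case True
      thus ?thesis
        using qa orb_closed[OF orb_self[of a q]] orb_closed[OF \<open>b \<in> orb p a\<close>]
        unfolding T_def by auto
    next
      case False2: False
      hence "p z = q z" using qz False by simp
      thus ?thesis using that orb_closed[of z q a] orb_closed[of z q b] orb_closed[of z p a]
        unfolding T_def by auto
    qed
  qed
  have aT: "a \<in> T" unfolding T_def using orb_self[of a q] orb_self[of a p] by auto
  have "orb p a \<subseteq> T" by (rule orb_least[OF Tcl aT])
  thus ?thesis using x unfolding T_def q_def by blast
qed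

lemma orbit_count_transpose_split:
  assumes perm: "perm_on p S" and ab: "a \<in> S" "b \<in> S"
  shows "orbit_count (p \<circ> transpose a b) S \<le> orbit_count p S + 1"
proof (cases "b \<in> orb p a")
  case False thus ?thesis using orbit_count_transpose_merge[OF perm ab False] by simp
next
  case True
  define q where "q = p \<circ> transpose a b"
  have permq: "perm_on q S" unfolding q_def by (rule perm_on_transpose[OF perm ab])
  have ob: "orb p b = orb p a" by (rule orb_eq[OF perm ab(1) True])
  have "card (orb q ` S) \<le> card (orb p ` S) + 1"
  proof (rule card_image_split_class[where a=a and A="orb q a" and B="orb q b"])
    show "finite S" using perm unfolding perm_on_def by blast
    show "a \<in> S" by (rule ab)
    show "\<And>x. x \<in> S \<Longrightarrow> x \<in> orb p x" by (rule orb_self)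
    show "\<And>x y. x \<in> S \<Longrightarrow> y \<in> orb p x \<Longrightarrow> orb p y = orb p x"
      by (rule orb_eq[OF perm])
    show "orb q x = orb p x" if x: "x \<in> S" and nx: "x \<notin> orb p a" for x
      unfolding q_def using nx ob by (intro orb_transpose_outside[OF perm x]) auto
    show "orb q x = orb q a \<or> orb q x = orb q b" if x: "x \<in> S" and xa: "x \<in> orb p a" for x
      using orb_transpose_split[OF True xa] orb_eq[OF permq ab(1), of x] orb_eq[OF permq ab(2), of x]
      unfolding q_def by blast
  qed
  thus ?thesis unfolding orbit_count_def q_def by simp
qed

section \<open>Euler's inequality for connected maps\<close>

definition map_graph :: "('a \<Rightarrow> 'a) \<Rightarrow> ('a \<Rightarrow> 'a) \<Rightarrow> 'a set \<Rightarrow> ('a \<times> 'a) set" where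
  "map_graph s b S = {(z, s z) | z. z \<in> S} \<union> {(s z, z) | z. z \<in> S} \<union> {(z, b z) | z. z \<in> S} \<union>
      {(b z, z) | z. z \<in> S}"

definition map_component :: "('a \<Rightarrow> 'a) \<Rightarrow> ('a \<Rightarrow> 'a) \<Rightarrow> 'a set \<Rightarrow> 'a \<Rightarrow> 'a set" where
  "map_component s b S x = (map_graph s b S)\<^sup>* `` {x}"

lemma sym_map_graph: "sym (map_graph s b S)"
  unfolding map_graph_def sym_def by blast

lemma Image_rtrancl_add_sym_edge:
  assumes sE: "sym E"
  shows "(E \<union> {(a,b),(b,a)})\<^sup>* `` {x} =
    (if x \<in> E\<^sup>* `` {a} \<union> E\<^sup>* `` {b} then E\<^sup>* `` {a} \<union> E\<^sup>* `` {b} else E\<^sup>* `` {x})"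
    (is "?L = ?R")
proof
  define E' where "E' = E \<union> {(a,b),(b,a)}"
  have mono: "E\<^sup>* \<subseteq> E'\<^sup>*" unfolding E'_def by (rule rtrancl_mono) blast
  have ab: "(a, b) \<in> E'\<^sup>*" "(b, a) \<in> E'\<^sup>*" unfolding E'_def by auto
  show "?L \<subseteq> ?R"
  proof
    fix y assume "y \<in> ?L"
    hence "(x, y) \<in> E'\<^sup>*" unfolding E'_def by simp
    thus "y \<in> ?R"
    proof (induct rule: rtrancl_induct)
      case base thus ?case by auto
    next
      case (step y z)
      show ?case
      proof (cases "x \<in> E\<^sup>* `` {a} \<union> E\<^sup>* `` {b}")
        case True
        hence yU: "y \<in> E\<^sup>* `` {a} \<union> E\<^sup>* `` {b}" using step(3) by simp
        have "z \<in> E\<^sup>* `` {a} \<union> E\<^sup>* `` {b}"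
          using step(2) unfolding E'_def
        proof
          assume "(y, z) \<in> E"
          thus ?thesis using yU by (auto intro: rtrancl_into_rtrancl)
        next
          assume "(y, z) \<in> {(a,b),(b,a)}"
          thus ?thesis by auto
        qed
        thus ?thesis using True by simp
      next
        case False
        hence yx: "y \<in> E\<^sup>* `` {x}" using step(3) by simp
        have "z \<in> E\<^sup>* `` {x}"
          using step(2) unfolding E'_def
        proof
          assume "(y, z) \<in> E"
          thus ?thesis using yx by (auto intro: rtrancl_into_rtrancl)
        next
          assume yz: "(y, z) \<in> {(a,b),(b,a)}"
          hence "y = a \<or> y = b" by auto
          hence "(y, x) \<in> E\<^sup>*" using yx symD[OF sym_rtrancl[OF sE]] by blast
          hence "x \<in> E\<^sup>* `` {a} \<union> E\<^sup>* `` {b}"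
            using \<open>y = a \<or> y = b\<close> by blast
          thus ?thesis using False by blast
        qed
        thus ?thesis using False by simp
      qed
    qed
  qed
  show "?R \<subseteq> ?L"
  proof (cases "x \<in> E\<^sup>* `` {a} \<union> E\<^sup>* `` {b}")
    case True
    hence "(x, a) \<in> E'\<^sup>*"
    proof
      assume "x \<in> E\<^sup>* `` {a}"
      hence "(x, a) \<in> E\<^sup>*" using symD[OF sym_rtrancl[OF sE]] by blast
      thus ?thesis using mono by blast
    next
      assume "x \<in> E\<^sup>* `` {b}"
      hence "(x, b) \<in> E\<^sup>*" using symD[OF sym_rtrancl[OF sE]] by blast
      thus ?thesis using mono ab(2) by (meson rtrancl_trans subsetD)
    qed
    moreover have "(a, y) \<in> E'\<^sup>*" if "y \<in> E\<^sup>* `` {a} \<union> E\<^sup>* `` {b}" for y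
      using that mono ab(1) by (meson Image_singleton_iff UnE rtrancl_trans subsetD)
    ultimately show ?thesis using True unfolding E'_def by (auto intro: rtrancl_trans)
  next
    case False thus ?thesis using mono unfolding E'_def by auto
  qed
qed

lemma map_graph_mem:
  assumes "(u, v) \<in> map_graph s b S" "\<And>z. z \<in> S \<Longrightarrow> s z \<in> S" "\<And>z. z \<in> S \<Longrightarrow> b z \<in> S"
  shows "u \<in> S \<and> v \<in> S"
  using assms unfolding map_graph_def by auto

lemma map_component_subset:
  assumes "\<And>z. z \<in> S \<Longrightarrow> s z \<in> S" "\<And>z. z \<in> S \<Longrightarrow> b z \<in> S" "x \<in> S"
  shows "map_component s b S x \<subseteq> S"
proof
  fix y assume "y \<in> map_component s b S x"
  hence "(x, y) \<in> (map_graph s b S)\<^sup>*" unfolding map_component_def by simp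
  thus "y \<in> S"
    by (induct rule: rtrancl_induct) (use assms in \<open>auto simp: map_graph_def\<close>)
qed

lemma map_component_self: "x \<in> map_component s b S x"
  unfolding map_component_def by simp

lemma map_component_eq:
  assumes "y \<in> map_component s b S x"
  shows "map_component s b S y = map_component s b S x"
proof -
  have xy: "(x, y) \<in> (map_graph s b S)\<^sup>*" using assms unfolding map_component_def by simp
  have yx: "(y, x) \<in> (map_graph s b S)\<^sup>*"
    by (rule symD[OF sym_rtrancl[OF sym_map_graph] xy])
  show ?thesis unfolding map_component_def using xy yx by (auto intro: rtrancl_trans)
qed

lemma map_component_step:
  assumes "y \<in> map_component s b S x" "y \<in> S"
  shows "s y \<in> map_component s b S x" "b y \<in> map_component s b S x"
proof -
  have "(y, s y) \<in> map_graph s b S" "(y, b y) \<in> map_graph s b S" using assms(2)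
    unfolding map_graph_def by blast+
  thus "s y \<in> map_component s b S x" "b y \<in> map_component s b S x" using assms(1)
    unfolding map_component_def
    by (auto intro: rtrancl_into_rtrancl)
qed

lemma map_component_back:
  assumes "y \<in> S" "s y \<in> map_component s b S x \<or> b y \<in> map_component s b S x"
  shows "y \<in> map_component s b S x"
proof -
  have "(s y, y) \<in> map_graph s b S" "(b y, y) \<in> map_graph s b S" using assms(1)
    unfolding map_graph_def by blast+
  thus ?thesis using assms(2) unfolding map_component_def by (auto intro: rtrancl_into_rtrancl)
qed

lemma map_graph_rtrancl_restrict:
  assumes K: "\<And>u v. (u, v) \<in> map_graph p b S \<Longrightarrow> u \<in> K \<Longrightarrow> v \<in> K"
    and path: "(z, w) \<in> (map_graph p b S)\<^sup>*" and z: "z \<in> S - K"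
    and pS: "\<And>u. u \<in> S \<Longrightarrow> p u \<in> S" and bS: "\<And>u. u \<in> S \<Longrightarrow> b u \<in> S"
  shows "(z, w) \<in> (map_graph p b (S - K))\<^sup>*"
  using path
proof (induct rule: rtrancl_induct)
  case base thus ?case by simp
next
  case (step u v)
  have uR: "u \<in> S - K"
  proof -
    have "(z, u) \<in> (map_graph p b S)\<^sup>*" using step(1) .
    moreover have "(z, u) \<in> (map_graph p b S)\<^sup>* \<Longrightarrow> u \<in> S - K"
    proof (induct rule: rtrancl_induct)
      case base thus ?case using z .
    next
      case (step u' v')
      have "v' \<in> S" using step(2) pS bS unfolding map_graph_def by blast
      moreover have "v' \<notin> K"
      proof
        assume "v' \<in> K"
        have "(v', u') \<in> map_graph p b S" using step(2) sym_map_graph[of p b S]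
          unfolding sym_def by blast
        hence "u' \<in> K" using K \<open>v' \<in> K\<close> by blast
        thus False using step(3) by blast
      qed
      ultimately show ?case by blast
    qed
    ultimately show ?thesis by blast
  qed
  have vR: "v \<in> S - K"
  proof -
    have "v \<in> S" using step(2) pS bS unfolding map_graph_def by blast
    moreover have "v \<notin> K"
    proof
      assume "v \<in> K"
      have "(v, u) \<in> map_graph p b S" using step(2) sym_map_graph[of p b S] unfolding sym_def
        by blast
      hence "u \<in> K" using K \<open>v \<in> K\<close> by blast
      thus False using uR by blast
    qed
    ultimately show ?thesis by blast
  qed
  have "(u, v) \<in> map_graph p b (S - K)"
    using step(2) uR vR unfolding map_graph_def by blast
  thus ?case using step(3) by (simp add: rtrancl_into_rtrancl)
qed

(* The map keeping only the edges in P: the darts outside \<Union>P become fixed points. *)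
definition restrict_involution :: "('a \<Rightarrow> 'a) \<Rightarrow> 'a set set \<Rightarrow> 'a \<Rightarrow> 'a" where
  "restrict_involution a P z = (if z \<in> \<Union>P then a z else z)"

lemma perm_on_restrict_involution:
  assumes fin: "finite S" and inv: "\<And>x. x \<in> S \<Longrightarrow> a x \<in> S \<and> a (a x) = x"
    and P: "P \<subseteq> (\<lambda>z. {z, a z}) ` S"
  shows "perm_on (restrict_involution a P) S"
proof (rule perm_on_involution[OF fin])
  fix z assume z: "z \<in> S"
  have "a z \<in> \<Union>P" if zP: "z \<in> \<Union>P"
  proof -
    obtain w where "w \<in> S" "z \<in> {w, a w}" "{w, a w} \<in> P" using zP P by blast
    thus ?thesis using inv[of w] by auto
  qed
  thus "restrict_involution a P z \<in> S \<and> restrict_involution a P (restrict_involution a P z) = z"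
    using inv[OF z] z unfolding restrict_involution_def by auto
qed

lemma restrict_involution_insert:
  assumes "x \<notin> \<Union>P" "a x \<notin> \<Union>P" "a (a x) = x"
  shows "restrict_involution a (insert {x, a x} P) = restrict_involution a P \<circ> transpose x (a x)"
proof
  fix z
  show "restrict_involution a (insert {x, a x} P) z =
      (restrict_involution a P \<circ> transpose x (a x)) z"
    using assms unfolding restrict_involution_def by (cases "z = x \<or> z = a x") auto
qed

lemma map_component_id:
  assumes perm: "perm_on s S" and x: "x \<in> S"
  shows "map_component s id S x = orb s x"
proof
  show "map_component s id S x \<subseteq> orb s x"
  proof
    fix y assume "y \<in> map_component s id S x"
    hence "(x, y) \<in> (map_graph s id S)\<^sup>*" unfolding map_component_def by simp
    thus "y \<in> orb s x"
    proof (induct rule: rtrancl_induct)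
      case base thus ?case by (rule orb_self)
    next
      case (step y z)
      from step(2) consider "z = s y" | "y = s z" "z \<in> S" | "z = y"
        unfolding map_graph_def by auto
      thus ?case
      proof cases
        case 2
        hence "orb s y = orb s z" using orb_step_eq[OF perm] by simp
        thus ?thesis using orb_subset[OF step(3)] orb_self[of z s] by blast
      qed (use step(3) orb_closed in auto)
    qed
  qed
  show "orb s x \<subseteq> map_component s id S x"
  proof (rule orb_least)
    fix z assume "z \<in> map_component s id S x"
    thus "s z \<in> map_component s id S x"
      using map_component_step(1)[OF _ map_component_subset[where s=s and b=id, THEN subsetD]]
        perm_on_mem[OF perm] x by auto
  qed (rule map_component_self)
qed

lemma orb_subset_map_component:
  assumes sS: "\<And>z. z \<in> S \<Longrightarrow> s z \<in> S" and bS: "\<And>z. z \<in> S \<Longrightarrow> b z \<in> S" and x: "x \<in> S"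
  shows "orb (s \<circ> b) x \<subseteq> map_component s b S x"
proof (rule orb_least)
  fix z assume z: "z \<in> map_component s b S x"
  have zS: "z \<in> S" using z map_component_subset[where s=s and b=b, OF sS bS x] by blast
  have "b z \<in> map_component s b S x" by (rule map_component_step(2)[OF z zS])
  thus "(s \<circ> b) z \<in> map_component s b S x" using map_component_step(1)[OF _ bS[OF zS]]
    by simp
qed (rule map_component_self)

lemma map_graph_transpose:
  assumes x: "x \<in> S" "b x = x" and y: "y \<in> S" "b y = y"
  shows "(map_graph s (b \<circ> transpose x y) S)\<^sup>* = (map_graph s b S \<union> {(x, y), (y, x)})\<^sup>*"
proof (rule sym, rule rtrancl_subset)
  have bt: "(b \<circ> transpose x y) z = b z" if "z \<noteq> x" "z \<noteq> y" for z using that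
    by simp
  have bx: "(b \<circ> transpose x y) x = y" "(b \<circ> transpose x y) y = x" using x y by auto
  show "map_graph s (b \<circ> transpose x y) S \<subseteq> map_graph s b S \<union> {(x, y), (y, x)}"
  proof
    fix e assume "e \<in> map_graph s (b \<circ> transpose x y) S"
    then obtain z where z: "z \<in> S"
      "e \<in> {(z, s z), (s z, z), (z, (b \<circ> transpose x y) z), ((b \<circ> transpose x y) z, z)}"
      unfolding map_graph_def by blast
    show "e \<in> map_graph s b S \<union> {(x, y), (y, x)}"
    proof (cases "z = x \<or> z = y")
      case True thus ?thesis using z bx unfolding map_graph_def by auto
    next
      case False thus ?thesis using z bt unfolding map_graph_def by auto
    qed
  qed
  show "map_graph s b S \<union> {(x, y), (y, x)} \<subseteq> (map_graph s (b \<circ> transpose x y) S)\<^sup>*"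
  proof
    fix e assume "e \<in> map_graph s b S \<union> {(x, y), (y, x)}"
    then consider "e \<in> {(x, y), (y, x)}" | z where "z \<in> S"
      "e \<in> {(z, s z), (s z, z), (z, b z), (b z, z)}"
      unfolding map_graph_def by blast
    hence "e \<in> map_graph s (b \<circ> transpose x y) S \<or> e \<in> Id"
    proof cases
      case 1
      have "(x, (b \<circ> transpose x y) x) \<in> map_graph s (b \<circ> transpose x y) S"
        "((b \<circ> transpose x y) x, x) \<in> map_graph s (b \<circ> transpose x y) S"
        using x(1) unfolding map_graph_def by blast+
      thus ?thesis using 1 bx(1) by auto
    next
      case (2 z)
      thus ?thesis using x y bt[of z] unfolding map_graph_def by (cases "z = x \<or> z = y") auto
    qed
    thus "e \<in> (map_graph s (b \<circ> transpose x y) S)\<^sup>*" by auto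
  qed
qed

lemma map_component_transpose:
  assumes x: "x \<in> S" "b x = x" and y: "y \<in> S" "b y = y"
  shows "map_component s (b \<circ> transpose x y) S z =
    (if z \<in> map_component s b S x \<union> map_component s b S y
     then map_component s b S x \<union> map_component s b S y else map_component s b S z)"
  unfolding map_component_def map_graph_transpose[OF x y]
  by (rule Image_rtrancl_add_sym_edge[OF sym_map_graph])

(* Inserting the edge {x, y} either joins two components and merges two faces,
   or keeps the components and splits at most one face. *)
lemma euler_inequality_step:
  assumes perm_s: "perm_on s S" and perm_b: "perm_on b S"
    and x: "x \<in> S" "b x = x" and y: "y \<in> S" "b y = y"
  shows "orbit_count (s \<circ> (b \<circ> transpose x y)) S + 2 * card (map_component s b S ` S)
    \<le> orbit_count (s \<circ> b) S + 1 + 2 * card (map_component s (b \<circ> transpose x y) S ` S)"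
proof -
  let ?C = "map_component s b S" and ?C' = "map_component s (b \<circ> transpose x y) S"
  have perm_sb: "perm_on (s \<circ> b) S" by (rule perm_on_comp[OF perm_s perm_b])
  have sb_t: "s \<circ> (b \<circ> transpose x y) = (s \<circ> b) \<circ> transpose x y"
    by (simp add: comp_assoc)
  show ?thesis
  proof (cases "?C x = ?C y")
    case True
    have "?C' z = ?C z" if "z \<in> S" for z
      using map_component_transpose[OF x y, of s z] True map_component_eq[of z s b S x] by auto
    hence "card (?C' ` S) = card (?C ` S)" by (simp cong: image_cong)
    moreover have "orbit_count (s \<circ> (b \<circ> transpose x y)) S \<le> orbit_count (s \<circ> b) S + 1"
      unfolding sb_t by (rule orbit_count_transpose_split[OF perm_sb x(1) y(1)])
    ultimately show ?thesis by linarith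
  next
    case False
    have "y \<notin> orb (s \<circ> b) x"
    proof
      assume "y \<in> orb (s \<circ> b) x"
      hence "y \<in> ?C x"
        using orb_subset_map_component[where s=s
          and b=b, OF perm_on_mem[OF perm_s] perm_on_mem[OF perm_b] x(1)]
        by blast
      thus False using False map_component_eq by metis
    qed
    hence "orbit_count (s \<circ> b) S = orbit_count (s \<circ> (b \<circ> transpose x y)) S + 1"
      unfolding sb_t by (rule orbit_count_transpose_merge[OF perm_sb x(1) y(1)])
    moreover have "card (?C ` S) = card (?C' ` S) + 1"
    proof (rule card_image_merge_classes[where a=x and b=y])
      show "finite S" using perm_s unfolding perm_on_def by blast
      show "\<And>z w. z \<in> S \<Longrightarrow> w \<in> ?C z \<Longrightarrow> ?C w = ?C z"
        by (rule map_component_eq)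
      show "\<And>z. z \<in> S \<Longrightarrow> ?C' z = (if z \<in> ?C x \<union> ?C y then ?C x \<union> ?C y else ?C z)"
        by (rule map_component_transpose[OF x y])
      show "x \<in> S" "y \<in> S" "?C x \<noteq> ?C y" using x y False by auto
      show "\<And>z. z \<in> S \<Longrightarrow> z \<in> ?C z" by (rule map_component_self)
    qed
    ultimately show ?thesis by linarith
  qed
qed

lemma euler_inequality_partial:
  assumes perm: "perm_on s S" and inv: "\<And>x. x \<in> S \<Longrightarrow> a x \<in> S \<and> a (a x) = x"
    and "finite P" "P \<subseteq> (\<lambda>z. {z, a z}) ` S"
  shows "orbit_count (s \<circ> restrict_involution a P) S + orbit_count s S
    \<le> card P + 2 * card (map_component s (restrict_involution a P) S ` S)"
  using assms(3,4)
proof (induct P rule: finite_induct)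
  case empty
  have r: "restrict_involution a {} = id" unfolding restrict_involution_def by auto
  have C: "card (map_component s (restrict_involution a {}) S ` S) = orbit_count s S"
    unfolding r orbit_count_def using map_component_id[OF perm] by (simp cong: image_cong)
  have "s \<circ> restrict_involution a {} = s" unfolding r by simp
  thus ?case unfolding C by simp
next
  case (insert p P)
  obtain x where x: "x \<in> S" "p = {x, a x}" using insert(4) by blast
  have ax: "a x \<in> S" "a (a x) = x" using inv[OF x(1)] by blast+
  have "q = p" if qP: "q \<in> P" and xq: "x \<in> q \<or> a x \<in> q" for q
  proof -
    obtain w where w: "w \<in> S" "q = {w, a w}" using qP insert(4) by blast
    have aw: "a (a w) = w" using inv[OF w(1)] by blast
    consider "x = w" | "x = a w" | "a x = w" | "a x = a w" using xq w(2) by blast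
    hence "w = x \<or> w = a x" by cases (use aw ax(2) in metis)+
    thus ?thesis using w(2) x(2) ax(2) by auto
  qed
  hence notin: "x \<notin> \<Union>P" "a x \<notin> \<Union>P" using insert(2) by blast+
  define b where "b = restrict_involution a P"
  have b_ins: "restrict_involution a (insert p P) = b \<circ> transpose x (a x)"
    unfolding b_def x(2) by (rule restrict_involution_insert[OF notin ax(2)])
  have fin: "finite S" using perm unfolding perm_on_def by blast
  have P: "P \<subseteq> (\<lambda>z. {z, a z}) ` S" using insert(4) by blast
  have perm_b: "perm_on b S" unfolding b_def by (rule perm_on_restrict_involution[OF fin inv P])
  have fixed: "b x = x" "b (a x) = a x" using notin unfolding b_def restrict_involution_def by auto
  have "orbit_count (s \<circ> b) S + orbit_count s S \<le> card P + 2 * card (map_component s b S ` S)"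
    using insert(3)[OF P] unfolding b_def .
  moreover have "card (insert p P) = card P + 1" using insert(1,2) by simp
  ultimately show ?case
    using euler_inequality_step[OF perm perm_b x(1) fixed(1) ax(1) fixed(2)] unfolding b_ins
      by linarith
qed

lemma euler_inequality:
  assumes perm: "perm_on s S" and inv: "\<And>x. x \<in> S \<Longrightarrow> a x \<in> S \<and> a (a x) = x"
    and ne: "S \<noteq> {}" and conn: "\<And>x y. x \<in> S \<Longrightarrow> y \<in> S \<Longrightarrow> (x, y) \<in> (map_graph s a S)\<^sup>*"
  shows "orbit_count s S + orbit_count (s \<circ> a) S \<le> orbit_count a S + 2"
proof -
  have fin: "finite S" using perm unfolding perm_on_def by blast
  define Pairs where "Pairs = (\<lambda>z. {z, a z}) ` S"
  define b where "b = restrict_involution a Pairs"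
  have ba: "b z = a z" if "z \<in> S" for z
    using that unfolding b_def Pairs_def restrict_involution_def by auto
  have "orbit_count (s \<circ> b) S + orbit_count s S \<le> card Pairs + 2 * card (map_component s b S ` S)"
    unfolding b_def by (rule euler_inequality_partial[OF perm inv]) (use fin Pairs_def in auto)
  moreover have "orbit_count (s \<circ> b) S = orbit_count (s \<circ> a) S"
  proof -
    have "orb (s \<circ> b) x = orb (s \<circ> a) x" if "x \<in> S" for x
      by (rule orb_cong[where T=S]) (use that ba inv perm_on_mem[OF perm] in auto)
    thus ?thesis unfolding orbit_count_def by (simp cong: image_cong)
  qed
  moreover have "orbit_count a S = card Pairs"
  proof -
    have "orb a z = {z, a z}" if "z \<in> S" for z
    proof
      have "(a ^^ n) z \<in> {z, a z}" for n by (induct n) (use inv[OF that] in auto)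
      thus "orb a z \<subseteq> {z, a z}" unfolding orb_def by blast
      show "{z, a z} \<subseteq> orb a z" using orb_self[of z a] orb_closed[OF orb_self[of z a]]
        by auto
    qed
    thus ?thesis unfolding orbit_count_def Pairs_def by (simp cong: image_cong)
  qed
  moreover have "map_component s b S ` S = {S}"
  proof -
    have "{(z, b z) |z. z \<in> S} = {(z, a z) |z. z \<in> S}" "{(b z, z) |z. z \<in> S} = {(a z, z) |z. z \<in> S}"
      using ba by force+
    hence G: "map_graph s b S = map_graph s a S" unfolding map_graph_def by simp
    have "map_component s b S x = S" if x: "x \<in> S" for x
    proof
      show "map_component s b S x \<subseteq> S"
        by (rule map_component_subset[OF perm_on_mem[OF perm] _ x]) (use ba inv in auto)
      show "S \<subseteq> map_component s b S x" using conn[OF x] unfolding map_component_def G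
        by blast
    qed
    thus ?thesis using ne by auto
  qed
  ultimately show ?thesis by simp
qed

lemma euler_inequality_component:
  assumes perm: "perm_on s S" and inv: "\<And>x. x \<in> S \<Longrightarrow> a x \<in> S \<and> a (a x) = x" and z: "z \<in> S"
  shows "orbit_count s (map_component s a S z) + orbit_count (s \<circ> a) (map_component s a S z)
    \<le> orbit_count a (map_component s a S z) + 2"
proof -
  let ?E = "map_graph s a S" and ?C = "map_component s a S z"
  have sS: "\<And>x. x \<in> S \<Longrightarrow> s x \<in> S" and aS: "\<And>x. x \<in> S \<Longrightarrow> a x \<in> S"
    using perm_on_mem[OF perm] inv by auto
  have CS: "?C \<subseteq> S" by (rule map_component_subset[OF sS aS z])
  have sC: "s x \<in> ?C" and aC: "a x \<in> ?C" if x: "x \<in> ?C" for x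
    using map_component_step[OF x subsetD[OF CS x]] by auto
  have C_closed: "v \<in> ?C" if uv: "(u, v) \<in> ?E" and u: "u \<in> ?C" for u v
  proof -
    have "(z, u) \<in> ?E\<^sup>*" using u unfolding map_component_def by simp
    hence "(z, v) \<in> ?E\<^sup>*" using uv by (rule rtrancl_into_rtrancl)
    thus ?thesis unfolding map_component_def by simp
  qed
  have rest_closed: "v \<in> S - ?C" if uv: "(u, v) \<in> ?E" and u: "u \<in> S - ?C" for u v
  proof -
    have "(v, u) \<in> ?E" by (rule symD[OF sym_map_graph uv])
    hence "v \<notin> ?C" using u C_closed by blast
    moreover have "v \<in> S" using map_graph_mem[OF uv sS aS] by blast
    ultimately show ?thesis by blast
  qed
  have SC: "S - (S - ?C) = ?C" using CS by blast
  have conn: "(u, v) \<in> (map_graph s a ?C)\<^sup>*" if u: "u \<in> ?C" and v: "v \<in> ?C" for u v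
  proof -
    have "(z, u) \<in> ?E\<^sup>*" "(z, v) \<in> ?E\<^sup>*" using u v unfolding map_component_def
      by auto
    hence path: "(u, v) \<in> ?E\<^sup>*" using symD[OF sym_rtrancl[OF sym_map_graph]] rtrancl_trans
      by metis
    have "u \<in> S - (S - ?C)" using u SC by simp
    from map_graph_rtrancl_restrict[OF rest_closed path this sS aS]
    have "(u, v) \<in> (map_graph s a (S - (S - ?C)))\<^sup>*" .
    thus ?thesis unfolding SC .
  qed
  show ?thesis
  proof (rule euler_inequality[OF perm_on_restrict(1)[OF perm CS sC] _ _ conn])
    fix x assume "x \<in> ?C"
    thus "a x \<in> ?C \<and> a (a x) = x" using aC inv CS by blast
  next
    show "?C \<noteq> {}" using map_component_self[of z s a S] by blast
  qed
qed

section \<open>Weakly labeled plane maps\<close>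

locale plane_dart_map =
  fixes D :: "'d set" and alpha sigma :: "'d \<Rightarrow> 'd"
  assumes plane: "plane_map D alpha sigma"
begin

lemma finite_D: "finite D"
  using plane unfolding plane_map_def by blast

lemma alpha_mem: "d \<in> D \<Longrightarrow> alpha d \<in> D"
  using plane unfolding plane_map_def by blast

lemma alpha_alpha: "d \<in> D \<Longrightarrow> alpha (alpha d) = d"
  using plane unfolding plane_map_def by blast

lemma perm_sigma: "perm_on sigma D"
  using plane finite_D unfolding plane_map_def perm_on_def by blast

lemma sigma_mem: "d \<in> D \<Longrightarrow> sigma d \<in> D"
  using perm_on_mem[OF perm_sigma] .

lemma perm_alpha: "perm_on alpha D"
  by (rule perm_on_involution[OF finite_D]) (use alpha_mem alpha_alpha in blast)

lemma perm_face: "perm_on (sigma \<circ> alpha) D"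
  by (rule perm_on_comp[OF perm_sigma perm_alpha])

lemma connected:
  "d \<in> D \<Longrightarrow> e \<in> D \<Longrightarrow> (d, e) \<in> ({(x, alpha x) | x. x \<in> D} \<union> {(x, sigma x) | x. x \<in> D})\<^sup>*"
  using plane unfolding plane_map_def by blast

lemma euler_formula:
  "int (orbit_count sigma D) - int (orbit_count alpha D) + int (orbit_count (sigma \<circ> alpha) D) = 2"
  using plane unfolding plane_map_def orbit_count_def map_vertices_def map_edges_def map_faces_def
  by blast

end

(* x is the dart at the tail of an arc of T_c or of a reversed arc of T_(1-c), see arc_tail_dart. *)
definition tail_dart :: "('d \<Rightarrow> nat) \<Rightarrow> ('d \<Rightarrow> 'd) \<Rightarrow> ('d \<Rightarrow> 'd) \<Rightarrow> nat \<Rightarrow> 'd \<Rightarrow> bool" where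
  "tail_dart lab sigma alpha c x \<longleftrightarrow>
     (lab (alpha x) = c \<and> lab (sigma (alpha x)) = c) \<or> (lab x = 1 - c \<and> lab (sigma x) = 1 - c)"

locale weakly_labeled_map = plane_dart_map +
  fixes fo s0 s1 :: "'d set" and lab :: "'d \<Rightarrow> nat"
  assumes labeling: "weak_labeling D alpha sigma fo s0 s1 lab"
begin

lemma lab_01: "d \<in> D \<Longrightarrow> lab d = 0 \<or> lab d = 1"
  using labeling unfolding weak_labeling_def by blast

lemma lab_le_1: "d \<in> D \<Longrightarrow> lab d \<le> 1"
  using lab_01 by fastforce

lemma edge_rule: "d \<in> D \<Longrightarrow> (lab d = lab (sigma d)) \<noteq> (lab (alpha d) = lab (sigma (alpha d)))"
  using labeling unfolding weak_labeling_def by blast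

lemma s0_vertex: "s0 \<in> orb sigma ` D" and s1_vertex: "s1 \<in> orb sigma ` D"
  using labeling unfolding weak_labeling_def map_vertices_def by blast+

lemma s0_lab: "d \<in> s0 \<Longrightarrow> lab d = 0" and s1_lab: "d \<in> s1 \<Longrightarrow> lab d = 1"
  using labeling unfolding weak_labeling_def by blast+

lemma outer_face: "fo \<in> orb (sigma \<circ> alpha) ` D"
  using labeling unfolding weak_labeling_def map_faces_def by blast

lemma s0_outer: "s0 \<inter> fo \<noteq> {}" and s1_outer: "s1 \<inter> fo \<noteq> {}"
  using labeling unfolding weak_labeling_def by blast+

lemma vertex_changes:
  assumes d: "d \<in> D" and "orb sigma d \<noteq> s0" "orb sigma d \<noteq> s1"
  shows "(\<Sum>e\<in>orb sigma d. (if lab e = lab (sigma e) then 0 else 1::nat)) = 2"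
proof -
  have "orb sigma d \<in> map_vertices D sigma - {s0, s1}"
    using assms unfolding map_vertices_def by blast
  hence "two_intervals sigma (orb sigma d) lab" using labeling unfolding weak_labeling_def by blast
  thus ?thesis by (rule two_intervals_changes[OF perm_sigma d])
qed

lemma face_changes:
  assumes d: "d \<in> D"
  shows "(\<Sum>e\<in>orb (sigma \<circ> alpha) d. (if lab e = lab ((sigma \<circ> alpha) e) then 0 else 1::nat)) = 2"
proof -
  have "orb (sigma \<circ> alpha) d \<in> map_faces D alpha sigma" using d unfolding map_faces_def
    by blast
  hence "two_intervals (sigma \<circ> alpha) (orb (sigma \<circ> alpha) d) lab"
    using labeling unfolding weak_labeling_def by blast
  thus ?thesis by (rule two_intervals_changes[OF perm_face d])
qed

lemma pole_vertex:
  assumes "P = s0 \<or> P = s1"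
  shows "\<exists>d0\<in>D. P = orb sigma d0" "\<exists>v. \<forall>d\<in>P. lab d = v"
  using assms s0_vertex s1_vertex s0_lab s1_lab by blast+

lemma tail_dart_alpha:
  assumes c: "c \<le> 1" and x: "x \<in> D" and tx: "tail_dart lab sigma alpha c x"
  shows "\<not> tail_dart lab sigma alpha c (alpha x)"
proof
  assume tax: "tail_dart lab sigma alpha c (alpha x)"
  have g2: "(lab x = lab (sigma x)) \<noteq> (lab (alpha x) = lab (sigma (alpha x)))"
    by (rule edge_rule[OF x])
  show False
  proof (cases "lab x = lab (sigma x)")
    case True
    hence "lab (alpha x) \<noteq> lab (sigma (alpha x))" using g2 by simp
    hence "lab x = 1 - c" using tx unfolding tail_dart_def by auto
    moreover have "lab x = c"
      using tax True \<open>lab (alpha x) \<noteq> lab (sigma (alpha x))\<close>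
      unfolding tail_dart_def alpha_alpha[OF x] by auto
    ultimately show False using c by arith
  next
    case False
    hence "lab (alpha x) = lab (sigma (alpha x))" using g2 by simp
    hence "lab (alpha x) = c" using tx False unfolding tail_dart_def by auto
    moreover have "lab (alpha x) = 1 - c"
      using tax False \<open>lab (alpha x) = lab (sigma (alpha x))\<close>
      unfolding tail_dart_def alpha_alpha[OF x] by auto
    ultimately show False using c by arith
  qed
qed

end

section \<open>Cutting a plane map open along a cycle\<close>

(* A cycle through distinct vertices, given by the darts Out along which it leaves them;
   next_out x is the dart leaving the vertex at which alpha x arrives.  alpha_not_Out
   excludes turning back along the edge just traversed. *)
locale plane_cycle = plane_dart_map +
  fixes Out :: "'d set" and next_out :: "'d \<Rightarrow> 'd"
  assumes Out_subset: "Out \<subseteq> D" and Out_nonempty: "Out \<noteq> {}"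
    and next_out_mem: "\<And>x. x \<in> Out \<Longrightarrow> next_out x \<in> Out"
    and alpha_next_out: "\<And>x. x \<in> Out \<Longrightarrow> alpha x \<in> orb sigma (next_out x)"
    and Out_vertex_inj: "\<And>x y. x \<in> Out \<Longrightarrow> y \<in> Out \<Longrightarrow> orb sigma x = orb sigma y \<Longrightarrow> x = y"
    and Out_single_orbit: "\<And>x y. x \<in> Out \<Longrightarrow> y \<in> Out \<Longrightarrow> y \<in> orb next_out x"
    and alpha_not_Out: "\<And>x. x \<in> Out \<Longrightarrow> alpha x \<notin> Out"
begin

lemma finite_Out: "finite Out" using finite_D Out_subset finite_subset by blast

lemma next_out_surj: "next_out ` Out = Out"
proof
  show "next_out ` Out \<subseteq> Out" using next_out_mem by blast
  show "Out \<subseteq> next_out ` Out"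
  proof
    fix x assume x: "x \<in> Out"
    have "next_out x \<in> Out" using next_out_mem x by blast
    hence "x \<in> orb next_out (next_out x)" using Out_single_orbit x by blast
    then obtain n where n: "x = (next_out ^^ n) (next_out x)" unfolding orb_def by blast
    have "(next_out ^^ n) x \<in> Out" using x next_out_mem by (induct n) auto
    moreover have "x = next_out ((next_out ^^ n) x)" using n by (simp add: funpow_swap1)
    ultimately show "x \<in> next_out ` Out" by blast
  qed
qed

lemma next_out_inj: "inj_on next_out Out"
  using finite_surj_inj[OF finite_Out] next_out_surj by blast

lemma perm_next_out: "perm_on next_out Out"
  using next_out_inj next_out_surj finite_Out unfolding perm_on_def bij_betw_def by blast

(* In holds the darts along which the cycle enters its vertices; it enters the vertex of
   x \<in> Out through in_dart x, and out_dart is the inverse of in_dart. *)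
definition prev_out where "prev_out = inv_into Out next_out"
definition In where "In = alpha ` Out"
definition in_dart where "in_dart x = alpha (prev_out x)"
definition out_dart where "out_dart y = next_out (alpha y)"

lemma prev_out_mem: "x \<in> Out \<Longrightarrow> prev_out x \<in> Out"
  unfolding prev_out_def using inv_into_into[of x next_out Out] next_out_surj by blast
lemma next_prev_out: "x \<in> Out \<Longrightarrow> next_out (prev_out x) = x"
  unfolding prev_out_def using f_inv_into_f[of x next_out Out] next_out_surj by blast
lemma prev_next_out: "x \<in> Out \<Longrightarrow> prev_out (next_out x) = x"
  unfolding prev_out_def using inv_into_f_f[OF next_out_inj] by blast

lemma In_subset: "In \<subseteq> D" unfolding In_def using Out_subset alpha_mem by blast
lemma Out_mem_D: "x \<in> Out \<Longrightarrow> x \<in> D" using Out_subset by blast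
lemma in_dart_mem: "x \<in> Out \<Longrightarrow> in_dart x \<in> In" unfolding in_dart_def In_def
  using prev_out_mem by blast
lemma in_dart_vertex: "x \<in> Out \<Longrightarrow> in_dart x \<in> orb sigma x"
  unfolding in_dart_def using alpha_next_out[OF prev_out_mem] next_prev_out by metis
lemma out_dart_mem: "y \<in> In \<Longrightarrow> out_dart y \<in> Out"
  unfolding In_def out_dart_def using next_out_mem alpha_alpha Out_subset by auto
lemma out_dart_vertex: "y \<in> In \<Longrightarrow> y \<in> orb sigma (out_dart y)"
proof -
  assume "y \<in> In"
  then obtain z where z: "z \<in> Out" "y = alpha z" unfolding In_def by blast
  have "out_dart y = next_out z" unfolding out_dart_def using z alpha_alpha Out_mem_D by simp
  thus ?thesis using alpha_next_out[OF z(1)] z(2) by simp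
qed
lemma out_in_dart: "x \<in> Out \<Longrightarrow> out_dart (in_dart x) = x"
  unfolding out_dart_def in_dart_def using alpha_alpha[OF Out_mem_D[OF prev_out_mem]] next_prev_out
    by simp
lemma in_out_dart: "y \<in> In \<Longrightarrow> in_dart (out_dart y) = y"
proof -
  assume "y \<in> In"
  then obtain z where z: "z \<in> Out" "y = alpha z" unfolding In_def by blast
  have "out_dart y = next_out z" unfolding out_dart_def using z alpha_alpha Out_mem_D by simp
  thus ?thesis unfolding in_dart_def using prev_next_out[OF z(1)] z by simp
qed
lemma alpha_eq_in_dart_next: "x \<in> Out \<Longrightarrow> alpha x = in_dart (next_out x)"
  unfolding in_dart_def using prev_next_out by simp

lemma sum_Out_alpha_in_dart: "(\<Sum>x\<in>Out. g (alpha x)) = (\<Sum>x\<in>Out. g (in_dart x))"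
proof -
  have "(\<Sum>x\<in>Out. g (alpha x)) = (\<Sum>x\<in>Out. g (in_dart (next_out x)))"
    by (rule sum.cong[OF refl]) (simp add: alpha_eq_in_dart_next)
  also have "\<dots> = (\<Sum>x\<in>Out. g (in_dart x))"
    by (rule sum.reindex_bij_betw) (use perm_next_out in \<open>simp add: perm_on_def\<close>)
  finally show ?thesis .
qed

lemma Out_In_disjoint: "Out \<inter> In = {}"
proof (rule equals0I)
  fix x assume "x \<in> Out \<inter> In"
  then obtain z where z: "z \<in> Out" "x = alpha z" "x \<in> Out" unfolding In_def by blast
  hence "alpha x = z" using alpha_alpha Out_mem_D by simp
  thus False using alpha_not_Out[OF z(3)] z(1) by simp
qed

lemma Out_unique:
  assumes x: "x \<in> Out" and e: "e \<in> Out" and eo: "e \<in> orb sigma x"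
  shows "e = x"
proof -
  have "orb sigma e = orb sigma x" by (rule orb_eq[OF perm_sigma Out_mem_D[OF x] eo])
  thus ?thesis by (rule Out_vertex_inj[OF e x])
qed

lemma In_unique: "x \<in> Out \<Longrightarrow> y \<in> In \<Longrightarrow> y \<in> orb sigma x \<Longrightarrow> y = in_dart x"
proof -
  assume x: "x \<in> Out" and y: "y \<in> In" "y \<in> orb sigma x"
  have "orb sigma y = orb sigma x" by (rule orb_eq[OF perm_sigma Out_mem_D[OF x] y(2)])
  moreover have "orb sigma y = orb sigma (out_dart y)"
    by (rule orb_eq[OF perm_sigma Out_mem_D[OF out_dart_mem[OF y(1)]] out_dart_vertex[OF y(1)]])
  ultimately have "out_dart y = x" using Out_vertex_inj[OF out_dart_mem[OF y(1)] x] by simp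
  thus "y = in_dart x" using in_out_dart[OF y(1)] by simp
qed

lemma in_dart_neq: assumes x: "x \<in> Out" shows "in_dart x \<noteq> x"
proof
  assume "in_dart x = x"
  hence "x \<in> Out \<inter> In" using in_dart_mem[OF x] x by simp
  thus False using Out_In_disjoint by simp
qed
lemma in_dart_mem_D: assumes x: "x \<in> Out" shows "in_dart x \<in> D"
  using In_subset in_dart_mem[OF x] by blast
lemma In_not_Out: assumes y: "y \<in> In" shows "y \<notin> Out" using Out_In_disjoint y by blast

lemma sigma_not_Out: "x \<in> Out \<Longrightarrow> sigma x \<notin> Out"
proof
  assume x: "x \<in> Out" and sx: "sigma x \<in> Out"
  have "sigma x \<in> orb sigma x" by (rule orb_closed[OF orb_self])
  hence "sigma x = x" using Out_unique[OF x sx] by simp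
  hence "orb sigma x \<subseteq> {x}" by (intro orb_least) auto
  thus False using in_dart_vertex[OF x] in_dart_neq[OF x] by blast
qed

(* Layer 0 contains all darts, layer 1 second copies of
   the darts of cycle edges.  At the vertex of x \<in> Out, the rotation of layer 0 runs through
   the sector from x to in_dart x and then returns to x, while the complementary sector is
   closed up through the copies (in_dart x, 1) and (x, 1). *)
definition cut_darts :: "('d \<times> nat) set" where
  "cut_darts = {z. (snd z = 0 \<and> fst z \<in> D) \<or> (snd z = 1 \<and> (fst z \<in> Out \<or> fst z \<in> In))}"

definition cut_sigma :: "'d \<times> nat \<Rightarrow> 'd \<times> nat" where
  "cut_sigma z = (if snd z = 0 \<and> fst z \<in> In then (out_dart (fst z), 0)
           else if snd z = 1 \<and> fst z \<in> Out then (in_dart (fst z), 1)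
           else (sigma (fst z), if sigma (fst z) \<in> Out then 1 else 0))"

definition cut_alpha :: "'d \<times> nat \<Rightarrow> 'd \<times> nat" where
  "cut_alpha z = (alpha (fst z), snd z)"

definition cut_face where "cut_face = cut_sigma \<circ> cut_alpha"

lemma cut_darts_0: "(d, 0) \<in> cut_darts \<longleftrightarrow> d \<in> D" unfolding cut_darts_def
  by simp
lemma cut_darts_1: "(d, 1) \<in> cut_darts \<longleftrightarrow> d \<in> Out \<or> d \<in> In"
  unfolding cut_darts_def by simp
lemma cut_darts_cases: "z \<in> cut_darts \<Longrightarrow> (\<exists>d. z = (d, 0) \<and> d \<in> D) \<or> (\<exists>d. z = (d, 1) \<and>
    (d \<in> Out \<or> d \<in> In))"
  unfolding cut_darts_def by (cases z) auto

lemma cut_sigma_In: "l = 0 \<Longrightarrow> d \<in> In \<Longrightarrow> cut_sigma (d, l) = (out_dart d, 0)"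
  unfolding cut_sigma_def by simp
lemma cut_sigma_Out: "l = 1 \<Longrightarrow> d \<in> Out \<Longrightarrow> cut_sigma (d, l) = (in_dart d, 1)"
  unfolding cut_sigma_def using Out_In_disjoint by auto
lemma cut_sigma_other: "\<not> (l = 0 \<and> d \<in> In) \<Longrightarrow> \<not> (l = 1 \<and> d \<in> Out) \<Longrightarrow> cut_sigma (d, l) =
    (sigma d, if sigma d \<in> Out then 1 else 0)"
  unfolding cut_sigma_def by auto

lemma finite_cut_darts: "finite cut_darts"
proof -
  have "cut_darts \<subseteq> D \<times> {0, 1}" unfolding cut_darts_def using Out_subset In_subset
    by auto
  thus ?thesis using finite_D finite_subset by blast
qed

lemma cut_sigma_mem: "z \<in> cut_darts \<Longrightarrow> cut_sigma z \<in> cut_darts"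
proof -
  assume z: "z \<in> cut_darts"
  obtain d l where zz: "z = (d, l)" by (cases z)
  have dD: "d \<in> D" using z Out_subset In_subset unfolding zz cut_darts_def by auto
  consider (B1) "l = 0" "d \<in> In" | (B2) "l = 1" "d \<in> Out" | (B3) "\<not> (l = 0 \<and> d \<in> In)"
    "\<not> (l = 1 \<and> d \<in> Out)"
    by blast
  thus ?thesis
  proof cases
    case B1 thus ?thesis unfolding zz
      using cut_sigma_In[OF B1] out_dart_mem[OF B1(2)] Out_mem_D cut_darts_0 by simp
  next
    case B2 thus ?thesis unfolding zz using cut_sigma_Out[OF B2] in_dart_mem[OF B2(2)] cut_darts_1
      by simp
  next
    case B3
    have "sigma d \<in> D" by (rule sigma_mem[OF dD])
    thus ?thesis unfolding zz cut_sigma_other[OF B3] cut_darts_def by simp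
  qed
qed

lemma cut_alpha_mem: "z \<in> cut_darts \<Longrightarrow> cut_alpha z \<in> cut_darts"
proof -
  assume z: "z \<in> cut_darts"
  show ?thesis
  proof (cases "snd z = 0")
    case True thus ?thesis using z alpha_mem unfolding cut_darts_def cut_alpha_def by auto
  next
    case False
    hence z1: "snd z = 1" "fst z \<in> Out \<or> fst z \<in> In" using z unfolding cut_darts_def
      by auto
    have "alpha (fst z) \<in> Out \<or> alpha (fst z) \<in> In"
      using z1(2) alpha_alpha Out_mem_D unfolding In_def by auto
    thus ?thesis using z1 unfolding cut_darts_def cut_alpha_def by simp
  qed
qed

lemma cut_alpha_alpha: "z \<in> cut_darts \<Longrightarrow> cut_alpha (cut_alpha z) = z"
proof -
  assume z: "z \<in> cut_darts"
  have "fst z \<in> D" using z Out_subset In_subset unfolding cut_darts_def by auto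
  thus ?thesis unfolding cut_alpha_def using alpha_alpha by (cases z) simp
qed

lemma inj_cut_sigma: "inj_on cut_sigma cut_darts"
proof (rule inj_onI)
  fix z w assume z: "z \<in> cut_darts" and w: "w \<in> cut_darts" and eq: "cut_sigma z = cut_sigma w"
  obtain d l where zz: "z = (d, l)" by (cases z)
  obtain e k where ww: "w = (e, k)" by (cases w)
  have dD: "d \<in> D" and eD: "e \<in> D" using z w Out_subset In_subset
    unfolding zz ww cut_darts_def by auto
  have l01: "l = 0 \<or> l = 1" and k01: "k = 0 \<or> k = 1" using z w unfolding zz ww cut_darts_def
    by auto
  consider (B1) "l = 0" "d \<in> In" | (B2) "l = 1" "d \<in> Out" | (B3) "\<not> (l = 0 \<and> d \<in> In)"
    "\<not> (l = 1 \<and> d \<in> Out)"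
    by blast
  note cz = this
  consider (C1) "k = 0" "e \<in> In" | (C2) "k = 1" "e \<in> Out" | (C3) "\<not> (k = 0 \<and> e \<in> In)"
    "\<not> (k = 1 \<and> e \<in> Out)"
    by blast
  note cw = this
  have eq': "cut_sigma (d, l) = cut_sigma (e, k)" using eq zz ww by simp
  show "z = w"
  proof (cases rule: cz)
    case B1
    show ?thesis
    proof (cases rule: cw)
      case C1
      hence "out_dart d = out_dart e" using eq' cut_sigma_In[OF B1] cut_sigma_In[OF C1] by simp
      hence "d = e" using in_out_dart B1(2) C1(2) by metis
      thus ?thesis using B1 C1 zz ww by simp
    next
      case C2 thus ?thesis using eq' cut_sigma_In[OF B1] cut_sigma_Out[OF C2] by simp
    next
      case C3
      from eq' have "(out_dart d, 0::nat) = (sigma e, if sigma e \<in> Out then 1 else 0)"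
        by (simp only: cut_sigma_In[OF B1] cut_sigma_other[OF C3])
      hence h: "out_dart d = sigma e" "(if sigma e \<in> Out then 1 else 0::nat) = 0" by simp_all
      have "sigma e \<in> Out" using h(1) out_dart_mem[OF B1(2)] by simp
      thus ?thesis using h(2) by simp
    qed
  next
    case B2
    show ?thesis
    proof (cases rule: cw)
      case C1 thus ?thesis using eq' cut_sigma_Out[OF B2] cut_sigma_In[OF C1] by simp
    next
      case C2
      hence "in_dart d = in_dart e" using eq' cut_sigma_Out[OF B2] cut_sigma_Out[OF C2] by simp
      hence "d = e" using out_in_dart B2(2) C2(2) by metis
      thus ?thesis using B2 C2 zz ww by simp
    next
      case C3
      from eq' have "(in_dart d, 1::nat) = (sigma e, if sigma e \<in> Out then 1 else 0)"
        by (simp only: cut_sigma_Out[OF B2] cut_sigma_other[OF C3])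
      hence "in_dart d = sigma e" "sigma e \<in> Out" by (auto split: if_splits)
      thus ?thesis using in_dart_mem[OF B2(2)] Out_In_disjoint by auto
    qed
  next
    case B3
    show ?thesis
    proof (cases rule: cw)
      case C1
      from eq' have "(out_dart e, 0::nat) = (sigma d, if sigma d \<in> Out then 1 else 0)"
        by (simp only: cut_sigma_other[OF B3] cut_sigma_In[OF C1])
      hence h: "out_dart e = sigma d" "(if sigma d \<in> Out then 1 else 0::nat) = 0" by simp_all
      have "sigma d \<in> Out" using h(1) out_dart_mem[OF C1(2)] by simp
      thus ?thesis using h(2) by simp
    next
      case C2
      from eq' have "(in_dart e, 1::nat) = (sigma d, if sigma d \<in> Out then 1 else 0)"
        by (simp only: cut_sigma_other[OF B3] cut_sigma_Out[OF C2])
      hence "in_dart e = sigma d" "sigma d \<in> Out" by (auto split: if_splits)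
      thus ?thesis using in_dart_mem[OF C2(2)] Out_In_disjoint by auto
    next
      case C3
      hence eq2: "sigma d = sigma e" using eq' cut_sigma_other[OF B3] cut_sigma_other[OF C3] by simp
      have de: "d = e" using eq2 dD eD perm_sigma unfolding perm_on_def bij_betw_def inj_on_def
        by blast
      have "l = k"
      proof (rule ccontr)
        assume "l \<noteq> k"
        hence "(l = 0 \<and> k = 1) \<or> (l = 1 \<and> k = 0)" using l01 k01 by auto
        thus False
        proof
          assume lk: "l = 0 \<and> k = 1"
          hence "e \<in> Out \<or> e \<in> In" using w unfolding ww cut_darts_def by simp
          thus False using B3 C3 lk de by auto
        next
          assume lk: "l = 1 \<and> k = 0"
          hence "d \<in> Out \<or> d \<in> In" using z unfolding zz cut_darts_def by simp
          thus False using B3 C3 lk de by auto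
        qed
      qed
      thus ?thesis using de zz ww by simp
    qed
  qed
qed

lemma perm_cut_sigma: "perm_on cut_sigma cut_darts"
proof -
  have "cut_sigma ` cut_darts = cut_darts"
    by (rule endo_inj_surj[OF finite_cut_darts _ inj_cut_sigma]) (use cut_sigma_mem in blast)
  thus ?thesis using finite_cut_darts inj_cut_sigma unfolding perm_on_def bij_betw_def by blast
qed

lemma perm_cut_alpha: "perm_on cut_alpha cut_darts"
proof -
  have inj: "inj_on cut_alpha cut_darts" by (rule inj_onI) (metis cut_alpha_alpha)
  have "cut_alpha ` cut_darts = cut_darts"
    by (rule endo_inj_surj[OF finite_cut_darts _ inj]) (use cut_alpha_mem in blast)
  thus ?thesis using finite_cut_darts inj unfolding perm_on_def bij_betw_def by blast
qed

lemma perm_cut_face: "perm_on cut_face cut_darts"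
  using perm_cut_sigma perm_cut_alpha unfolding perm_on_def cut_face_def
    by (auto intro: bij_betw_trans)

lemma out_dart_same_vertex: "e \<in> In \<Longrightarrow> out_dart e \<in> orb sigma e"
  by (rule orb_sym[OF perm_sigma Out_mem_D[OF out_dart_mem] out_dart_vertex]) (auto simp: out_dart_mem)

lemma cut_sigma_vertex: "z \<in> cut_darts \<Longrightarrow> fst (cut_sigma z) \<in> orb sigma (fst z)"
proof -
  assume z: "z \<in> cut_darts"
  obtain d l where zz: "z = (d, l)" by (cases z)
  consider (B1) "l = 0" "d \<in> In" | (B2) "l = 1" "d \<in> Out" | (B3) "\<not> (l = 0 \<and> d \<in> In)"
    "\<not> (l = 1 \<and> d \<in> Out)"
    by blast
  thus ?thesis
  proof cases
    case B1 thus ?thesis unfolding zz using cut_sigma_In[OF B1] out_dart_same_vertex[OF B1(2)]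
      by simp
  next
    case B2 thus ?thesis unfolding zz using cut_sigma_Out[OF B2] in_dart_vertex[OF B2(2)] by simp
  next
    case B3 thus ?thesis unfolding zz
      using cut_sigma_other[OF B3] orb_closed[OF orb_self[of d sigma]] by simp
  qed
qed

lemma orb_cut_sigma_vertex:
  assumes z: "z \<in> cut_darts" and w: "w \<in> orb cut_sigma z"
  shows "fst w \<in> orb sigma (fst z)" "w \<in> cut_darts"
proof -
  define T where "T = {u \<in> cut_darts. fst u \<in> orb sigma (fst z)}"
  have "orb cut_sigma z \<subseteq> T"
  proof (rule orb_least)
    show "z \<in> T" unfolding T_def using z orb_self[of "fst z" sigma] by blast
    fix u assume u: "u \<in> T"
    hence uD: "u \<in> cut_darts" "fst u \<in> orb sigma (fst z)" unfolding T_def by auto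
    have "fst (cut_sigma u) \<in> orb sigma (fst u)" by (rule cut_sigma_vertex[OF uD(1)])
    hence "fst (cut_sigma u) \<in> orb sigma (fst z)" using orb_subset[OF uD(2)] by blast
    thus "cut_sigma u \<in> T" unfolding T_def using cut_sigma_mem[OF uD(1)] by blast
  qed
  thus "fst w \<in> orb sigma (fst z)" "w \<in> cut_darts" using w unfolding T_def by auto
qed

definition sector_len where "sector_len x = (LEAST n. (sigma ^^ n) x = in_dart x)"

lemma sector_len_ex: assumes x: "x \<in> Out" shows "\<exists>n. (sigma ^^ n) x = in_dart x"
proof -
  have "in_dart x \<in> orb sigma x" by (rule in_dart_vertex[OF x])
  thus ?thesis unfolding orb_def by auto
qed

lemma sector_len_in_dart: "x \<in> Out \<Longrightarrow> (sigma ^^ sector_len x) x = in_dart x"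
  unfolding sector_len_def using sector_len_ex by (rule LeastI_ex)

lemma sector_len_min: "n < sector_len x \<Longrightarrow> (sigma ^^ n) x \<noteq> in_dart x"
  unfolding sector_len_def using not_less_Least by blast

lemma sector_len_pos: "x \<in> Out \<Longrightarrow> 0 < sector_len x"
proof (rule ccontr)
  assume x: "x \<in> Out" and "\<not> 0 < sector_len x"
  hence "sector_len x = 0" by simp
  hence "in_dart x = x" using sector_len_in_dart[OF x] by simp
  thus False using in_dart_neq[OF x] by simp
qed

lemma sector_no_return:
  assumes x: "x \<in> Out" and j: "0 < j" "j \<le> sector_len x"
  shows "(sigma ^^ j) x \<noteq> x"
proof
  assume sj: "(sigma ^^ j) x = x"
  have "(sigma ^^ sector_len x) x = (sigma ^^ (sector_len x mod j)) x" using funpow_mod_eq[OF sj]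
    by simp
  hence "(sigma ^^ (sector_len x mod j)) x = in_dart x" using sector_len_in_dart[OF x] by simp
  moreover have "sector_len x mod j < sector_len x" using j
    by (meson le_trans mod_less_divisor not_le)
  ultimately show False using sector_len_min by blast
qed

lemma cut_sigma_sector_step:
  assumes x: "x \<in> Out" and n: "n < sector_len x"
  shows "cut_sigma ((sigma ^^ n) x, 0) = ((sigma ^^ Suc n) x, 0)"
proof -
  have nI: "(sigma ^^ n) x \<notin> In"
  proof
    assume "(sigma ^^ n) x \<in> In"
    hence "(sigma ^^ n) x = in_dart x" using In_unique[OF x] orb_iter[of n sigma x] by blast
    thus False using sector_len_min[OF n] by simp
  qed
  have nC: "(sigma ^^ Suc n) x \<notin> Out"
  proof
    assume "(sigma ^^ Suc n) x \<in> Out"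
    hence "(sigma ^^ Suc n) x = x" using Out_unique[OF x] orb_iter[of "Suc n" sigma x] by blast
    thus False using sector_no_return[OF x, of "Suc n"] n by simp
  qed
  have "cut_sigma ((sigma ^^ n) x, 0) =
      (sigma ((sigma ^^ n) x), if sigma ((sigma ^^ n) x) \<in> Out then 1 else 0)"
    by (rule cut_sigma_other) (use nI in auto)
  thus ?thesis using nC by simp
qed

lemma cut_sigma_sector_iter: "x \<in> Out \<Longrightarrow> n \<le> sector_len x \<Longrightarrow> (cut_sigma ^^ n) (x, 0) =
    ((sigma ^^ n) x, 0)"
proof (induct n)
  case (Suc n)
  hence "(cut_sigma ^^ n) (x, 0) = ((sigma ^^ n) x, 0)" by simp
  thus ?case using cut_sigma_sector_step[OF Suc(2), of n] Suc(3) by simp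
qed simp

lemma cut_sigma_sector_end: "x \<in> Out \<Longrightarrow> cut_sigma ((sigma ^^ sector_len x) x, 0) = (x, 0)"
  using sector_len_in_dart cut_sigma_In[of 0 "in_dart x"] in_dart_mem out_in_dart by simp

definition sector where "sector x = {((sigma ^^ n) x, 0::nat) | n. n \<le> sector_len x}"

lemma orb_cut_sigma_sector: assumes x: "x \<in> Out" shows "orb cut_sigma (x, 0) = sector x"
proof
  show "orb cut_sigma (x, 0) \<subseteq> sector x"
  proof (rule orb_least)
    show "(x, 0) \<in> sector x" unfolding sector_def by (rule CollectI, rule exI[of _ 0]) simp
    fix z assume "z \<in> sector x"
    then obtain n where n: "n \<le> sector_len x" "z = ((sigma ^^ n) x, 0)" unfolding sector_def
      by blast
    show "cut_sigma z \<in> sector x"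
    proof (cases "n < sector_len x")
      case True
      have "cut_sigma z = ((sigma ^^ Suc n) x, 0)" using cut_sigma_sector_step[OF x True] n(2)
        by simp
      moreover have "Suc n \<le> sector_len x" using True by simp
      ultimately show ?thesis unfolding sector_def by blast
    next
      case False hence "n = sector_len x" using n by simp
      thus ?thesis using cut_sigma_sector_end[OF x] n unfolding sector_def
        by (auto intro: exI[of _ 0])
    qed
  qed
  show "sector x \<subseteq> orb cut_sigma (x, 0)"
  proof
    fix z assume "z \<in> sector x"
    then obtain n where n: "n \<le> sector_len x" "z = ((sigma ^^ n) x, 0)" unfolding sector_def
      by blast
    thus "z \<in> orb cut_sigma (x, 0)"
      using cut_sigma_sector_iter[OF x n(1)] orb_iter[of n cut_sigma "(x,0)"] by simp
  qed
qed

lemma Out_copies_split: "x \<in> Out \<Longrightarrow> (x, 1::nat) \<notin> orb cut_sigma (x, 0)"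
  using orb_cut_sigma_sector unfolding sector_def by auto

definition layer0 where "layer0 = (\<lambda>d. (d, 0::nat)) ` D"

lemma layer0_subset: "layer0 \<subseteq> cut_darts" unfolding layer0_def cut_darts_def by auto

lemma orbit_count_cut_alpha: "orbit_count cut_alpha cut_darts \<le> orbit_count alpha D + card Out"
proof -
  have cl: "\<And>z. z \<in> layer0 \<Longrightarrow> cut_alpha z \<in> layer0"
    unfolding layer0_def cut_alpha_def using alpha_mem by auto
  have add: "orbit_count cut_alpha cut_darts = orbit_count cut_alpha layer0 +
      orbit_count cut_alpha (cut_darts - layer0)"
    by (rule orbit_count_split[OF perm_cut_alpha layer0_subset cl])
  have c0: "orbit_count cut_alpha layer0 = orbit_count alpha D" unfolding layer0_def
    by (rule orbit_count_conj) (auto simp: inj_on_def cut_alpha_def alpha_mem finite_D)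
  have "orb cut_alpha ` (cut_darts - layer0) \<subseteq> (\<lambda>x. orb cut_alpha (x, 1)) ` Out"
  proof
    fix B assume "B \<in> orb cut_alpha ` (cut_darts - layer0)"
    then obtain z where z: "z \<in> cut_darts" "z \<notin> layer0" "B = orb cut_alpha z" by blast
    obtain d where d: "z = (d, 1)" "d \<in> Out \<or> d \<in> In" using z(1,2)
      unfolding cut_darts_def layer0_def by (cases z) auto
    show "B \<in> (\<lambda>x. orb cut_alpha (x, 1)) ` Out"
    proof (cases "d \<in> Out")
      case True thus ?thesis using z d by blast
    next
      case False
      then obtain x where x: "x \<in> Out" "d = alpha x" using d unfolding In_def by blast
      have x1: "(x, 1) \<in> cut_darts" using x cut_darts_1 by simp
      have "z \<in> orb cut_alpha (x, 1)" using d x orb_closed[OF orb_self, of cut_alpha "(x,1)"]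
        by (simp add: cut_alpha_def)
      hence "orb cut_alpha z = orb cut_alpha (x, 1)" by (rule orb_eq[OF perm_cut_alpha x1])
      thus ?thesis using z x by blast
    qed
  qed
  hence "orbit_count cut_alpha (cut_darts - layer0) \<le> card ((\<lambda>x. orb cut_alpha (x, 1)) ` Out)"
    unfolding orbit_count_def by (rule card_mono[rotated]) (use finite_Out in blast)
  also have "\<dots> \<le> card Out" by (rule card_image_le[OF finite_Out])
  finally show ?thesis using add c0 by simp
qed

definition lift_dart where "lift_dart d = (d, if d \<in> Out then 1 else 0::nat)"

lemma alpha_In_iff: "d \<in> D \<Longrightarrow> alpha d \<in> In \<longleftrightarrow> d \<in> Out"
proof
  assume d: "d \<in> D" and "alpha d \<in> In"
  then obtain x where "x \<in> Out" "alpha d = alpha x" unfolding In_def by blast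
  thus "d \<in> Out" using alpha_alpha d Out_mem_D by metis
next
  assume "d \<in> Out" thus "alpha d \<in> In" unfolding In_def by blast
qed

lemma cut_face_lift: assumes d: "d \<in> D" shows "cut_face (lift_dart d) =
    lift_dart ((sigma \<circ> alpha) d)"
proof (cases "d \<in> Out")
  case True
  have "alpha d \<notin> Out" using In_not_Out alpha_In_iff[OF d] True by blast
  hence "cut_sigma (alpha d, 1) = (sigma (alpha d), if sigma (alpha d) \<in> Out then 1 else 0)"
    by (intro cut_sigma_other) auto
  thus ?thesis using True unfolding cut_face_def lift_dart_def cut_alpha_def by simp
next
  case False
  have "alpha d \<notin> In" using alpha_In_iff[OF d] False by blast
  hence "cut_sigma (alpha d, 0) = (sigma (alpha d), if sigma (alpha d) \<in> Out then 1 else 0)"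
    by (intro cut_sigma_other) auto
  thus ?thesis using False unfolding cut_face_def lift_dart_def cut_alpha_def by simp
qed

lemma orbit_count_cut_face: "orbit_count cut_face cut_darts \<ge> orbit_count (sigma \<circ> alpha) D + 2"
proof -
  define R where "R = lift_dart ` D"
  have Rsub: "R \<subseteq> cut_darts" unfolding R_def lift_dart_def cut_darts_def by auto
  have cl: "\<And>z. z \<in> R \<Longrightarrow> cut_face z \<in> R"
    unfolding R_def using cut_face_lift sigma_mem alpha_mem by auto
  have add: "orbit_count cut_face cut_darts = orbit_count cut_face R +
      orbit_count cut_face (cut_darts - R)"
    by (rule orbit_count_split[OF perm_cut_face Rsub cl])
  have c0: "orbit_count cut_face R = orbit_count (sigma \<circ> alpha) D" unfolding R_def
  proof (rule orbit_count_conj)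
    show "inj_on lift_dart D" unfolding lift_dart_def by (rule inj_onI) simp
    show "\<And>x. x \<in> D \<Longrightarrow> (sigma \<circ> alpha) x \<in> D"
      using sigma_mem alpha_mem by simp
    show "\<And>x. x \<in> D \<Longrightarrow> cut_face (lift_dart x) = lift_dart ((sigma \<circ> alpha) x)"
      by (rule cut_face_lift)
  qed
  obtain x0 where x0: "x0 \<in> Out" using Out_nonempty by blast
  have z1: "(x0, 0) \<in> cut_darts - R" using x0 Out_mem_D
    unfolding R_def lift_dart_def cut_darts_def by auto
  have z2: "(alpha x0, 1) \<in> cut_darts - R"
  proof -
    have "alpha x0 \<in> In" using x0 unfolding In_def by blast
    hence "alpha x0 \<notin> Out" using In_not_Out by blast
    thus ?thesis using \<open>alpha x0 \<in> In\<close> unfolding R_def lift_dart_def cut_darts_def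
      by auto
  qed
  have CdL: "orb cut_face (x0, 0) \<subseteq> (\<lambda>x. (x, 0::nat)) ` Out"
  proof (rule orb_least)
    show "(x0, 0) \<in> (\<lambda>x. (x, 0::nat)) ` Out" using x0 by blast
    fix z assume "z \<in> (\<lambda>x. (x, 0::nat)) ` Out"
    then obtain x where x: "x \<in> Out" "z = (x, 0)" by blast
    have "alpha x \<in> In" using x unfolding In_def by blast
    hence "cut_face z = (out_dart (alpha x), 0)" using x cut_sigma_In
      unfolding cut_face_def cut_alpha_def by simp
    thus "cut_face z \<in> (\<lambda>x. (x, 0::nat)) ` Out"
      using out_dart_mem[OF \<open>alpha x \<in> In\<close>] by blast
  qed
  have differ: "orb cut_face (x0, 0) \<noteq> orb cut_face (alpha x0, 1)"
    using CdL orb_self[of "(alpha x0, 1::nat)" cut_face] by auto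
  have "{orb cut_face (x0, 0), orb cut_face (alpha x0, 1)} \<subseteq> orb cut_face ` (cut_darts - R)"
    using z1 z2 by blast
  moreover have "finite (orb cut_face ` (cut_darts - R))" using finite_cut_darts by blast
  ultimately have "card {orb cut_face (x0, 0), orb cut_face (alpha x0, 1)} \<le>
      orbit_count cut_face (cut_darts - R)"
    unfolding orbit_count_def by (rule card_mono[rotated])
  hence "2 \<le> orbit_count cut_face (cut_darts - R)" using differ by simp
  thus ?thesis using add c0 by simp
qed

definition off_cycle where "off_cycle = {d \<in> D. orb sigma d \<inter> Out = {}}"

lemma off_cycle_sigma: "d \<in> off_cycle \<Longrightarrow> sigma d \<in> off_cycle"
  using orb_step_eq[OF perm_sigma] sigma_mem unfolding off_cycle_def by auto

lemma orbit_count_sigma_le: "orbit_count sigma D \<le> orbit_count sigma off_cycle + card Out"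
proof -
  have "off_cycle \<subseteq> D" unfolding off_cycle_def by blast
  hence split: "orbit_count sigma D = orbit_count sigma off_cycle + orbit_count sigma (D -
      off_cycle)"
    by (rule orbit_count_split[OF perm_sigma _ off_cycle_sigma])
  have "orb sigma ` (D - off_cycle) \<subseteq> orb sigma ` Out"
  proof
    fix B assume "B \<in> orb sigma ` (D - off_cycle)"
    then obtain d where d: "d \<in> D" "d \<notin> off_cycle" "B = orb sigma d" by blast
    then obtain x where x: "x \<in> Out" "x \<in> orb sigma d" unfolding off_cycle_def by blast
    have "orb sigma x = orb sigma d" by (rule orb_eq[OF perm_sigma d(1) x(2)])
    thus "B \<in> orb sigma ` Out" using x d by blast
  qed
  hence "orbit_count sigma (D - off_cycle) \<le> card (orb sigma ` Out)" unfolding orbit_count_def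
    by (rule card_mono[rotated]) (use finite_Out in blast)
  also have "\<dots> \<le> card Out" by (rule card_image_le[OF finite_Out])
  finally show ?thesis using split by simp
qed

lemma cut_sigma_off_cycle:
  assumes d: "d \<in> off_cycle"
  shows "cut_sigma (d, 0) = (sigma d, 0)"
proof -
  have "d \<notin> In"
  proof
    assume "d \<in> In"
    hence "out_dart d \<in> orb sigma d" by (rule out_dart_same_vertex)
    thus False using out_dart_mem[OF \<open>d \<in> In\<close>] d unfolding off_cycle_def by blast
  qed
  moreover have "sigma d \<notin> Out" using d orb_closed[OF orb_self[of d sigma]]
    unfolding off_cycle_def by blast
  ultimately show ?thesis using cut_sigma_other[of 0 d] by simp
qed

lemma inj_on_orb_cut_sigma_Out: "inj_on (orb cut_sigma) (Out \<times> {0, 1})"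
proof (rule inj_onI)
  fix z w assume z: "z \<in> Out \<times> {0, 1}" and w: "w \<in> Out \<times> {0, 1}"
    and eq: "orb cut_sigma z = orb cut_sigma w"
  obtain x l where zz: "z = (x, l)" "x \<in> Out" "l = 0 \<or> l = 1" using z by blast
  obtain y k where ww: "w = (y, k)" "y \<in> Out" "k = 0 \<or> k = 1" using w by blast
  have "z \<in> cut_darts" using zz Out_mem_D cut_darts_def by auto
  moreover have "w \<in> orb cut_sigma z" using eq orb_self[of w cut_sigma] by simp
  ultimately have "fst w \<in> orb sigma (fst z)" by (rule orb_cut_sigma_vertex(1))
  hence yx: "y = x" using Out_unique[OF zz(2) ww(2)] zz ww by simp
  have "orb cut_sigma (x, 0) \<noteq> orb cut_sigma (x, 1)"
    using Out_copies_split[OF zz(2)] orb_self[of "(x, 1::nat)" cut_sigma] by auto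
  hence "l = k" using eq zz ww yx by auto
  thus "z = w" using zz ww yx by simp
qed

lemma orbit_count_cut_sigma: "orbit_count cut_sigma cut_darts \<ge> orbit_count sigma D + card Out"
proof -
  define A where "A = (\<lambda>d. (d, 0::nat)) ` off_cycle"
  have A_sub: "A \<subseteq> cut_darts" unfolding A_def cut_darts_def off_cycle_def by auto
  have A_cl: "\<And>z. z \<in> A \<Longrightarrow> cut_sigma z \<in> A"
    unfolding A_def using cut_sigma_off_cycle off_cycle_sigma by auto
  have split: "orbit_count cut_sigma cut_darts = orbit_count cut_sigma A +
      orbit_count cut_sigma (cut_darts - A)"
    by (rule orbit_count_split[OF perm_cut_sigma A_sub A_cl])
  have "orbit_count cut_sigma A = orbit_count sigma off_cycle" unfolding A_def
    by (rule orbit_count_conj) (auto intro: inj_onI off_cycle_sigma cut_sigma_off_cycle)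
  moreover have "orb cut_sigma ` (Out \<times> {0, 1}) \<subseteq> orb cut_sigma ` (cut_darts - A)"
  proof
    fix B assume "B \<in> orb cut_sigma ` (Out \<times> {0, 1})"
    then obtain x l where xl: "x \<in> Out" "l = 0 \<or> l = 1" "B = orb cut_sigma (x, l)" by blast
    have "(x, l) \<in> cut_darts" using xl Out_mem_D cut_darts_def by auto
    moreover have "(x, l) \<notin> A" using xl orb_self[of x sigma] unfolding A_def off_cycle_def
      by auto
    ultimately show "B \<in> orb cut_sigma ` (cut_darts - A)" using xl by blast
  qed
  hence "card (orb cut_sigma ` (Out \<times> {0, 1})) \<le> orbit_count cut_sigma (cut_darts - A)"
    unfolding orbit_count_def by (rule card_mono[rotated]) (use finite_cut_darts in blast)
  moreover have "card (orb cut_sigma ` (Out \<times> {0, 1})) = 2 * card Out"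
    using card_image[OF inj_on_orb_cut_sigma_Out] finite_Out by (simp add: card_cartesian_product)
  ultimately show ?thesis using split orbit_count_sigma_le by simp
qed

lemma cut_euler_char: "int (orbit_count cut_sigma cut_darts) -
    int (orbit_count cut_alpha cut_darts) + int (orbit_count cut_face cut_darts) \<ge> 4"
  using orbit_count_cut_sigma orbit_count_cut_alpha orbit_count_cut_face euler_formula
    unfolding cut_face_def by linarith

abbreviation cut_comp where "cut_comp \<equiv> map_component cut_sigma cut_alpha cut_darts"

lemma cut_comp_step: "y \<in> cut_comp x \<Longrightarrow> y \<in> cut_darts \<Longrightarrow> cut_sigma y \<in> cut_comp x \<and>
    cut_alpha y \<in> cut_comp x"
  using map_component_step[of y cut_sigma cut_alpha cut_darts x] by simp

lemma cut_comp_subset: "z \<in> cut_darts \<Longrightarrow> cut_comp z \<subseteq> cut_darts"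
  by (rule map_component_subset) (auto intro: cut_sigma_mem cut_alpha_mem)

lemma cut_comp_face: "z \<in> cut_comp x \<Longrightarrow> z \<in> cut_darts \<Longrightarrow> cut_face z \<in> cut_comp x"
  using cut_comp_step cut_alpha_mem unfolding cut_face_def by simp

lemma cut_comp_back_sigma: "y \<in> cut_darts \<Longrightarrow> cut_sigma y \<in> cut_comp x \<Longrightarrow> y \<in> cut_comp x"
  using map_component_back[of y cut_darts cut_sigma cut_alpha x] by simp
lemma cut_comp_back_alpha: "y \<in> cut_darts \<Longrightarrow> cut_alpha y \<in> cut_comp x \<Longrightarrow> y \<in> cut_comp x"
  using map_component_back[of y cut_darts cut_sigma cut_alpha x] by simp

lemma layer1_connected:
  assumes x0: "x0 \<in> Out" and d: "d \<in> Out \<or> d \<in> In"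
  shows "(d, 1) \<in> cut_comp (x0, 1)"
proof -
  have step: "(next_out y, 1) \<in> cut_comp (x0, 1)" if y: "y \<in> Out" "(y, 1) \<in> cut_comp (x0, 1)" for y
  proof -
    have yD: "(y, 1) \<in> cut_darts" using y cut_darts_1 by simp
    have "cut_alpha (y, 1) \<in> cut_comp (x0, 1)" using cut_comp_step[OF y(2) yD] by blast
    hence "(alpha y, 1) \<in> cut_comp (x0, 1)" by (simp add: cut_alpha_def)
    moreover have "cut_sigma (next_out y, 1) = (alpha y, 1)"
      using cut_sigma_Out[of 1 "next_out y"] next_out_mem[OF y(1)] alpha_eq_in_dart_next[OF y(1)]
        by simp
    moreover have "(next_out y, 1) \<in> cut_darts" using next_out_mem[OF y(1)] cut_darts_1 by simp
    ultimately show ?thesis using cut_comp_back_sigma by metis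
  qed
  have all: "(y, 1) \<in> cut_comp (x0, 1)" if y: "y \<in> Out" for y
  proof -
    have "y \<in> orb next_out x0" by (rule Out_single_orbit[OF x0 y])
    then obtain n where n: "y = (next_out ^^ n) x0" unfolding orb_def by blast
    have "((next_out ^^ n) x0, 1) \<in> cut_comp (x0, 1) \<and> (next_out ^^ n) x0 \<in> Out" for n
    proof (induct n)
      case 0 thus ?case using map_component_self x0 by simp
    next
      case (Suc n) thus ?case using step next_out_mem by simp
    qed
    thus ?thesis using n by blast
  qed
  show ?thesis
  proof (cases "d \<in> Out")
    case True thus ?thesis by (rule all)
  next
    case False
    then obtain x where x: "x \<in> Out" "d = alpha x" using d unfolding In_def by blast
    have "(x, 1) \<in> cut_comp (x0, 1)" by (rule all[OF x(1)])
    moreover have "(x, 1) \<in> cut_darts" using x cut_darts_1 by simp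
    ultimately have "cut_alpha (x, 1) \<in> cut_comp (x0, 1)" using cut_comp_step by blast
    thus ?thesis using x by (simp add: cut_alpha_def)
  qed
qed

lemma cut_face_Out: "x \<in> Out \<Longrightarrow> cut_face (x, 0) = (next_out x, 0)"
proof -
  assume x: "x \<in> Out"
  have "alpha x \<in> In" using x unfolding In_def by blast
  moreover have "out_dart (alpha x) = next_out x" unfolding out_dart_def
    using alpha_alpha Out_mem_D x by simp
  ultimately show ?thesis unfolding cut_face_def cut_alpha_def using cut_sigma_In by simp
qed

lemma layer0_Out_connected:
  assumes x0: "x0 \<in> Out" and y: "y \<in> Out"
  shows "(y, 0) \<in> cut_comp (x0, 0)"
proof -
  have step: "(next_out y, 0) \<in> cut_comp (x0, 0)" if y: "y \<in> Out" "(y, 0) \<in> cut_comp (x0, 0)" for y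
  proof -
    have yD: "(y, 0) \<in> cut_darts" using y Out_mem_D cut_darts_0 by simp
    have "cut_alpha (y, 0) \<in> cut_comp (x0, 0)" using cut_comp_step[OF y(2) yD] by blast
    moreover have "cut_alpha (y, 0) \<in> cut_darts" using cut_alpha_mem[OF yD] .
    ultimately have "cut_sigma (cut_alpha (y, 0)) \<in> cut_comp (x0, 0)" using cut_comp_step
      by blast
    thus ?thesis using cut_face_Out[OF y(1)] unfolding cut_face_def by simp
  qed
  have "y \<in> orb next_out x0" by (rule Out_single_orbit[OF x0 y])
  then obtain n where n: "y = (next_out ^^ n) x0" unfolding orb_def by blast
  have "((next_out ^^ n) x0, 0) \<in> cut_comp (x0, 0) \<and> (next_out ^^ n) x0 \<in> Out" for n
  proof (induct n)
    case 0 thus ?case using map_component_self x0 by simp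
  next
    case (Suc n) thus ?case using step next_out_mem by simp
  qed
  thus ?thesis using n by blast
qed

lemma cut_comp_union_back:
  assumes "y \<in> cut_darts"
    "cut_sigma y \<in> cut_comp u \<union> cut_comp v \<or> cut_alpha y \<in> cut_comp u \<union> cut_comp v"
  shows "y \<in> cut_comp u \<union> cut_comp v"
  using assms cut_comp_back_sigma[of y u] cut_comp_back_alpha[of y u] cut_comp_back_sigma[of y v] cut_comp_back_alpha[of y v]
    by blast

lemma cut_comp_two_sides:
  assumes x0: "x0 \<in> Out" and z: "z \<in> cut_darts"
  shows "z \<in> cut_comp (x0, 0) \<union> cut_comp (x0, 1)"
proof -
  define G where "G = cut_comp (x0, 0) \<union> cut_comp (x0, 1)"
  have layer0: "(d, 0) \<in> G" if d: "d \<in> D" for d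
  proof -
    have "(d, x0) \<in> ({(x, alpha x) | x. x \<in> D} \<union> {(x, sigma x) | x. x \<in> D})\<^sup>*"
      by (rule connected[OF d Out_mem_D[OF x0]])
    thus ?thesis
    proof (induct rule: converse_rtrancl_induct)
      case base thus ?case unfolding G_def
        using map_component_self[of "(x0,0::nat)" cut_sigma cut_alpha cut_darts] by blast
    next
      case (step d e)
      from step(1) consider (A) "d \<in> D" "e = alpha d" | (S) "d \<in> D" "e = sigma d" by blast
      thus ?case
      proof cases
        case A
        have "cut_alpha (d, 0) \<in> G" using A step(3) by (simp add: cut_alpha_def)
        thus ?thesis using cut_comp_union_back[of "(d,0)"] A cut_darts_0 unfolding G_def by blast
      next
        case S
        have dD: "(d, 0) \<in> cut_darts" using S cut_darts_0 by simp
        show ?thesis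
        proof (cases "d \<in> In")
          case True
          have "cut_sigma (d, 0) = (out_dart d, 0)" using cut_sigma_In True by simp
          moreover have "(out_dart d, 0) \<in> cut_comp (x0, 0)"
            by (rule layer0_Out_connected[OF x0 out_dart_mem[OF True]])
          ultimately show ?thesis using cut_comp_union_back[OF dD] unfolding G_def by simp
        next
          case nI: False
          show ?thesis
          proof (cases "sigma d \<in> Out")
            case True
            have "cut_sigma (d, 0) = (sigma d, 1)" using cut_sigma_other[of 0 d] nI True by simp
            moreover have "(sigma d, 1) \<in> cut_comp (x0, 1)"
              by (rule layer1_connected[OF x0]) (use True in blast)
            ultimately show ?thesis using cut_comp_union_back[OF dD] unfolding G_def by simp
          next
            case False
            have "cut_sigma (d, 0) = (sigma d, 0)" using cut_sigma_other[of 0 d] nI False by simp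
            hence "cut_sigma (d, 0) \<in> G" using step(3) S by simp
            thus ?thesis using cut_comp_union_back[OF dD, of "(x0,0)" "(x0,1)"] unfolding G_def
              by blast
          qed
        qed
      qed
    qed
  qed
  show ?thesis
    using cut_darts_cases[OF z] layer0 layer1_connected[OF x0] unfolding G_def by blast
qed

lemma cut_alpha_involution: "z \<in> cut_darts \<Longrightarrow> cut_alpha z \<in> cut_darts \<and> cut_alpha (cut_alpha z) = z"
  using cut_alpha_mem cut_alpha_alpha by blast

lemma cut_sides_distinct:
  assumes x0: "x0 \<in> Out"
  shows "(x0, 1) \<notin> cut_comp (x0, 0)"
proof
  assume "(x0, 1) \<in> cut_comp (x0, 0)"
  hence "cut_comp (x0, 1) = cut_comp (x0, 0)" by (rule map_component_eq)
  hence all: "z \<in> cut_comp (x0, 0)" if "z \<in> cut_darts" for z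
    using cut_comp_two_sides[OF x0 that] by blast
  have conn: "(z, w) \<in> (map_graph cut_sigma cut_alpha cut_darts)\<^sup>*"
    if "z \<in> cut_darts" "w \<in> cut_darts" for z w
  proof -
    have "((x0, 0), z) \<in> (map_graph cut_sigma cut_alpha cut_darts)\<^sup>*"
      "((x0, 0), w) \<in> (map_graph cut_sigma cut_alpha cut_darts)\<^sup>*"
      using all that unfolding map_component_def by auto
    thus ?thesis using symD[OF sym_rtrancl[OF sym_map_graph]] by (meson rtrancl_trans)
  qed
  have "cut_darts \<noteq> {}" using x0 Out_mem_D cut_darts_0 by blast
  hence "orbit_count cut_sigma cut_darts + orbit_count cut_face cut_darts \<le>
      orbit_count cut_alpha cut_darts + 2"
    using euler_inequality[OF perm_cut_sigma cut_alpha_involution _ conn] unfolding cut_face_def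
      by blast
  thus False using cut_euler_char by linarith
qed

lemma cut_comp_other_side:
  assumes x0: "x0 \<in> Out"
  shows "cut_darts - cut_comp (x0, 0) = cut_comp (x0, 1)"
proof
  show "cut_darts - cut_comp (x0, 0) \<subseteq> cut_comp (x0, 1)" using cut_comp_two_sides[OF x0]
    by blast
  have "(x0, 1) \<in> cut_darts" using x0 unfolding cut_darts_def by simp
  hence "cut_comp (x0, 1) \<subseteq> cut_darts" by (rule cut_comp_subset)
  moreover have "z \<notin> cut_comp (x0, 0)" if "z \<in> cut_comp (x0, 1)" for z
    using that cut_sides_distinct[OF x0] map_component_eq map_component_self by metis
  ultimately show "cut_comp (x0, 1) \<subseteq> cut_darts - cut_comp (x0, 0)" by blast
qed

lemma alpha_In: "y \<in> In \<Longrightarrow> alpha y \<in> Out"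
  unfolding In_def using alpha_alpha Out_mem_D by auto

lemma in_dart_alpha_funpow:
  assumes w: "w \<in> Out"
  shows "((in_dart \<circ> alpha) ^^ n) (alpha ((next_out ^^ n) w)) = alpha w"
  using w
proof (induct n arbitrary: w)
  case (Suc n)
  let ?p = "(next_out ^^ n) w"
  have p: "?p \<in> Out" by (rule perm_on_funpow_mem[OF perm_next_out Suc.prems])
  have step: "(in_dart \<circ> alpha) (alpha ((next_out ^^ Suc n) w)) = alpha ?p"
    using alpha_alpha[OF Out_mem_D[OF next_out_mem[OF p]]] alpha_eq_in_dart_next[OF p] by simp
  have "((in_dart \<circ> alpha) ^^ Suc n) (alpha ((next_out ^^ Suc n) w))
      = ((in_dart \<circ> alpha) ^^ n) ((in_dart \<circ> alpha) (alpha ((next_out ^^ Suc n) w)))"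
    by (simp only: funpow_Suc_right o_apply)
  also have "\<dots> = alpha w" unfolding step by (rule Suc.hyps[OF Suc.prems])
  finally show ?case .
qed simp

lemma reversed_plane_cycle: "plane_cycle D alpha sigma In (in_dart \<circ> alpha)"
proof unfold_locales
  show "In \<subseteq> D" by (rule In_subset)
  show "In \<noteq> {}" using Out_nonempty unfolding In_def by blast
  fix y assume y: "y \<in> In"
  show "(in_dart \<circ> alpha) y \<in> In" using in_dart_mem alpha_In[OF y] by simp
  show "alpha y \<in> orb sigma ((in_dart \<circ> alpha) y)"
    using orb_sym[OF perm_sigma Out_mem_D[OF alpha_In[OF y]] in_dart_vertex[OF alpha_In[OF y]]]
      by simp
  show "alpha y \<notin> In" using alpha_In[OF y] Out_In_disjoint by blast
  have oy: "orb sigma y = orb sigma (out_dart y)"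
    by (rule orb_eq[OF perm_sigma Out_mem_D[OF out_dart_mem[OF y]] out_dart_vertex[OF y]])
  fix y' assume y': "y' \<in> In"
  have oy': "orb sigma y' = orb sigma (out_dart y')"
    by (rule orb_eq[OF perm_sigma Out_mem_D[OF out_dart_mem[OF y']] out_dart_vertex[OF y']])
  show "orb sigma y = orb sigma y' \<Longrightarrow> y = y'"
    using Out_vertex_inj[OF out_dart_mem[OF y] out_dart_mem[OF y']] oy oy' in_out_dart[OF y] in_out_dart[OF y']
    by metis
  obtain z where z: "z \<in> Out" "y = alpha z" using y unfolding In_def by blast
  obtain z' where z': "z' \<in> Out" "y' = alpha z'" using y' unfolding In_def by blast
  obtain n where "z = (next_out ^^ n) z'" using Out_single_orbit[OF z'(1) z(1)] unfolding orb_def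
    by blast
  thus "y' \<in> orb (in_dart \<circ> alpha) y"
    using in_dart_alpha_funpow[OF z'(1), of n] z z' orb_iter[of n "in_dart \<circ> alpha" y] by simp
qed

(* Exchanging the two copies of the cycle darts turns the cut map of the reversed cycle into
   this one (rev_cut_sigma_swap_sides); this transfers results about the side of (x, 0)
   to the side of (x, 1). *)
definition swap_sides :: "'d \<times> nat \<Rightarrow> 'd \<times> nat" where
  "swap_sides z = (if fst z \<in> Out \<or> fst z \<in> In then (fst z, 1 - snd z) else z)"

lemma swap_sides_lift: "swap_sides (e, if e \<in> Out then 1 else 0) = (e, if e \<in> In then 1 else 0)"
  unfolding swap_sides_def using Out_In_disjoint by auto

lemma swap_sides_mem: "z \<in> cut_darts \<Longrightarrow> swap_sides z \<in> cut_darts"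
  unfolding swap_sides_def cut_darts_def using Out_subset In_subset by (cases z) auto

lemma swap_sides_swap_sides: "z \<in> cut_darts \<Longrightarrow> swap_sides (swap_sides z) = z"
  unfolding swap_sides_def cut_darts_def by (cases z) auto

lemma swap_sides_cut_alpha: "z \<in> cut_darts \<Longrightarrow> cut_alpha (swap_sides z) = swap_sides (cut_alpha z)"
proof -
  assume z: "z \<in> cut_darts"
  obtain d l where zz: "z = (d, l)" by (cases z)
  have dD: "d \<in> D" using z Out_subset In_subset unfolding zz cut_darts_def by auto
  have "alpha d \<in> Out \<or> alpha d \<in> In \<longleftrightarrow> d \<in> Out \<or> d \<in> In"
    using alpha_In_iff[OF dD] alpha_In_iff[OF alpha_mem[OF dD]] alpha_alpha[OF dD] by auto
  thus ?thesis unfolding zz swap_sides_def cut_alpha_def by auto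
qed

end

context plane_cycle
begin

interpretation rev: plane_cycle D alpha sigma In "in_dart \<circ> alpha"
  by (rule reversed_plane_cycle)

lemma rev_In: "rev.In = Out"
proof -
  have "alpha ` In = Out" unfolding In_def using alpha_alpha Out_mem_D by (auto simp: image_iff)
  thus ?thesis unfolding rev.In_def .
qed

lemma rev_out_dart: "y \<in> Out \<Longrightarrow> rev.out_dart y = in_dart y"
  unfolding rev.out_dart_def using alpha_alpha[OF Out_mem_D] by simp

lemma rev_in_dart:
  assumes y: "y \<in> In"
  shows "rev.in_dart y = out_dart y"
proof -
  have w: "alpha (out_dart y) \<in> In" using out_dart_mem[OF y] unfolding In_def by blast
  have "(in_dart \<circ> alpha) (alpha (out_dart y)) = y"
    using alpha_alpha[OF Out_mem_D[OF out_dart_mem[OF y]]] in_out_dart[OF y] by simp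
  hence "rev.prev_out y = alpha (out_dart y)" using rev.prev_next_out[OF w] by simp
  thus ?thesis unfolding rev.in_dart_def using alpha_alpha[OF Out_mem_D[OF out_dart_mem[OF y]]]
    by simp
qed

lemma rev_cut_darts: "rev.cut_darts = cut_darts"
  unfolding rev.cut_darts_def cut_darts_def rev_In by auto

lemma rev_cut_alpha: "rev.cut_alpha = cut_alpha"
  unfolding rev.cut_alpha_def[abs_def] cut_alpha_def[abs_def] by simp

lemma rev_cut_sigma_swap_sides:
  assumes z: "z \<in> cut_darts"
  shows "rev.cut_sigma (swap_sides z) = swap_sides (cut_sigma z)"
proof -
  obtain d l where zz: "z = (d, l)" by (cases z)
  have dD: "d \<in> D" using z Out_subset In_subset unfolding zz cut_darts_def by auto
  consider (i) "l = 0" "d \<in> In" | (ii) "l = 0" "d \<in> Out" | (iii) "l = 1" "d \<in> Out" | (iv) "l = 1"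
    "d \<in> In"
    | (v) "d \<notin> Out" "d \<notin> In" "l = 0"
    using z unfolding zz cut_darts_def by auto
  thus ?thesis
  proof cases
    case i
    have "cut_sigma z = (out_dart d, 0)" unfolding zz using cut_sigma_In i by simp
    moreover have "swap_sides (out_dart d, 0) = (out_dart d, 1)" unfolding swap_sides_def
      using out_dart_mem[OF i(2)] by simp
    moreover have "swap_sides z = (d, 1)" unfolding zz swap_sides_def using i by simp
    moreover have "rev.cut_sigma (d, 1) = (out_dart d, 1)"
      using rev.cut_sigma_Out[of 1 d] i rev_in_dart by simp
    ultimately show ?thesis by simp
  next
    case ii
    have nI: "d \<notin> In" using Out_In_disjoint ii(2) by blast
    have "cut_sigma z = (sigma d, if sigma d \<in> Out then 1 else 0)" unfolding zz
      using cut_sigma_other[of l d] ii nI by auto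
    hence "swap_sides (cut_sigma z) = (sigma d, if sigma d \<in> In then 1 else 0)"
      using swap_sides_lift by simp
    moreover have "swap_sides z = (d, 1)" unfolding zz swap_sides_def using ii by simp
    moreover have "rev.cut_sigma (d, 1) = (sigma d, if sigma d \<in> In then 1 else 0)"
      using rev.cut_sigma_other[of 1 d] ii nI by auto
    ultimately show ?thesis by simp
  next
    case iii
    have "cut_sigma z = (in_dart d, 1)" unfolding zz using cut_sigma_Out iii by simp
    moreover have "swap_sides (in_dart d, 1) = (in_dart d, 0)" unfolding swap_sides_def
      using in_dart_mem[OF iii(2)] by simp
    moreover have "swap_sides z = (d, 0)" unfolding zz swap_sides_def using iii by simp
    moreover have "rev.cut_sigma (d, 0) = (in_dart d, 0)"
      using rev.cut_sigma_In[of 0 d] iii rev_In rev_out_dart by simp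
    ultimately show ?thesis by simp
  next
    case iv
    have nC: "d \<notin> Out" using Out_In_disjoint iv(2) by blast
    have "cut_sigma z = (sigma d, if sigma d \<in> Out then 1 else 0)" unfolding zz
      using cut_sigma_other[of l d] iv nC by auto
    hence "swap_sides (cut_sigma z) = (sigma d, if sigma d \<in> In then 1 else 0)"
      using swap_sides_lift by simp
    moreover have "swap_sides z = (d, 0)" unfolding zz swap_sides_def using iv by simp
    moreover have "rev.cut_sigma (d, 0) = (sigma d, if sigma d \<in> In then 1 else 0)"
      using rev.cut_sigma_other[of 0 d] iv nC rev_In by auto
    ultimately show ?thesis by simp
  next
    case v
    have "cut_sigma z = (sigma d, if sigma d \<in> Out then 1 else 0)" unfolding zz
      using cut_sigma_other[of l d] v by auto
    hence "swap_sides (cut_sigma z) = (sigma d, if sigma d \<in> In then 1 else 0)"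
      using swap_sides_lift by simp
    moreover have "swap_sides z = (d, 0)" unfolding zz swap_sides_def using v by simp
    moreover have "rev.cut_sigma (d, 0) = (sigma d, if sigma d \<in> In then 1 else 0)"
      using rev.cut_sigma_other[of 0 d] v rev_In by auto
    ultimately show ?thesis by simp
  qed
qed

lemma swap_sides_rev_cut_sigma:
  assumes z: "z \<in> cut_darts"
  shows "swap_sides (rev.cut_sigma z) = cut_sigma (swap_sides z)"
proof -
  have "rev.cut_sigma (swap_sides (swap_sides z)) = swap_sides (cut_sigma (swap_sides z))"
    by (rule rev_cut_sigma_swap_sides[OF swap_sides_mem[OF z]])
  hence "rev.cut_sigma z = swap_sides (cut_sigma (swap_sides z))" using swap_sides_swap_sides[OF z]
    by simp
  thus ?thesis using swap_sides_swap_sides[OF cut_sigma_mem[OF swap_sides_mem[OF z]]] by simp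
qed

lemma swap_sides_rev_path:
  assumes "(u, v) \<in> (map_graph rev.cut_sigma rev.cut_alpha rev.cut_darts)\<^sup>*"
  shows "(swap_sides u, swap_sides v) \<in> (map_graph cut_sigma cut_alpha cut_darts)\<^sup>*"
  using assms
proof (induct rule: rtrancl_induct)
  case base thus ?case by simp
next
  case (step v w)
  have E1: "(y, cut_sigma y) \<in> map_graph cut_sigma cut_alpha cut_darts"
    "(cut_sigma y, y) \<in> map_graph cut_sigma cut_alpha cut_darts"
    "(y, cut_alpha y) \<in> map_graph cut_sigma cut_alpha cut_darts"
      "(cut_alpha y, y) \<in> map_graph cut_sigma cut_alpha cut_darts" if "y \<in> cut_darts" for y
    using that unfolding map_graph_def by blast+
  have "(v, w) \<in> map_graph rev.cut_sigma cut_alpha cut_darts"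
    using step(2) rev_cut_darts rev_cut_alpha by simp
  then consider (c1) z where "z \<in> cut_darts" "v = z"
    "w = rev.cut_sigma z" | (c2) z where "z \<in> cut_darts" "v = rev.cut_sigma z" "w = z"
    | (c3) z where "z \<in> cut_darts" "v = z" "w = cut_alpha z" | (c4) z where "z \<in> cut_darts"
      "v = cut_alpha z" "w = z"
    unfolding map_graph_def by blast
  hence "(swap_sides v, swap_sides w) \<in> map_graph cut_sigma cut_alpha cut_darts"
  proof cases
    case (c1 z) thus ?thesis
      using swap_sides_rev_cut_sigma[OF c1(1)] E1(1)[OF swap_sides_mem[OF c1(1)]] by simp
  next
    case (c2 z) thus ?thesis
      using swap_sides_rev_cut_sigma[OF c2(1)] E1(2)[OF swap_sides_mem[OF c2(1)]] by simp
  next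
    case (c3 z) thus ?thesis using swap_sides_cut_alpha[OF c3(1)] E1(3)[OF swap_sides_mem[OF c3(1)]]
      by simp
  next
    case (c4 z) thus ?thesis using swap_sides_cut_alpha[OF c4(1)] E1(4)[OF swap_sides_mem[OF c4(1)]]
      by simp
  qed
  thus ?case using step(3) by (simp add: rtrancl_into_rtrancl)
qed

end

section \<open>A side of the cycle without poles\<close>

(* These assumptions are contradictory (this is the theorem): the lemmas of this locale are the
   steps of a proof by contradiction that ends with directed_cycle_absurd. *)
locale labeled_cycle = weakly_labeled_map + plane_cycle +
  fixes c :: nat
  assumes c_le_1: "c \<le> 1" and Out_tail_dart: "\<And>x. x \<in> Out \<Longrightarrow> tail_dart lab sigma alpha c x"
begin

lemma pole_not_on_cycle:
  assumes x: "x \<in> Out" and P: "P = s0 \<or> P = s1"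
  shows "orb sigma x \<noteq> P"
proof
  assume eq: "orb sigma x = P"
  obtain v where v: "\<And>d. d \<in> P \<Longrightarrow> lab d = v" using pole_vertex(2)[OF P]
    by blast
  have xP: "x \<in> P" using eq orb_self by metis
  have sxP: "sigma x \<in> P" using eq orb_closed[OF orb_self] by metis
  have iP: "in_dart x \<in> P" using eq in_dart_vertex[OF x] by simp
  have siP: "sigma (in_dart x) \<in> P" using eq orb_closed[OF in_dart_vertex[OF x]] by simp
  have lx: "lab x = v" "lab (sigma x) = v" using v xP sxP by auto
  have li: "lab (in_dart x) = v" "lab (sigma (in_dart x)) = v" using v iP siP by auto
  have na: "lab (alpha x) \<noteq> lab (sigma (alpha x))" using edge_rule[OF Out_mem_D[OF x]] lx
    by simp
  have "v = 1 - c" using Out_tail_dart[OF x] na lx unfolding tail_dart_def by auto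
  define z where "z = prev_out x"
  have z: "z \<in> Out" "alpha z = in_dart x" unfolding z_def in_dart_def using prev_out_mem x
    by auto
  have nz: "lab z \<noteq> lab (sigma z)" using edge_rule[OF Out_mem_D[OF z(1)]] z(2) li by simp
  have "v = c" using Out_tail_dart[OF z(1)] nz z(2) li unfolding tail_dart_def by auto
  thus False using \<open>v = 1 - c\<close> c_le_1 by arith
qed

lemma pole_mem: assumes P: "P = s0 \<or> P = s1" and d: "d \<in> P" shows "d \<in> D" "orb sigma d = P"
proof -
  obtain d0 where d0: "d0 \<in> D" "P = orb sigma d0" using pole_vertex(1)[OF P] by blast
  show "d \<in> D" using d d0 orb_subset_carrier[OF perm_sigma d0(1)] by blast
  show "orb sigma d = P" using orb_eq[OF perm_sigma d0(1)] d d0(2) by simp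
qed

lemma pole_not_cycle_dart: assumes P: "P = s0 \<or> P = s1" and d: "d \<in> P" shows "d \<notin> Out" "d \<notin> In"
proof -
  have o: "orb sigma d = P" by (rule pole_mem(2)[OF P d])
  show "d \<notin> Out" using pole_not_on_cycle[OF _ P] o by blast
  show "d \<notin> In"
  proof
    assume dI: "d \<in> In"
    have "orb sigma (out_dart d) = orb sigma d"
      using orb_eq[OF perm_sigma Out_mem_D[OF out_dart_mem[OF dI]] out_dart_vertex[OF dI]] by simp
    thus False using pole_not_on_cycle[OF out_dart_mem[OF dI] P] o by simp
  qed
qed

end

locale poleless_side = labeled_cycle +
  fixes x0
  assumes x0: "x0 \<in> Out" and no_pole: "\<And>d. (d, 0) \<in> cut_comp (x0, 0) \<Longrightarrow> d \<notin> s0 \<and> d \<notin> s1"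
begin

definition side where "side = cut_comp (x0, 0)"

lemma x0_mem: "(x0, 0) \<in> cut_darts" using x0 Out_mem_D cut_darts_0 by simp

lemma side_subset: "side \<subseteq> cut_darts" unfolding side_def
  by (rule cut_comp_subset[OF x0_mem])

lemma side_cut_sigma: "z \<in> side \<Longrightarrow> cut_sigma z \<in> side"
  using cut_comp_step side_subset unfolding side_def by blast
lemma side_cut_alpha: "z \<in> side \<Longrightarrow> cut_alpha z \<in> side"
  using cut_comp_step side_subset unfolding side_def by blast
lemma side_cut_face: "z \<in> side \<Longrightarrow> cut_face z \<in> side"
  using side_cut_sigma side_cut_alpha unfolding cut_face_def by simp

lemma side_layer0: assumes z: "z \<in> side" shows "snd z = 0"
proof (rule ccontr)
  assume "snd z \<noteq> 0"
  hence "snd z = 1" "fst z \<in> Out \<or> fst z \<in> In" using z side_subset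
    unfolding cut_darts_def by auto
  hence "z \<in> cut_comp (x0, 1)" using layer1_connected[OF x0, of "fst z"] by (cases z) auto
  hence "cut_comp z = cut_comp (x0, 1)" by (rule map_component_eq)
  moreover have "cut_comp z = cut_comp (x0, 0)" using z unfolding side_def
    by (rule map_component_eq)
  ultimately have "(x0, 1) \<in> cut_comp (x0, 0)"
    using map_component_self[of "(x0,1::nat)" cut_sigma cut_alpha cut_darts] by simp
  thus False using cut_sides_distinct[OF x0] by simp
qed

lemma side_mem: assumes z: "z \<in> side" shows "\<exists>d. z = (d, 0) \<and> d \<in> D"
proof -
  obtain d l where zz: "z = (d, l)" by (cases z)
  have "l = 0" using side_layer0[OF z] zz by simp
  moreover have "z \<in> cut_darts" using z side_subset by blast
  ultimately show ?thesis using zz cut_darts_0 by blast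
qed

lemma Out_side: "x \<in> Out \<Longrightarrow> (x, 0) \<in> side"
  unfolding side_def by (rule layer0_Out_connected[OF x0])

lemma In_side: "y \<in> In \<Longrightarrow> (y, 0) \<in> side"
proof -
  assume "y \<in> In"
  then obtain x where x: "x \<in> Out" "y = alpha x" unfolding In_def by blast
  have "cut_alpha (x, 0) \<in> side" using side_cut_alpha Out_side[OF x(1)] by blast
  thus ?thesis using x by (simp add: cut_alpha_def)
qed

lemma perm_cut_sigma_side: "perm_on cut_sigma side"
  by (rule perm_on_restrict(1)[OF perm_cut_sigma side_subset side_cut_sigma])
lemma perm_cut_alpha_side: "perm_on cut_alpha side"
  by (rule perm_on_restrict(1)[OF perm_cut_alpha side_subset side_cut_alpha])
lemma perm_cut_face_side: "perm_on cut_face side"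
  by (rule perm_on_restrict(1)[OF perm_cut_face side_subset side_cut_face])

lemma side_sigma_not_Out: assumes "(d, 0) \<in> side" "d \<notin> In" shows "sigma d \<notin> Out"
proof
  assume "sigma d \<in> Out"
  hence "cut_sigma (d, 0) = (sigma d, 1)" using cut_sigma_other[of 0 d] assms(2) by simp
  hence "snd (cut_sigma (d, 0)) = 1" by simp
  thus False using side_layer0[OF side_cut_sigma[OF assms(1)]] by simp
qed

(* The corners of the side along the cycle, at the darts (x, 0) with x \<in> Out, form a single
   new face; they get the constant label 0. *)
definition side_lab where "side_lab z = (if snd z = (0::nat) \<and> fst z \<in> Out then 0 else lab (fst z))"
definition vchange where "vchange z = (if side_lab z = side_lab (cut_sigma z) then 0 else 1::nat)"
definition fchange where "fchange z = (if side_lab z = side_lab (cut_face z) then 0 else 1::nat)"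
definition edge_changes where "edge_changes z = vchange z + fchange z + vchange (cut_alpha z) +
    fchange (cut_alpha z)"
definition differ :: "nat \<Rightarrow> nat \<Rightarrow> nat" where "differ u v = (if u = v then 0 else 1)"
definition cycle_edge_changes where "cycle_edge_changes x = differ 0 (lab (sigma x)) +
    differ (lab (alpha x)) 0 + differ (lab (alpha x)) (lab (sigma x))"
definition cycle_vertex_changes where "cycle_vertex_changes x = differ 0 (lab (sigma x)) +
    differ (lab (sigma x)) (lab (in_dart x)) + differ (lab (in_dart x)) 0"

lemma edge_changes_Out: assumes x: "x \<in> Out" shows "edge_changes (x, 0) = cycle_edge_changes x"
proof -
  have sx: "sigma x \<notin> Out" by (rule sigma_not_Out[OF x])
  have ax: "alpha x \<in> In" using x unfolding In_def by blast
  have axC: "alpha x \<notin> Out" using In_not_Out[OF ax] .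
  have xI: "x \<notin> In" using Out_In_disjoint x by blast
  have sp1: "cut_sigma (x, 0) = (sigma x, 0)" using cut_sigma_other[of 0 x] xI sx by simp
  have sp2: "cut_sigma (alpha x, 0) = (next_out x, 0)" using cut_sigma_In[of 0 "alpha x"] ax
    unfolding out_dart_def using alpha_alpha Out_mem_D x by simp
  have g1: "side_lab (x, 0) = 0" "side_lab (sigma x, 0) = lab (sigma x)"
    "side_lab (alpha x, 0) = lab (alpha x)" "side_lab (next_out x, 0) = 0"
    unfolding side_lab_def using x sx axC next_out_mem by auto
  have fp1: "cut_face (x, 0) = (next_out x, 0)" by (rule cut_face_Out[OF x])
  have fp2: "cut_face (alpha x, 0) = (sigma x, 0)" unfolding cut_face_def cut_alpha_def
    using alpha_alpha[OF Out_mem_D[OF x]] sp1 by simp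
  have "vchange (x, 0) = differ 0 (lab (sigma x))" unfolding vchange_def differ_def sp1 g1 by simp
  moreover have "fchange (x, 0) = 0" unfolding fchange_def fp1 g1 by simp
  moreover have "vchange (alpha x, 0) = differ (lab (alpha x)) 0"
    unfolding vchange_def differ_def sp2 g1 by simp
  moreover have "fchange (alpha x, 0) = differ (lab (alpha x)) (lab (sigma x))"
    unfolding fchange_def differ_def fp2 g1 by simp
  moreover have "cut_alpha (x, 0) = (alpha x, 0)" by (simp add: cut_alpha_def)
  ultimately show ?thesis unfolding edge_changes_def cycle_edge_changes_def by simp
qed

lemma edge_changes_In: assumes y: "y \<in> In" shows "edge_changes (y, 0) =
    cycle_edge_changes (alpha y)"
proof -
  obtain x where x: "x \<in> Out" "y = alpha x" using y unfolding In_def by blast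
  have "edge_changes (y, 0) = edge_changes (x, 0)" unfolding edge_changes_def cut_alpha_def
    using x alpha_alpha Out_mem_D by (simp add: add.commute add.left_commute)
  thus ?thesis using edge_changes_Out[OF x(1)] x alpha_alpha Out_mem_D by simp
qed

lemma edge_changes_other:
  assumes z: "(d, 0) \<in> side" and dC: "d \<notin> Out" and dI: "d \<notin> In"
  shows "edge_changes (d, 0) = 2"
proof -
  have dD: "d \<in> D" using z side_subset cut_darts_0 by blast
  have adC: "alpha d \<notin> Out" using alpha_In_iff[OF alpha_mem[OF dD]] alpha_alpha[OF dD] dI
    by simp
  have adI: "alpha d \<notin> In" using alpha_In_iff[OF dD] dC by simp
  have z2: "(alpha d, 0) \<in> side" using side_cut_alpha[OF z] by (simp add: cut_alpha_def)
  have sd: "sigma d \<notin> Out" by (rule side_sigma_not_Out[OF z dI])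
  have sad: "sigma (alpha d) \<notin> Out" by (rule side_sigma_not_Out[OF z2 adI])
  have sp1: "cut_sigma (d, 0) = (sigma d, 0)" using cut_sigma_other[of 0 d] dI sd by simp
  have sp2: "cut_sigma (alpha d, 0) = (sigma (alpha d), 0)"
    using cut_sigma_other[of 0 "alpha d"] adI sad by simp
  have gs: "side_lab (d, 0) = lab d" "side_lab (sigma d, 0) = lab (sigma d)"
    "side_lab (alpha d, 0) = lab (alpha d)" "side_lab (sigma (alpha d), 0) = lab (sigma (alpha d))"
    unfolding side_lab_def using dC sd adC sad by auto
  have l: "lab d \<le> 1" "lab (sigma d) \<le> 1" "lab (alpha d) \<le> 1" "lab (sigma (alpha d)) \<le> 1"
    using lab_01 dD sigma_mem alpha_mem by (metis le_less less_one)+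
  have G: "(lab d = lab (sigma d)) \<noteq> (lab (alpha d) = lab (sigma (alpha d)))"
    by (rule edge_rule[OF dD])
  have fp1: "cut_face (d, 0) = (sigma (alpha d), 0)" unfolding cut_face_def cut_alpha_def using sp2
    by simp
  have fp2: "cut_face (alpha d, 0) = (sigma d, 0)" unfolding cut_face_def cut_alpha_def
    using alpha_alpha[OF dD] sp1 by simp
  have v1: "vchange (d, 0) = differ (lab d) (lab (sigma d))" unfolding vchange_def differ_def sp1 gs
    by simp
  have f1: "fchange (d, 0) = differ (lab d) (lab (sigma (alpha d)))"
    unfolding fchange_def differ_def fp1 gs by simp
  have v2: "vchange (alpha d, 0) = differ (lab (alpha d)) (lab (sigma (alpha d)))"
    unfolding vchange_def differ_def sp2 gs by simp
  have f2: "fchange (alpha d, 0) = differ (lab (alpha d)) (lab (sigma d))"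
    unfolding fchange_def differ_def fp2 gs by simp
  have "edge_changes (d, 0) = differ (lab d) (lab (sigma d)) +
      differ (lab d) (lab (sigma (alpha d))) + differ (lab (alpha d)) (lab (sigma (alpha d)))
      + differ (lab (alpha d)) (lab (sigma d))"
    unfolding edge_changes_def using v1 f1 v2 f2 by (simp add: cut_alpha_def)
  also have "\<dots> = 2" using l G unfolding differ_def by auto
  finally show ?thesis .
qed

lemma finite_side: "finite side" using side_subset finite_cut_darts finite_subset by blast

lemma sum_edge_changes: "2 * (\<Sum>z\<in>side. vchange z + fchange z) = (\<Sum>z\<in>side. edge_changes z)"
proof -
  have bij: "bij_betw cut_alpha side side" using perm_cut_alpha_side unfolding perm_on_def by blast
  have r1: "(\<Sum>z\<in>side. vchange (cut_alpha z)) = (\<Sum>z\<in>side. vchange z)"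
    by (rule sum.reindex_bij_betw[OF bij])
  have r2: "(\<Sum>z\<in>side. fchange (cut_alpha z)) = (\<Sum>z\<in>side. fchange z)"
    by (rule sum.reindex_bij_betw[OF bij])
  have "(\<Sum>z\<in>side. edge_changes z) = (\<Sum>z\<in>side. vchange z) + (\<Sum>z\<in>side. fchange z) +
      (\<Sum>z\<in>side. vchange (cut_alpha z)) + (\<Sum>z\<in>side. fchange (cut_alpha z))"
    unfolding edge_changes_def by (simp add: sum.distrib)
  thus ?thesis using r1 r2 by (simp add: sum.distrib)
qed

lemma card_In: "card In = card Out"
proof -
  have "inj_on alpha Out" by (rule inj_onI) (metis alpha_alpha Out_mem_D)
  thus ?thesis unfolding In_def by (rule card_image)
qed

lemma sum_edge_changes_eq: "(\<Sum>z\<in>side. edge_changes z) + 4 * card Out = 2 * card side +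
    2 * (\<Sum>x\<in>Out. cycle_edge_changes x)"
proof -
  define C0 where "C0 = (\<lambda>x. (x, 0::nat)) ` Out"
  define I0 where "I0 = (\<lambda>x. (x, 0::nat)) ` In"
  have C0K: "C0 \<subseteq> side" unfolding C0_def using Out_side by blast
  have I0K: "I0 \<subseteq> side" unfolding I0_def using In_side by blast
  have CI: "C0 \<inter> I0 = {}" unfolding C0_def I0_def using Out_In_disjoint by blast
  have finI: "finite In" unfolding In_def using finite_Out by blast
  have cC0: "card C0 = card Out" unfolding C0_def by (rule card_image) (rule inj_onI, simp)
  have cI0: "card I0 = card Out" unfolding I0_def using card_In
    by (subst card_image) (rule inj_onI, simp_all)
  have s1: "(\<Sum>z\<in>side. edge_changes z) = (\<Sum>z\<in>side - (C0 \<union> I0). edge_changes z) + (\<Sum>z\<in>C0 \<union>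
      I0. edge_changes z)"
    by (rule sum.subset_diff) (use C0K I0K finite_side in auto)
  have s2: "(\<Sum>z\<in>C0 \<union> I0. edge_changes z) = (\<Sum>z\<in>C0. edge_changes z) + (\<Sum>z\<in>I0. edge_changes z)"
    by (rule sum.union_disjoint) (use CI finite_Out finI C0_def I0_def in auto)
  have s3: "(\<Sum>z\<in>C0. edge_changes z) = (\<Sum>x\<in>Out. cycle_edge_changes x)"
  proof -
    have "(\<Sum>z\<in>C0. edge_changes z) = (\<Sum>x\<in>Out. edge_changes (x, 0))"
      unfolding C0_def
      using sum.reindex[of "\<lambda>x. (x, 0::nat)" Out edge_changes] by (simp add: inj_on_def)
    also have "\<dots> = (\<Sum>x\<in>Out. cycle_edge_changes x)"
      by (rule sum.cong[OF refl]) (rule edge_changes_Out)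
    finally show ?thesis .
  qed
  have s4: "(\<Sum>z\<in>I0. edge_changes z) = (\<Sum>x\<in>Out. cycle_edge_changes x)"
  proof -
    have "(\<Sum>z\<in>I0. edge_changes z) = (\<Sum>y\<in>In. edge_changes (y, 0))" unfolding I0_def
      using sum.reindex[of "\<lambda>x. (x, 0::nat)" In edge_changes] by (simp add: inj_on_def)
    also have "\<dots> = (\<Sum>y\<in>In. cycle_edge_changes (alpha y))"
      by (rule sum.cong[OF refl]) (rule edge_changes_In)
    also have "\<dots> = (\<Sum>x\<in>Out. cycle_edge_changes (alpha (alpha x)))"
    proof -
      have "inj_on alpha Out" by (rule inj_onI) (metis alpha_alpha Out_mem_D)
      thus ?thesis unfolding In_def
        using sum.reindex[of alpha Out "\<lambda>y. cycle_edge_changes (alpha y)"] by simp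
    qed
    also have "\<dots> = (\<Sum>x\<in>Out. cycle_edge_changes x)"
      by (rule sum.cong[OF refl]) (simp add: alpha_alpha Out_mem_D)
    finally show ?thesis .
  qed
  have s5: "(\<Sum>z\<in>side - (C0 \<union> I0). edge_changes z) = (\<Sum>z\<in>side - (C0 \<union> I0). 2)"
  proof (rule sum.cong[OF refl])
    fix z assume z: "z \<in> side - (C0 \<union> I0)"
    then obtain d where d: "z = (d, 0)" "d \<in> D" using side_mem by blast
    have "d \<notin> Out" "d \<notin> In" using z d unfolding C0_def I0_def by auto
    thus "edge_changes z = 2" using edge_changes_other z d by simp
  qed
  have c5: "card (side - (C0 \<union> I0)) + 2 * card Out = card side"
  proof -
    have "card (C0 \<union> I0) = 2 * card Out"
      using card_Un_disjoint[OF _ _ CI] cC0 cI0 finite_Out finI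
      unfolding C0_def I0_def by simp
    moreover have "card (side - (C0 \<union> I0)) = card side - card (C0 \<union> I0)"
      by (rule card_Diff_subset) (use finite_side C0K I0K finite_subset in auto)
    moreover have "card (C0 \<union> I0) \<le> card side"
      by (rule card_mono[OF finite_side]) (use C0K I0K in auto)
    ultimately show ?thesis by simp
  qed
  show ?thesis using s1 s2 s3 s4 s5 c5 by simp
qed

lemma cycle_arc_changes_le:
  "(\<Sum>x\<in>Out. differ (lab (alpha x)) (lab (sigma x))) \<le> (\<Sum>x\<in>Out. differ (lab (sigma x)) (lab (in_dart x)))"
proof -
  \<comment> \<open>by \<open>tail_dart\<close>, the label can only change across an arc in the direction given by \<open>c\<close>,
    so the changes along the arcs are signed differences that telescope around the cycle\<close>
  define sg :: int where "sg = (if c = 0 then -1 else 1)"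
  have edge: "int (lab (alpha x)) - int (lab (sigma x)) =
      sg * int (differ (lab (alpha x)) (lab (sigma x)))" if x: "x \<in> Out" for x
  proof -
    have l: "lab (alpha x) \<le> 1" "lab (sigma x) \<le> 1" "lab x \<le> 1"
      using lab_le_1 x Out_mem_D alpha_mem sigma_mem by auto
    have "lab (alpha x) \<noteq> lab (sigma x) \<Longrightarrow> lab (alpha x) = c"
      using Out_tail_dart[OF x] l c_le_1 unfolding tail_dart_def by auto
    thus ?thesis using l c_le_1 unfolding sg_def differ_def by (cases "c = 0") auto
  qed
  have vert: "sg * (int (lab (in_dart x)) - int (lab (sigma x))) \<le>
      int (differ (lab (sigma x)) (lab (in_dart x)))" if x: "x \<in> Out" for x
  proof -
    have "lab (in_dart x) \<le> 1" "lab (sigma x) \<le> 1"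
      using lab_le_1 in_dart_mem_D x Out_mem_D sigma_mem by auto
    thus ?thesis unfolding sg_def differ_def by auto
  qed
  have "(\<Sum>x\<in>Out. int (lab (alpha x)) - int (lab (sigma x)))
      = sg * (\<Sum>x\<in>Out. int (differ (lab (alpha x)) (lab (sigma x))))"
    unfolding sum_distrib_left by (rule sum.cong[OF refl]) (rule edge)
  hence "(\<Sum>x\<in>Out. int (differ (lab (alpha x)) (lab (sigma x))))
      = sg * (\<Sum>x\<in>Out. int (lab (alpha x)) - int (lab (sigma x)))"
    unfolding sg_def by (cases "c = 0") simp_all
  also have "\<dots> = (\<Sum>x\<in>Out. sg * (int (lab (in_dart x)) - int (lab (sigma x))))"
    using sum_Out_alpha_in_dart[of "\<lambda>d. int (lab d)"]
    by (simp add: sum_subtractf sum_distrib_left[symmetric])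
  also have "\<dots> \<le> (\<Sum>x\<in>Out. int (differ (lab (sigma x)) (lab (in_dart x))))"
    by (rule sum_mono) (rule vert)
  finally have "int (\<Sum>x\<in>Out. differ (lab (alpha x)) (lab (sigma x)))
      \<le> int (\<Sum>x\<in>Out. differ (lab (sigma x)) (lab (in_dart x)))"
    by simp
  thus ?thesis by linarith
qed

lemma cycle_changes_le: "(\<Sum>x\<in>Out. cycle_edge_changes x) \<le> (\<Sum>x\<in>Out. cycle_vertex_changes x)"
proof -
  have r1: "(\<Sum>x\<in>Out. differ (lab (alpha x)) 0) = (\<Sum>x\<in>Out. differ (lab (in_dart x)) 0)"
    by (rule sum_Out_alpha_in_dart)
  note m = cycle_arc_changes_le
  have "(\<Sum>x\<in>Out. cycle_edge_changes x) = (\<Sum>x\<in>Out. differ 0 (lab (sigma x))) +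
      (\<Sum>x\<in>Out. differ (lab (alpha x)) 0) + (\<Sum>x\<in>Out. differ (lab (alpha x)) (lab (sigma x)))"
    unfolding cycle_edge_changes_def by (simp add: sum.distrib)
  moreover have "(\<Sum>x\<in>Out. cycle_vertex_changes x) = (\<Sum>x\<in>Out. differ 0 (lab (sigma x))) +
      (\<Sum>x\<in>Out. differ (lab (sigma x)) (lab (in_dart x))) + (\<Sum>x\<in>Out. differ (lab (in_dart x)) 0)"
    unfolding cycle_vertex_changes_def by (simp add: sum.distrib)
  ultimately show ?thesis using r1 m by simp
qed

lemma sector_vchanges_ge:
  assumes x: "x \<in> Out"
  shows "(\<Sum>z\<in>orb cut_sigma (x, 0). vchange z) \<ge> cycle_vertex_changes x"
proof -
  define m where "m = sector_len x"
  have m1: "1 \<le> m" using sector_len_pos[OF x] unfolding m_def by simp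
  have inj: "inj_on (\<lambda>n. ((sigma ^^ n) x, 0::nat)) {..m}"
  proof (rule inj_onI)
    fix i j assume ij: "i \<in> {..m}" "j \<in> {..m}" "((sigma ^^ i) x, 0::nat) = ((sigma ^^ j) x, 0)"
    hence e: "(sigma ^^ i) x = (sigma ^^ j) x" by simp
    have bij: "bij_betw sigma D D" using perm_sigma unfolding perm_on_def by blast
    { fix i j assume ij': "i < j" "j \<le> m" "(sigma ^^ i) x = (sigma ^^ j) x"
      have "(sigma ^^ i) ((sigma ^^ (j - i)) x) = (sigma ^^ (i + (j - i))) x"
        by (simp add: funpow_add)
      hence "(sigma ^^ i) ((sigma ^^ (j - i)) x) = (sigma ^^ i) x" using ij' by simp
      moreover have "inj_on (sigma ^^ i) D" using bij_betw_funpow[OF bij] bij_betw_def by blast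
      moreover have "(sigma ^^ (j - i)) x \<in> D"
        using perm_on_funpow_mem[OF perm_sigma] Out_mem_D[OF x] by blast
      ultimately have "(sigma ^^ (j - i)) x = x" using Out_mem_D[OF x] unfolding inj_on_def by blast
      hence False using sector_no_return[OF x, of "j - i"] ij' unfolding m_def by simp }
    note * = this
    show "i = j"
    proof (rule ccontr)
      assume "i \<noteq> j"
      thus False using * ij e by (metis atMost_iff linorder_neqE_nat)
    qed
  qed
  have Leq: "orb cut_sigma (x, 0) = (\<lambda>n. ((sigma ^^ n) x, 0::nat)) ` {..m}"
    unfolding orb_cut_sigma_sector[OF x] sector_def m_def by auto
  define f where "f n = side_lab ((sigma ^^ n) x, 0)" for n
  have f0: "f 0 = 0" unfolding f_def side_lab_def using x by simp
  have fn: "f n = lab ((sigma ^^ n) x)" if "1 \<le> n" "n \<le> m" for n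
  proof -
    have "(sigma ^^ n) x \<notin> Out"
    proof
      assume "(sigma ^^ n) x \<in> Out"
      hence "(sigma ^^ n) x = x" using Out_unique[OF x] orb_iter[of n sigma x] by blast
      thus False using sector_no_return[OF x, of n] that unfolding m_def by simp
    qed
    thus ?thesis unfolding f_def side_lab_def by simp
  qed
  have vcn: "vchange ((sigma ^^ n) x, 0) = (if f n = f (Suc n) then 0 else 1)" if "n < m" for n
  proof -
    have "cut_sigma ((sigma ^^ n) x, 0) = ((sigma ^^ Suc n) x, 0)"
      using cut_sigma_sector_step[OF x, of n] that unfolding m_def by blast
    thus ?thesis unfolding vchange_def f_def by (simp only:)
  qed
  have vcm: "vchange ((sigma ^^ m) x, 0) = (if f m = f 0 then 0 else 1)"
  proof -
    have "cut_sigma ((sigma ^^ m) x, 0) = ((sigma ^^ 0) x, 0)" using cut_sigma_sector_end[OF x]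
      unfolding m_def by simp
    thus ?thesis unfolding vchange_def f_def by (simp only:)
  qed
  have "(\<Sum>z\<in>orb cut_sigma (x, 0). vchange z) = (\<Sum>n\<in>{..m}. vchange ((sigma ^^ n) x, 0))"
    unfolding Leq using sum.reindex[OF inj, of vchange] by (simp add: comp_def)
  also have "\<dots> = (\<Sum>n<m. vchange ((sigma ^^ n) x, 0)) + vchange ((sigma ^^ m) x, 0)"
    by (simp add: lessThan_Suc_atMost[symmetric])
  also have "\<dots> = (\<Sum>n<m. (if f n = f (Suc n) then 0 else 1)) + (if f m = f 0 then 0 else 1)"
    using vcn vcm by simp
  finally have S: "(\<Sum>z\<in>orb cut_sigma (x, 0). vchange z) = (\<Sum>n<m. (if f n =
      f (Suc n) then 0 else 1)) + (if f m = f 0 then 0 else 1)" .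
  have P: "(\<Sum>n<m. (if f n = f (Suc n) then 0 else 1::nat)) \<ge> (if f 0 = f 1 then 0 else 1) +
      (if f 1 = f m then 0 else 1)"
    by (rule path_changes_ge[OF m1])
  have f1: "f 1 = lab (sigma x)" using fn[of 1] m1 by simp
  have fm: "f m = lab (in_dart x)" using fn[of m] m1 sector_len_in_dart[OF x] unfolding m_def
    by simp
  have "cycle_vertex_changes x = (if f 0 = f 1 then 0 else 1) + (if f 1 = f m then 0 else 1) +
      (if f m = f 0 then 0 else 1)"
    unfolding cycle_vertex_changes_def differ_def f0 f1 fm by simp
  thus ?thesis using S P by linarith
qed

lemma side_orb_cut_sigma_Out:
  assumes z: "(d, 0) \<in> side" and x: "x \<in> Out" "x \<in> orb sigma d"
  shows "orb cut_sigma (d, 0) = orb cut_sigma (x, 0)"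
proof -
  have zD: "(d, 0) \<in> cut_darts" using z side_subset by blast
  have dD: "d \<in> D" using zD cut_darts_0 by simp
  have OK: "orb cut_sigma (d, 0) \<subseteq> side" by (rule orb_least[OF side_cut_sigma z])
  have oxd: "orb sigma x = orb sigma d" by (rule orb_eq[OF perm_sigma dD x(2)])
  have xO: "(x, 0) \<in> orb cut_sigma (d, 0)"
  proof (cases "\<exists>y. (y, 0) \<in> orb cut_sigma (d, 0) \<and> y \<in> In")
    case True
    then obtain y where y: "(y, 0) \<in> orb cut_sigma (d, 0)" "y \<in> In" by blast
    have "y \<in> orb sigma d" using orb_cut_sigma_vertex(1)[OF zD y(1)] by simp
    hence "y = in_dart x" using In_unique[OF x(1) y(2)] oxd by simp
    hence "cut_sigma (y, 0) = (x, 0)" using cut_sigma_In[of 0 y] y(2) out_in_dart[OF x(1)] by simp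
    thus ?thesis using orb_closed[OF y(1)] by simp
  next
    case False
    define q where "q = (\<lambda>w::_ \<times> nat. (sigma (fst w), 0::nat))"
    have qs: "cut_sigma w = q w" if w: "w \<in> orb cut_sigma (d, 0)" for w
    proof -
      obtain e where e: "w = (e, 0)" using side_mem OK w by blast
      have eI: "e \<notin> In" using False w e by blast
      have eK: "(e, 0) \<in> side" using OK w e by blast
      have "sigma e \<notin> Out" by (rule side_sigma_not_Out[OF eK eI])
      thus ?thesis using cut_sigma_other[of 0 e] eI e unfolding q_def by simp
    qed
    have "orb q (d, 0) = orb cut_sigma (d, 0)"
    proof (rule orb_cong[where T="orb cut_sigma (d,0)"])
      show "\<And>z. z \<in> orb cut_sigma (d, 0) \<Longrightarrow> cut_sigma z \<in> orb cut_sigma (d, 0)"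
        by (rule orb_closed)
      show "\<And>z. z \<in> orb cut_sigma (d, 0) \<Longrightarrow> q z = cut_sigma z" using qs
        by simp
      show "(d, 0) \<in> orb cut_sigma (d, 0)" by (rule orb_self)
    qed
    moreover have "((sigma ^^ n) d, 0) \<in> orb q (d, 0)" for n
    proof -
      have "(q ^^ n) (d, 0) = ((sigma ^^ n) d, 0)" by (induct n) (simp_all add: q_def)
      thus ?thesis using orb_iter[of n q "(d,0)"] by simp
    qed
    moreover obtain n where "x = (sigma ^^ n) d" using x(2) unfolding orb_def by blast
    ultimately show ?thesis by metis
  qed
  show ?thesis by (rule orb_eq[OF perm_cut_sigma zD xO, symmetric])
qed

lemma side_vertex_changes:
  assumes z: "(d, 0) \<in> side" and nc: "orb sigma d \<inter> Out = {}"
  shows "(\<Sum>w\<in>orb cut_sigma (d, 0). vchange w) = 2"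
proof -
  have zD: "(d, 0) \<in> cut_darts" using z side_subset by blast
  have dD: "d \<in> D" using zD cut_darts_0 by simp
  have Osub: "orb sigma d \<subseteq> D" by (rule orb_subset_carrier[OF perm_sigma dD])
  have eprop: "e \<notin> In \<and> sigma e \<notin> Out \<and> e \<notin> Out" if e: "e \<in> orb sigma d" for e
  proof -
    have eD: "e \<in> D" using e Osub by blast
    have oe: "orb sigma e = orb sigma d" by (rule orb_eq[OF perm_sigma dD e])
    have "e \<notin> In"
    proof
      assume "e \<in> In"
      hence "out_dart e \<in> orb sigma e" by (rule out_dart_same_vertex)
      thus False using out_dart_mem[OF \<open>e \<in> In\<close>] nc oe by blast
    qed
    moreover have "sigma e \<notin> Out" using orb_closed[OF e] nc by blast
    moreover have "e \<notin> Out" using e nc by blast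
    ultimately show ?thesis by blast
  qed
  have cm: "cut_sigma (e, 0) = (sigma e, 0)" if "e \<in> orb sigma d" for e
    using cut_sigma_other[of 0 e] eprop[OF that] by simp
  have oc: "orb cut_sigma (d, 0) = (\<lambda>e. (e, 0::nat)) ` orb sigma d"
    by (rule orb_image_conj[where A="orb sigma d"]) (auto intro: orb_closed orb_self cm)
  have "(\<Sum>w\<in>orb cut_sigma (d, 0). vchange w) = (\<Sum>e\<in>orb sigma d. vchange (e, 0))"
    unfolding oc using sum.reindex[of "\<lambda>e. (e, 0::nat)" "orb sigma d" vchange]
      by (simp add: inj_on_def)
  also have "\<dots> = (\<Sum>e\<in>orb sigma d. (if lab e = lab (sigma e) then 0 else 1))"
  proof (rule sum.cong[OF refl])
    fix e assume e: "e \<in> orb sigma d"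
    show "vchange (e, 0) = (if lab e = lab (sigma e) then 0 else 1)"
      unfolding vchange_def side_lab_def using cm[OF e] eprop[OF e] by simp
  qed
  also have "\<dots> = 2"
  proof (rule vertex_changes[OF dD])
    show "orb sigma d \<noteq> s0" using no_pole[OF z[unfolded side_def]] orb_self[of d sigma]
      by blast
    show "orb sigma d \<noteq> s1" using no_pole[OF z[unfolded side_def]] orb_self[of d sigma]
      by blast
  qed
  finally show ?thesis .
qed

lemma side_vertex_bound: "(\<Sum>z\<in>side. vchange z) + 2 * card Out \<ge> 2 * orbit_count cut_sigma side +
    (\<Sum>x\<in>Out. cycle_vertex_changes x)"
proof -
  define OS where "OS = orb cut_sigma ` side"
  define OL where "OL = (\<lambda>x. orb cut_sigma (x, 0)) ` Out"
  have finOS: "finite OS" unfolding OS_def using finite_side by blast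
  have OLsub: "OL \<subseteq> OS" unfolding OL_def OS_def using Out_side by blast
  have injL: "inj_on (\<lambda>x. orb cut_sigma (x, 0)) Out"
  proof (rule inj_onI)
    fix x y assume x: "x \<in> Out" and y: "y \<in> Out"
      and e: "orb cut_sigma (x, 0) = orb cut_sigma (y, 0)"
    have xD0: "(x, 0) \<in> cut_darts" using x Out_mem_D cut_darts_0 by simp
    have "(y, 0) \<in> orb cut_sigma (x, 0)" using e orb_self[of "(y,0::nat)" cut_sigma] by simp
    hence "fst (y, 0::nat) \<in> orb sigma (fst (x, 0::nat))"
      by (rule orb_cut_sigma_vertex(1)[OF xD0])
    hence "y \<in> orb sigma x" by simp
    thus "x = y" using Out_unique[OF x y] by simp
  qed
  have cOL: "card OL = card Out" unfolding OL_def by (rule card_image[OF injL])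
  have s0: "(\<Sum>z\<in>side. vchange z) = (\<Sum>B\<in>OS. sum vchange B)" unfolding OS_def
    by (rule sum_over_orbits[OF perm_cut_sigma_side])
  have s1: "(\<Sum>B\<in>OS. sum vchange B) = (\<Sum>B\<in>OS - OL. sum vchange B) + (\<Sum>B\<in>OL. sum vchange B)"
    by (rule sum.subset_diff[OF OLsub finOS])
  have s2: "(\<Sum>B\<in>OL. sum vchange B) = (\<Sum>x\<in>Out. sum vchange (orb cut_sigma (x, 0)))"
    unfolding OL_def using sum.reindex[OF injL, of "sum vchange"] by (simp add: comp_def)
  have s3: "(\<Sum>x\<in>Out. sum vchange (orb cut_sigma (x, 0))) \<ge> (\<Sum>x\<in>Out. cycle_vertex_changes x)"
    by (rule sum_mono) (rule sector_vchanges_ge)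
  have s4: "(\<Sum>B\<in>OS - OL. sum vchange B) = (\<Sum>B\<in>OS - OL. 2)"
  proof (rule sum.cong[OF refl])
    fix B assume B: "B \<in> OS - OL"
    then obtain z where z: "z \<in> side" "B = orb cut_sigma z" unfolding OS_def by blast
    obtain d where d: "z = (d, 0)" "d \<in> D" using side_mem[OF z(1)] by blast
    have "orb sigma d \<inter> Out = {}"
    proof (rule ccontr)
      assume "orb sigma d \<inter> Out \<noteq> {}"
      then obtain x where "x \<in> Out" "x \<in> orb sigma d" by blast
      hence "B = orb cut_sigma (x, 0)" using side_orb_cut_sigma_Out z d by simp
      hence "B \<in> OL" unfolding OL_def using \<open>x \<in> Out\<close> by blast
      thus False using B by blast
    qed
    thus "sum vchange B = 2" using side_vertex_changes z d by simp
  qed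
  have c4: "card (OS - OL) = orbit_count cut_sigma side - card Out"
    using card_Diff_subset[OF _ OLsub] finOS cOL finite_subset[OF OLsub finOS]
      unfolding orbit_count_def OS_def by simp
  have c5: "card Out \<le> orbit_count cut_sigma side" using card_mono[OF finOS OLsub] cOL
    unfolding orbit_count_def OS_def by simp
  show ?thesis using s0 s1 s2 s3 s4 c4 c5 by simp
qed

lemma cut_face_iter_Out: "((cut_face ^^ n) (x0, 0)) = ((next_out ^^ n) x0, 0) \<and>
    (next_out ^^ n) x0 \<in> Out"
  by (induct n) (simp_all add: x0 cut_face_Out next_out_mem)

lemma side_face_changes:
  assumes z: "(d, 0) \<in> side" and nb: "orb cut_face (d, 0) \<noteq> orb cut_face (x0, 0)"
  shows "(\<Sum>w\<in>orb cut_face (d, 0). fchange w) = 2"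
proof -
  have zD: "(d, 0) \<in> cut_darts" using z side_subset by blast
  have dD: "d \<in> D" using zD cut_darts_0 by simp
  have x0D: "(x0, 0) \<in> cut_darts" by (rule x0_mem)
  have dC: "d \<notin> Out"
  proof
    assume "d \<in> Out"
    hence "d \<in> orb next_out x0" by (rule Out_single_orbit[OF x0])
    then obtain n where "d = (next_out ^^ n) x0" unfolding orb_def by blast
    hence "(d, 0) \<in> orb cut_face (x0, 0)"
      using cut_face_iter_Out[of n] orb_iter[of n cut_face "(x0,0)"] by simp
    hence "orb cut_face (d, 0) = orb cut_face (x0, 0)" by (rule orb_eq[OF perm_cut_face x0D])
    thus False using nb by simp
  qed
  have rd: "lift_dart d = (d, 0)" unfolding lift_dart_def using dC by simp
  have oc: "orb cut_face (lift_dart d) = lift_dart ` orb (sigma \<circ> alpha) d"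
  proof (rule orb_image_conj[where A=D])
    show "\<And>x. x \<in> D \<Longrightarrow> (sigma \<circ> alpha) x \<in> D"
      using sigma_mem alpha_mem by simp
    show "\<And>x. x \<in> D \<Longrightarrow> cut_face (lift_dart x) = lift_dart ((sigma \<circ> alpha) x)"
      by (rule cut_face_lift)
    show "d \<in> D" by (rule dD)
  qed
  have OK: "orb cut_face (d, 0) \<subseteq> side" by (rule orb_least[OF side_cut_face z])
  have enC: "e \<notin> Out" if e: "e \<in> orb (sigma \<circ> alpha) d" for e
  proof -
    have "lift_dart e \<in> lift_dart ` orb (sigma \<circ> alpha) d" using e by (rule imageI)
    hence "lift_dart e \<in> orb cut_face (d, 0)" using oc rd by simp
    hence "lift_dart e \<in> side" using OK by blast
    thus ?thesis using side_layer0 unfolding lift_dart_def by fastforce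
  qed
  have "(\<Sum>w\<in>orb cut_face (d, 0). fchange w) = (\<Sum>e\<in>orb (sigma \<circ> alpha) d. fchange (lift_dart e))"
    using oc rd sum.reindex[of lift_dart "orb (sigma \<circ> alpha) d" fchange]
      by (simp add: inj_on_def lift_dart_def)
  also have "\<dots> = (\<Sum>e\<in>orb (sigma \<circ> alpha) d. (if lab e = lab ((sigma \<circ> alpha) e) then 0 else 1))"
  proof (rule sum.cong[OF refl])
    fix e assume e: "e \<in> orb (sigma \<circ> alpha) d"
    have eD: "e \<in> D" using orb_subset_carrier[OF perm_face dD] e by blast
    have e2: "(sigma \<circ> alpha) e \<in> orb (sigma \<circ> alpha) d" by (rule orb_closed[OF e])
    have "cut_face (lift_dart e) = lift_dart ((sigma \<circ> alpha) e)"
      by (rule cut_face_lift[OF eD])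
    thus "fchange (lift_dart e) = (if lab e = lab ((sigma \<circ> alpha) e) then 0 else 1)"
      unfolding fchange_def side_lab_def lift_dart_def using enC[OF e] enC[OF e2] by simp
  qed
  also have "\<dots> = 2" by (rule face_changes[OF dD])
  finally show ?thesis .
qed

lemma side_face_bound: "(\<Sum>z\<in>side. fchange z) + 2 \<ge> 2 * orbit_count cut_face side"
proof -
  define OS where "OS = orb cut_face ` side"
  define B0 where "B0 = orb cut_face (x0, 0)"
  have finOS: "finite OS" unfolding OS_def using finite_side by blast
  have B0in: "B0 \<in> OS" unfolding OS_def B0_def using Out_side[OF x0] by blast
  have s0: "(\<Sum>z\<in>side. fchange z) = (\<Sum>B\<in>OS. sum fchange B)" unfolding OS_def
    by (rule sum_over_orbits[OF perm_cut_face_side])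
  have s1: "(\<Sum>B\<in>OS. sum fchange B) \<ge> (\<Sum>B\<in>OS - {B0}. sum fchange B)"
    by (rule sum_mono2[OF finOS]) auto
  have s2: "(\<Sum>B\<in>OS - {B0}. sum fchange B) = (\<Sum>B\<in>OS - {B0}. 2)"
  proof (rule sum.cong[OF refl])
    fix B assume B: "B \<in> OS - {B0}"
    then obtain z where z: "z \<in> side" "B = orb cut_face z" unfolding OS_def by blast
    obtain d where d: "z = (d, 0)" "d \<in> D" using side_mem[OF z(1)] by blast
    show "sum fchange B = 2" using side_face_changes[of d] z d B unfolding B0_def by simp
  qed
  have c: "card (OS - {B0}) = card OS - 1" using B0in finOS by simp
  have c1: "card OS \<ge> 1" using B0in finOS card_0_eq by fastforce
  show ?thesis using s0 s1 s2 c c1 unfolding orbit_count_def OS_def[symmetric] by simp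
qed

lemma side_count: "2 * (orbit_count cut_sigma side + orbit_count cut_face side) \<le> card side + 2"
proof -
  have "2 * sum vchange side + 2 * sum fchange side = sum edge_changes side"
    using sum_edge_changes by (simp add: sum.distrib)
  moreover have "sum edge_changes side + 4 * card Out = 2 * card side +
      2 * sum cycle_edge_changes Out"
    by (rule sum_edge_changes_eq)
  moreover have "2 * orbit_count cut_sigma side + sum cycle_vertex_changes Out \<le> sum vchange side +
      2 * card Out"
    by (rule side_vertex_bound)
  moreover have "2 * orbit_count cut_face side \<le> sum fchange side + 2" by (rule side_face_bound)
  moreover have "sum cycle_edge_changes Out \<le> sum cycle_vertex_changes Out"
    by (rule cycle_changes_le)
  ultimately show ?thesis unfolding distrib_left by linarith
qed

lemma side_euler_char:
  "orbit_count cut_sigma side + orbit_count cut_face side \<le> orbit_count cut_alpha side + 1"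
proof -
  have "card side \<le> 2 * orbit_count cut_alpha side"
    by (rule card_le_2_orbit_count[OF perm_cut_alpha_side]) (use cut_alpha_alpha side_subset in blast)
  thus ?thesis using side_count unfolding distrib_left by linarith
qed

lemma poleless_side_absurd: False
proof -
  define R where "R = cut_darts - side"
  have R: "R = cut_comp (x0, 1)" unfolding R_def side_def by (rule cut_comp_other_side[OF x0])
  have x01: "(x0, 1) \<in> cut_darts" using x0 cut_darts_1 by simp
  have "orbit_count cut_sigma R + orbit_count cut_face R \<le> orbit_count cut_alpha R + 2"
    unfolding R cut_face_def
    by (rule euler_inequality_component[OF perm_cut_sigma _ x01]) (use cut_alpha_involution in auto)
  moreover have split: "orbit_count p cut_darts = orbit_count p side + orbit_count p R"
    if "perm_on p cut_darts" "\<And>z. z \<in> side \<Longrightarrow> p z \<in> side" for p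
    unfolding R_def by (rule orbit_count_split[OF that(1) side_subset that(2)])
  note split[OF perm_cut_sigma side_cut_sigma] split[OF perm_cut_alpha side_cut_alpha]
    split[OF perm_cut_face side_cut_face]
  ultimately show False using side_euler_char cut_euler_char by linarith
qed

end

section \<open>No directed cycle\<close>

context labeled_cycle
begin

lemma side_meets_pole:
  assumes x0: "x0 \<in> Out"
  shows "\<exists>d. (d \<in> s0 \<or> d \<in> s1) \<and> (d, 0) \<in> cut_comp (x0, 0)"
proof (rule ccontr)
  assume "\<not> ?thesis"
  then interpret poleless_side D alpha sigma fo s0 s1 lab Out next_out c x0
    by unfold_locales (use x0 in auto)
  show False by (rule poleless_side_absurd)
qed

lemma pole_vertex_connected:
  assumes P: "P = s0 \<or> P = s1" and d: "d \<in> P" and e: "e \<in> P"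
  shows "(e, 0) \<in> cut_comp (d, 0)"
proof -
  have dD: "d \<in> D" and od: "orb sigma d = P" using pole_mem[OF P d] by auto
  have step: "cut_sigma (y, 0) = (sigma y, 0)" if y: "y \<in> P" for y
  proof -
    have "y \<notin> In" using pole_not_cycle_dart[OF P y] by blast
    moreover have "sigma y \<in> P" using od y orb_closed by metis
    hence "sigma y \<notin> Out" using pole_not_cycle_dart[OF P] by blast
    ultimately show ?thesis using cut_sigma_other[of 0 y] by simp
  qed
  have "((sigma ^^ n) d, 0) \<in> cut_comp (d, 0) \<and> (sigma ^^ n) d \<in> P" for n
  proof (induct n)
    case 0 thus ?case using map_component_self d by simp
  next
    case (Suc n)
    hence h: "((sigma ^^ n) d, 0) \<in> cut_comp (d, 0)" "(sigma ^^ n) d \<in> P" by auto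
    have "((sigma ^^ n) d, 0) \<in> cut_darts" using h(2) pole_mem[OF P] cut_darts_0 by blast
    hence "cut_sigma ((sigma ^^ n) d, 0) \<in> cut_comp (d, 0)" using cut_comp_step h(1) by blast
    moreover have "sigma ((sigma ^^ n) d) \<in> P" using od h(2) orb_closed by metis
    ultimately show ?case using step[OF h(2)] by simp
  qed
  moreover obtain n where "e = (sigma ^^ n) d" using e od unfolding orb_def by blast
  ultimately show ?thesis by blast
qed

lemma poles_connected:
  assumes d: "d \<in> s0 \<or> d \<in> s1" and e: "e \<in> s0 \<or> e \<in> s1"
  shows "(e, 0) \<in> cut_comp (d, 0)"
proof -
  obtain d0 where d0: "d0 \<in> s0" "d0 \<in> fo" using s0_outer by blast
  obtain d1 where d1: "d1 \<in> s1" "d1 \<in> fo" using s1_outer by blast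
  obtain f0 where f0: "f0 \<in> D" "fo = orb (sigma \<circ> alpha) f0" using outer_face by blast
  have d0D: "d0 \<in> D" using pole_mem(1)[of s0 d0] d0 by blast
  have "orb (sigma \<circ> alpha) d0 = fo" using orb_eq[OF perm_face f0(1)] d0(2) f0(2) by simp
  then obtain n where n: "d1 = ((sigma \<circ> alpha) ^^ n) d0" using d1(2) unfolding orb_def
    by blast
  have "(cut_face ^^ k) (lift_dart d0) = lift_dart (((sigma \<circ> alpha) ^^ k) d0) \<and>
      ((sigma \<circ> alpha) ^^ k) d0 \<in> D" for k
  proof (induct k)
    case 0 thus ?case using d0D by simp
  next
    case (Suc k) thus ?case using cut_face_lift sigma_mem alpha_mem by simp
  qed
  moreover have "lift_dart d0 = (d0, 0)" "lift_dart d1 = (d1, 0)" unfolding lift_dart_def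
    using pole_not_cycle_dart(1)[of s0 d0] pole_not_cycle_dart(1)[of s1 d1] d0 d1 by auto
  ultimately have it: "(cut_face ^^ n) (d0, 0) = (d1, 0)" using n by metis
  have "(cut_face ^^ k) (d0, 0) \<in> cut_comp (d0, 0) \<and> (cut_face ^^ k) (d0, 0) \<in> cut_darts" for k
  proof (induct k)
    case 0 thus ?case using map_component_self d0D cut_darts_0 by simp
  next
    case (Suc k) thus ?case using cut_comp_face perm_on_mem[OF perm_cut_face] by simp
  qed
  hence d01: "(d1, 0) \<in> cut_comp (d0, 0)" using it by metis
  have D0: "d0 \<in> D" "d1 \<in> D" using d0D pole_mem(1)[of s1 d1] d1 by auto
  have gen: "(e, 0) \<in> cut_comp (d0, 0)" if "e \<in> s0 \<or> e \<in> s1" for e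
    using that
  proof
    assume "e \<in> s0" thus ?thesis using pole_vertex_connected[of s0 d0 e] d0 by simp
  next
    assume e1: "e \<in> s1"
    have "(e, 0) \<in> cut_comp (d1, 0)" using pole_vertex_connected[of s1 d1 e] d1 e1 by simp
    moreover have "cut_comp (d1, 0) = cut_comp (d0, 0)" by (rule map_component_eq[OF d01])
    ultimately show ?thesis by simp
  qed
  have "cut_comp (d, 0) = cut_comp (d0, 0)" by (rule map_component_eq[OF gen[OF d]])
  thus ?thesis using gen[OF e] by simp
qed

lemma reversed_labeled_cycle: "labeled_cycle D alpha sigma fo s0 s1 lab In (in_dart \<circ> alpha) (1 -
    c)"
proof -
  interpret rev: plane_cycle D alpha sigma In "in_dart \<circ> alpha" by (rule reversed_plane_cycle)
  show ?thesis
  proof unfold_locales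
    show "1 - c \<le> 1" by simp
    fix y assume y: "y \<in> In"
    obtain z where z: "z \<in> Out" "y = alpha z" using y unfolding In_def by blast
    have "1 - (1 - c) = c" using c_le_1 by simp
    thus "tail_dart lab sigma alpha (1 - c) y"
      using Out_tail_dart[OF z(1)] z alpha_alpha[OF Out_mem_D[OF z(1)]] unfolding tail_dart_def
        by auto
  qed
qed

end

context labeled_cycle
begin

interpretation rev: labeled_cycle D alpha sigma fo s0 s1 lab In "in_dart \<circ> alpha" "1 - c"
  by (rule reversed_labeled_cycle)

lemma other_side_meets_pole:
  assumes x0: "x0 \<in> Out"
  shows "\<exists>d. (d \<in> s0 \<or> d \<in> s1) \<and> (d, 0) \<in> cut_comp (x0, 1)"
proof -
  have ax0: "alpha x0 \<in> In" using x0 unfolding In_def by blast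
  obtain d where d: "d \<in> s0 \<or> d \<in> s1" "(d, 0) \<in> rev.cut_comp (alpha x0, 0)"
    using rev.side_meets_pole[OF ax0] by blast
  have "((alpha x0, 0), (d, 0)) \<in> (map_graph rev.cut_sigma rev.cut_alpha rev.cut_darts)\<^sup>*"
    using d(2) unfolding map_component_def by simp
  hence "(swap_sides (alpha x0, 0), swap_sides (d, 0)) \<in> (map_graph cut_sigma cut_alpha cut_darts)\<^sup>*"
    by (rule swap_sides_rev_path)
  moreover have "swap_sides (alpha x0, 0) = (alpha x0, 1)" unfolding swap_sides_def using ax0
    by simp
  moreover have "swap_sides (d, 0) = (d, 0)"
    using d(1) pole_not_cycle_dart[of s0 d] pole_not_cycle_dart[of s1 d] unfolding swap_sides_def
      by auto
  ultimately have "(d, 0) \<in> cut_comp (alpha x0, 1)" unfolding map_component_def by simp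
  moreover have "(alpha x0, 1) \<in> cut_comp (x0, 1)"
  proof -
    have "(x0, 1) \<in> cut_darts" using x0 unfolding cut_darts_def by simp
    hence "cut_alpha (x0, 1) \<in> cut_comp (x0, 1)" using cut_comp_step[OF map_component_self]
      by blast
    thus ?thesis by (simp add: cut_alpha_def)
  qed
  ultimately have "(d, 0) \<in> cut_comp (x0, 1)" using map_component_eq by metis
  thus ?thesis using d(1) by blast
qed

lemma directed_cycle_absurd: False
proof -
  obtain x0 where x0: "x0 \<in> Out" using Out_nonempty by blast
  obtain d1 where d1: "d1 \<in> s0 \<or> d1 \<in> s1" "(d1, 0) \<in> cut_comp (x0, 0)"
    using side_meets_pole[OF x0] by blast
  obtain d2 where d2: "d2 \<in> s0 \<or> d2 \<in> s1" "(d2, 0) \<in> cut_comp (x0, 1)"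
    using other_side_meets_pole[OF x0] by blast
  have "(d2, 0) \<in> cut_comp (d1, 0)" by (rule poles_connected[OF d1(1) d2(1)])
  hence "cut_comp (x0, 1) = cut_comp (x0, 0)" using d1(2) d2(2) map_component_eq by metis
  thus False using cut_sides_distinct[OF x0] map_component_self by metis
qed

end

context plane_dart_map
begin

lemma plane_cycle_of_vertex_cycle:
  assumes VC: "VC \<noteq> {}" and f: "\<And>v. v \<in> VC \<Longrightarrow> f v \<in> VC"
    and single: "\<And>v w. v \<in> VC \<Longrightarrow> w \<in> VC \<Longrightarrow> w \<in> orb f v"
    and dv: "\<And>v. v \<in> VC \<Longrightarrow> dv v \<in> D \<and> v = orb sigma (dv v) \<and> f v = orb sigma (alpha (dv v))"
    and no_return: "\<And>v. v \<in> VC \<Longrightarrow> alpha (dv v) \<notin> dv ` VC"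
  shows "plane_cycle D alpha sigma (dv ` VC) (\<lambda>x. dv (f (orb sigma x)))"
proof -
  define next_out where "next_out x = dv (f (orb sigma x))" for x
  have next_dv: "next_out (dv v) = dv (f v)" if "v \<in> VC" for v
    unfolding next_out_def using dv[OF that] by simp
  have iter: "(next_out ^^ k) (dv v) = dv ((f ^^ k) v) \<and> (f ^^ k) v \<in> VC" if v: "v \<in> VC" for v k
    by (induct k) (use v next_dv f in auto)
  show ?thesis unfolding next_out_def[symmetric]
  proof unfold_locales
    show "dv ` VC \<subseteq> D" "dv ` VC \<noteq> {}" using dv VC by auto
    show "\<And>x. x \<in> dv ` VC \<Longrightarrow> alpha x \<notin> dv ` VC" using no_return
      by blast
    fix x assume "x \<in> dv ` VC"
    then obtain v where v: "v \<in> VC" "x = dv v" by blast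
    show "next_out x \<in> dv ` VC" using next_dv[OF v(1)] f[OF v(1)] v(2) by simp
    have "orb sigma (next_out x) = orb sigma (alpha x)"
      using next_dv[OF v(1)] dv[OF v(1)] dv[OF f[OF v(1)]] v(2) by simp
    thus "alpha x \<in> orb sigma (next_out x)" using orb_self[of "alpha x" sigma] by simp
    fix y assume "y \<in> dv ` VC"
    then obtain w where w: "w \<in> VC" "y = dv w" by blast
    show "orb sigma x = orb sigma y \<Longrightarrow> x = y" using dv[OF v(1)] dv[OF w(1)] v(2) w(2)
      by metis
    obtain n where "w = (f ^^ n) v" using single[OF v(1) w(1)] unfolding orb_def by blast
    thus "y \<in> orb next_out x" using iter[OF v(1), of n] v(2) w(2) orb_iter[of n next_out x]
      by simp
  qed
qed

end

context weakly_labeled_map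
begin

lemma arc_tail_dart:
  assumes c: "c \<le> 1"
    and uw: "(u, w) \<in> colored_arcs D alpha sigma lab c \<union> (colored_arcs D alpha sigma lab (1 - c))\<inverse>"
  shows "\<exists>x\<in>D. u = orb sigma x \<and> w = orb sigma (alpha x) \<and> tail_dart lab sigma alpha c x"
  using uw
proof
  assume "(u, w) \<in> colored_arcs D alpha sigma lab c"
  then obtain d where d: "u = orb sigma (alpha d)" "w = orb sigma d" "d \<in> D" "lab d = lab (sigma d)"
    "lab d = c"
    unfolding colored_arcs_def by blast
  have "tail_dart lab sigma alpha c (alpha d)" unfolding tail_dart_def using d alpha_alpha by simp
  thus ?thesis using d alpha_mem alpha_alpha by (intro bexI[of _ "alpha d"]) auto
next
  assume "(u, w) \<in> (colored_arcs D alpha sigma lab (1 - c))\<inverse>"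
  then obtain d where d: "w = orb sigma (alpha d)" "u = orb sigma d" "d \<in> D" "lab d = lab (sigma d)"
    "lab d = 1 - c"
    unfolding colored_arcs_def by blast
  have "tail_dart lab sigma alpha c d" unfolding tail_dart_def using d by simp
  thus ?thesis using d by blast
qed

lemma acyclic_mixed:
  assumes c: "c \<le> 1"
  shows "acyclic (colored_arcs D alpha sigma lab c \<union> (colored_arcs D alpha sigma lab (1 - c))\<inverse>)"
    (is "acyclic ?R")
proof (rule ccontr)
  assume cyclic: "\<not> acyclic ?R"
  have "Domain ?R \<subseteq> orb sigma ` D" using arc_tail_dart[OF c] by blast
  hence "finite (Domain ?R)" using finite_D finite_subset by blast
  then obtain VC f where VC: "VC \<noteq> {}" and step: "\<forall>v\<in>VC. (v, f v) \<in> ?R \<and> f v \<in> VC"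
    and single: "\<forall>v\<in>VC. \<forall>w\<in>VC. w \<in> orb f v"
    using cycle_of_not_acyclic[OF cyclic] by blast
  have "\<forall>v\<in>VC. \<exists>x. x \<in> D \<and> v = orb sigma x \<and> f v = orb sigma (alpha x) \<and>
      tail_dart lab sigma alpha c x"
  proof
    fix v assume "v \<in> VC"
    thus "\<exists>x. x \<in> D \<and> v = orb sigma x \<and> f v = orb sigma (alpha x) \<and> tail_dart lab sigma alpha c x"
      using arc_tail_dart[OF c, of v "f v"] step by blast
  qed
  hence "\<exists>dv. \<forall>v\<in>VC. dv v \<in> D \<and> v = orb sigma (dv v) \<and> f v = orb sigma (alpha (dv v))
      \<and> tail_dart lab sigma alpha c (dv v)" by (rule bchoice)
  then obtain dv where dv: "\<And>v. v \<in> VC \<Longrightarrow> dv v \<in> D \<and> v = orb sigma (dv v)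
      \<and> f v = orb sigma (alpha (dv v)) \<and> tail_dart lab sigma alpha c (dv v)" by blast
  have "alpha (dv v) \<notin> dv ` VC" if v: "v \<in> VC" for v
  proof
    assume "alpha (dv v) \<in> dv ` VC"
    then obtain w where "w \<in> VC" "alpha (dv v) = dv w" by blast
    thus False using tail_dart_alpha[OF c] dv[OF v] dv[of w] by metis
  qed
  hence "plane_cycle D alpha sigma (dv ` VC) (\<lambda>x. dv (f (orb sigma x)))"
    by (intro plane_cycle_of_vertex_cycle[OF VC]) (use step single dv in auto)
  then interpret labeled_cycle D alpha sigma fo s0 s1 lab "dv ` VC" "\<lambda>x. dv (f (orb sigma x))" c
    by intro_locales (use c dv in \<open>auto simp: labeled_cycle_axioms_def plane_cycle_def\<close>)
  show False by (rule directed_cycle_absurd)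
qed

end

theorem proposition6:
  assumes "plane_map D alpha sigma"
    and "weak_labeling D alpha sigma fo s0 s1 lab"
  shows "acyclic (colored_arcs D alpha sigma lab 0 \<union> (colored_arcs D alpha sigma lab 1)\<inverse>) \<and>
         acyclic (colored_arcs D alpha sigma lab 1 \<union> (colored_arcs D alpha sigma lab 0)\<inverse>)"
proof -
  interpret weakly_labeled_map D alpha sigma fo s0 s1 lab
    using assms
      by (simp add: weakly_labeled_map_def weakly_labeled_map_axioms_def plane_dart_map_def)
  show ?thesis using acyclic_mixed[of 0] acyclic_mixed[of 1] by simp
qed

end
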